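(* Every bigroupoid $\mathcal B$ has a path object: the diagonal morphism $\Delta:\mathcal B\to\mathcal B\times\mathcal B$ factors as $\Delta=\langle S,T\rangle\circ R$ with $R:\mathcal B\to\mathcal P\mathcal B$ a weak equivalence and $\langle S,T\rangle:\mathcal P\mathcal B\to\mathcal B\times\mathcal B$ a fibration.
   Context: A bigroupoid $\mathcal B$ consists of: a set $\mathcal B_0$ of 0-cells; for each $A,B\in\mathcal B_0$ a groupoid $\mathcal B(A,B)$ whose objects are 1-cells and whose arrows are 2-cells; composition functors $*$; identity 1-cells $1_A$; inversion functors $(-)^*$; and natural isomorphisms $\mathbf a:(h*g)*f\Rightarrow h*(g*f)$, $\mathbf l:1_B*f\Rightarrow f$, $\mathbf r:f*1_A\Rightarrow f$, $\mathbf e:f^**f\Rightarrow 1_A$, $\mathbf i:1_B\Rightarrow f*f^*$, such that the pentagon for $\mathbf a$ commutes, $(\mathrm{id}*\mathbf l)\circ\mathbf a=\mathbf r*\mathrm{id}$, and $\mathbf r_f\circ(\mathrm{id}*\mathbf e_f)\circ\mathbf a\circ(\mathbf i_f*\mathrm{id})=\mathbf l_f$. A morphism $(F,\phi):\mathcal A\to\mathcal B$ consists of a function on 0-cells, functors $F_{A,A'}:\mathcal A(A,A')\to\mathcal B(FA,FA')$ and natural isomorphisms $\phi_{g,f}:Fg*Ff\Rightarrow F(g*f)$, $\phi_A:1_{FA}\Rightarrow F1_A$, $\phi_f:(Ff)^*\Rightarrow F(f^* )$ satisfying $F\mathbf a\circ\phi\circ(\phi*\mathrm{id})=\phi\circ(\mathrm{id}*\phi)\circ\mathbf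 a$, $F\mathbf r\circ\phi\circ(\mathrm{id}*\phi_A)=\mathbf r$, $F\mathbf l\circ\phi\circ(\phi_B*\mathrm{id})=\mathbf l$, $F\mathbf e\circ\phi\circ(\phi_f*\mathrm{id})=\phi_A\circ\mathbf e$, $F\mathbf i\circ\phi_B=\phi\circ(\mathrm{id}*\phi_f)\circ\mathbf i$. The product $\mathcal B\times\mathcal B$ is formed componentwise (0-cells, hom-groupoids and all structure taken as products), and $\Delta$ is the strict diagonal morphism. Fibration: (1) for every 0-cell $A'$ of $\mathcal A$ and 1-cell $b:B\to FA'$ there is $a:A\to A'$ with $FA=B$, $Fa=b$; (2) for every 1-cell $a'$ and 2-cell $\beta:b\Rightarrow Fa'$ there is $\alpha:a\Rightarrow a'$ with $Fa=b$, $F\alpha=\beta$. Weak equivalence: every 0-cell $B$ of the codomain admits a 1-cell $B\to FA'$ for some 0-cell $A'$, and each $F_{A,A'}$ is an equivalence of categories. *)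

theory Defs
  imports Main
begin

text \<open>The hom-groupoid B(X,Y) has as objects the 1-cells f in arr1 with src1 f = X, trg1 f = Y,
  and as arrows the 2-cells between such 1-cells.  vcomp is vertical composition
  (vcomp beta alpha = beta o alpha), hcomp1/hcomp2 the composition functor *,
  unit1 the identity 1-cells, inv1/inv2 the inversion functor, and asc, lunit, runit,
  counit_e, unit_i the structure cells a, l, r, e, i.\<close>

record ('o,'a,'c) bigroupoid =
  obj :: "'o set"
  arr1 :: "'a set"
  src1 :: "'a \<Rightarrow> 'o"
  trg1 :: "'a \<Rightarrow> 'o"
  arr2 :: "'c set"
  dom2 :: "'c \<Rightarrow> 'a"
  cod2 :: "'c \<Rightarrow> 'a"
  vcomp :: "'c \<Rightarrow> 'c \<Rightarrow> 'c"
  id2 :: "'a \<Rightarrow> 'c"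
  hcomp1 :: "'a \<Rightarrow> 'a \<Rightarrow> 'a"
  hcomp2 :: "'c \<Rightarrow> 'c \<Rightarrow> 'c"
  unit1 :: "'o \<Rightarrow> 'a"
  inv1 :: "'a \<Rightarrow> 'a"
  inv2 :: "'c \<Rightarrow> 'c"
  asc :: "'a \<Rightarrow> 'a \<Rightarrow> 'a \<Rightarrow> 'c"
  lunit :: "'a \<Rightarrow> 'c"
  runit :: "'a \<Rightarrow> 'c"
  counit_e :: "'a \<Rightarrow> 'c"
  unit_i :: "'a \<Rightarrow> 'c"

definition hom1 :: "('o,'a,'c) bigroupoid \<Rightarrow> 'o \<Rightarrow> 'o \<Rightarrow> 'a \<Rightarrow> bool" where
  "hom1 B X Y f \<longleftrightarrow> f \<in> arr1 B \<and> src1 B f = X \<and> trg1 B f = Y"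

definition cell2 :: "('o,'a,'c) bigroupoid \<Rightarrow> 'a \<Rightarrow> 'a \<Rightarrow> 'c \<Rightarrow> bool" where
  "cell2 B f g \<alpha> \<longleftrightarrow> \<alpha> \<in> arr2 B \<and> dom2 B \<alpha> = f \<and> cod2 B \<alpha> = g"

definition bigroupoid :: "('o,'a,'c) bigroupoid \<Rightarrow> bool" where
  "bigroupoid B \<longleftrightarrow>
    \<comment> \<open>hom-groupoids\<close>
    (\<forall>f\<in>arr1 B. src1 B f \<in> obj B \<and> trg1 B f \<in> obj B) \<and>
    (\<forall>\<alpha>\<in>arr2 B. dom2 B \<alpha> \<in> arr1 B \<and> cod2 B \<alpha> \<in> arr1 B \<and>
        src1 B (dom2 B \<alpha>) = src1 B (cod2 B \<alpha>) \<and> trg1 B (dom2 B \<alpha>) = trg1 B (cod2 B \<alpha>)) \<and>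
    (\<forall>f\<in>arr1 B. cell2 B f f (id2 B f)) \<and>
    (\<forall>\<alpha>\<in>arr2 B. \<forall>\<beta>\<in>arr2 B. cod2 B \<alpha> = dom2 B \<beta> \<longrightarrow>
        cell2 B (dom2 B \<alpha>) (cod2 B \<beta>) (vcomp B \<beta> \<alpha>)) \<and>
    (\<forall>\<alpha>\<in>arr2 B. vcomp B \<alpha> (id2 B (dom2 B \<alpha>)) = \<alpha> \<and> vcomp B (id2 B (cod2 B \<alpha>)) \<alpha> = \<alpha>) \<and>
    (\<forall>\<alpha>\<in>arr2 B. \<forall>\<beta>\<in>arr2 B. \<forall>\<gamma>\<in>arr2 B. cod2 B \<alpha> = dom2 B \<beta> \<and> cod2 B \<beta> = dom2 B \<gamma> \<longrightarrow>
        vcomp B \<gamma> (vcomp B \<beta> \<alpha>) = vcomp B (vcomp B \<gamma> \<beta>) \<alpha>) \<and>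
    (\<forall>\<alpha>\<in>arr2 B. \<exists>\<beta>\<in>arr2 B. dom2 B \<beta> = cod2 B \<alpha> \<and> cod2 B \<beta> = dom2 B \<alpha> \<and>
        vcomp B \<beta> \<alpha> = id2 B (dom2 B \<alpha>) \<and> vcomp B \<alpha> \<beta> = id2 B (cod2 B \<alpha>)) \<and>
    \<comment> \<open>composition functor\<close>
    (\<forall>f\<in>arr1 B. \<forall>g\<in>arr1 B. trg1 B f = src1 B g \<longrightarrow>
        hom1 B (src1 B f) (trg1 B g) (hcomp1 B g f)) \<and>
    (\<forall>\<alpha>\<in>arr2 B. \<forall>\<beta>\<in>arr2 B. trg1 B (dom2 B \<alpha>) = src1 B (dom2 B \<beta>) \<longrightarrow>
        cell2 B (hcomp1 B (dom2 B \<beta>) (dom2 B \<alpha>)) (hcomp1 B (cod2 B \<beta>) (cod2 B \<alpha>)) (hcomp2 B \<beta> \<alpha>)) \<and>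
    (\<forall>f\<in>arr1 B. \<forall>g\<in>arr1 B. trg1 B f = src1 B g \<longrightarrow>
        hcomp2 B (id2 B g) (id2 B f) = id2 B (hcomp1 B g f)) \<and>
    (\<forall>\<alpha>\<in>arr2 B. \<forall>\<alpha>'\<in>arr2 B. \<forall>\<beta>\<in>arr2 B. \<forall>\<beta>'\<in>arr2 B.
        cod2 B \<alpha> = dom2 B \<alpha>' \<and> cod2 B \<beta> = dom2 B \<beta>' \<and> trg1 B (dom2 B \<alpha>) = src1 B (dom2 B \<beta>) \<longrightarrow>
        hcomp2 B (vcomp B \<beta>' \<beta>) (vcomp B \<alpha>' \<alpha>) = vcomp B (hcomp2 B \<beta>' \<alpha>') (hcomp2 B \<beta> \<alpha>)) \<and>
    \<comment> \<open>identity 1-cells\<close>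
    (\<forall>X\<in>obj B. hom1 B X X (unit1 B X)) \<and>
    \<comment> \<open>inversion functor\<close>
    (\<forall>f\<in>arr1 B. hom1 B (trg1 B f) (src1 B f) (inv1 B f)) \<and>
    (\<forall>\<alpha>\<in>arr2 B. cell2 B (inv1 B (dom2 B \<alpha>)) (inv1 B (cod2 B \<alpha>)) (inv2 B \<alpha>)) \<and>
    (\<forall>f\<in>arr1 B. inv2 B (id2 B f) = id2 B (inv1 B f)) \<and>
    (\<forall>\<alpha>\<in>arr2 B. \<forall>\<beta>\<in>arr2 B. cod2 B \<alpha> = dom2 B \<beta> \<longrightarrow>
        inv2 B (vcomp B \<beta> \<alpha>) = vcomp B (inv2 B \<beta>) (inv2 B \<alpha>)) \<and>
    \<comment> \<open>associator a : (h*g)*f => h*(g*f), natural\<close>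
    (\<forall>f\<in>arr1 B. \<forall>g\<in>arr1 B. \<forall>h\<in>arr1 B. trg1 B f = src1 B g \<and> trg1 B g = src1 B h \<longrightarrow>
        cell2 B (hcomp1 B (hcomp1 B h g) f) (hcomp1 B h (hcomp1 B g f)) (asc B h g f)) \<and>
    (\<forall>\<alpha>\<in>arr2 B. \<forall>\<beta>\<in>arr2 B. \<forall>\<gamma>\<in>arr2 B.
        trg1 B (dom2 B \<alpha>) = src1 B (dom2 B \<beta>) \<and> trg1 B (dom2 B \<beta>) = src1 B (dom2 B \<gamma>) \<longrightarrow>
        vcomp B (asc B (cod2 B \<gamma>) (cod2 B \<beta>) (cod2 B \<alpha>)) (hcomp2 B (hcomp2 B \<gamma> \<beta>) \<alpha>) =
        vcomp B (hcomp2 B \<gamma> (hcomp2 B \<beta> \<alpha>)) (asc B (dom2 B \<gamma>) (dom2 B \<beta>) (dom2 B \<alpha>))) \<and>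
    \<comment> \<open>left unitor l : 1_B * f => f, natural\<close>
    (\<forall>f\<in>arr1 B. cell2 B (hcomp1 B (unit1 B (trg1 B f)) f) f (lunit B f)) \<and>
    (\<forall>\<alpha>\<in>arr2 B. vcomp B \<alpha> (lunit B (dom2 B \<alpha>)) =
        vcomp B (lunit B (cod2 B \<alpha>)) (hcomp2 B (id2 B (unit1 B (trg1 B (dom2 B \<alpha>)))) \<alpha>)) \<and>
    \<comment> \<open>right unitor r : f * 1_A => f, natural\<close>
    (\<forall>f\<in>arr1 B. cell2 B (hcomp1 B f (unit1 B (src1 B f))) f (runit B f)) \<and>
    (\<forall>\<alpha>\<in>arr2 B. vcomp B \<alpha> (runit B (dom2 B \<alpha>)) =
        vcomp B (runit B (cod2 B \<alpha>)) (hcomp2 B \<alpha> (id2 B (unit1 B (src1 B (dom2 B \<alpha>)))))) \<and>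
    \<comment> \<open>e : f^* * f => 1_A, natural\<close>
    (\<forall>f\<in>arr1 B. cell2 B (hcomp1 B (inv1 B f) f) (unit1 B (src1 B f)) (counit_e B f)) \<and>
    (\<forall>\<alpha>\<in>arr2 B. vcomp B (counit_e B (cod2 B \<alpha>)) (hcomp2 B (inv2 B \<alpha>) \<alpha>) = counit_e B (dom2 B \<alpha>)) \<and>
    \<comment> \<open>i : 1_B => f * f^*, natural\<close>
    (\<forall>f\<in>arr1 B. cell2 B (unit1 B (trg1 B f)) (hcomp1 B f (inv1 B f)) (unit_i B f)) \<and>
    (\<forall>\<alpha>\<in>arr2 B. vcomp B (hcomp2 B \<alpha> (inv2 B \<alpha>)) (unit_i B (dom2 B \<alpha>)) = unit_i B (cod2 B \<alpha>)) \<and>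
    \<comment> \<open>pentagon\<close>
    (\<forall>f\<in>arr1 B. \<forall>g\<in>arr1 B. \<forall>h\<in>arr1 B. \<forall>k\<in>arr1 B.
        trg1 B f = src1 B g \<and> trg1 B g = src1 B h \<and> trg1 B h = src1 B k \<longrightarrow>
        vcomp B (asc B k h (hcomp1 B g f)) (asc B (hcomp1 B k h) g f) =
        vcomp B (hcomp2 B (id2 B k) (asc B h g f))
          (vcomp B (asc B k (hcomp1 B h g) f) (hcomp2 B (asc B k h g) (id2 B f)))) \<and>
    \<comment> \<open>(id * l) o a = r * id\<close>
    (\<forall>f\<in>arr1 B. \<forall>g\<in>arr1 B. trg1 B f = src1 B g \<longrightarrow>
        vcomp B (hcomp2 B (id2 B g) (lunit B f)) (asc B g (unit1 B (trg1 B f)) f) =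
        hcomp2 B (runit B g) (id2 B f)) \<and>
    \<comment> \<open>r_f o (id * e_f) o a o (i_f * id) = l_f\<close>
    (\<forall>f\<in>arr1 B.
        vcomp B (runit B f) (vcomp B (hcomp2 B (id2 B f) (counit_e B f))
          (vcomp B (asc B f (inv1 B f) f) (hcomp2 B (unit_i B f) (id2 B f)))) = lunit B f)"

record ('o1,'a1,'c1,'o2,'a2,'c2) bgmorph =
  fobj :: "'o1 \<Rightarrow> 'o2"
  fone :: "'a1 \<Rightarrow> 'a2"
  ftwo :: "'c1 \<Rightarrow> 'c2"
  phic :: "'a1 \<Rightarrow> 'a1 \<Rightarrow> 'c2"   \<comment> \<open>phi_{g,f} : Fg * Ff => F(g*f)\<close>
  phiu :: "'o1 \<Rightarrow> 'c2"            \<comment> \<open>phi_A : 1_{FA} => F 1_A\<close>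
  phii :: "'a1 \<Rightarrow> 'c2"            \<comment> \<open>phi_f : (Ff)^* => F(f^*)\<close>

definition bgmorphism ::
  "('o1,'a1,'c1) bigroupoid \<Rightarrow> ('o2,'a2,'c2) bigroupoid \<Rightarrow> ('o1,'a1,'c1,'o2,'a2,'c2) bgmorph \<Rightarrow> bool" where
  "bgmorphism A B F \<longleftrightarrow>
    (\<forall>X\<in>obj A. fobj F X \<in> obj B) \<and>
    (\<forall>f\<in>arr1 A. hom1 B (fobj F (src1 A f)) (fobj F (trg1 A f)) (fone F f)) \<and>
    (\<forall>\<alpha>\<in>arr2 A. cell2 B (fone F (dom2 A \<alpha>)) (fone F (cod2 A \<alpha>)) (ftwo F \<alpha>)) \<and>
    (\<forall>f\<in>arr1 A. ftwo F (id2 A f) = id2 B (fone F f)) \<and>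
    (\<forall>\<alpha>\<in>arr2 A. \<forall>\<beta>\<in>arr2 A. cod2 A \<alpha> = dom2 A \<beta> \<longrightarrow>
        ftwo F (vcomp A \<beta> \<alpha>) = vcomp B (ftwo F \<beta>) (ftwo F \<alpha>)) \<and>
    \<comment> \<open>phi_{g,f}, natural\<close>
    (\<forall>f\<in>arr1 A. \<forall>g\<in>arr1 A. trg1 A f = src1 A g \<longrightarrow>
        cell2 B (hcomp1 B (fone F g) (fone F f)) (fone F (hcomp1 A g f)) (phic F g f)) \<and>
    (\<forall>\<alpha>\<in>arr2 A. \<forall>\<beta>\<in>arr2 A. trg1 A (dom2 A \<alpha>) = src1 A (dom2 A \<beta>) \<longrightarrow>
        vcomp B (ftwo F (hcomp2 A \<beta> \<alpha>)) (phic F (dom2 A \<beta>) (dom2 A \<alpha>)) =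
        vcomp B (phic F (cod2 A \<beta>) (cod2 A \<alpha>)) (hcomp2 B (ftwo F \<beta>) (ftwo F \<alpha>))) \<and>
    \<comment> \<open>phi_A\<close>
    (\<forall>X\<in>obj A. cell2 B (unit1 B (fobj F X)) (fone F (unit1 A X)) (phiu F X)) \<and>
    \<comment> \<open>phi_f, natural\<close>
    (\<forall>f\<in>arr1 A. cell2 B (inv1 B (fone F f)) (fone F (inv1 A f)) (phii F f)) \<and>
    (\<forall>\<alpha>\<in>arr2 A. vcomp B (ftwo F (inv2 A \<alpha>)) (phii F (dom2 A \<alpha>)) =
        vcomp B (phii F (cod2 A \<alpha>)) (inv2 B (ftwo F \<alpha>))) \<and>
    \<comment> \<open>F a o phi o (phi * id) = phi o (id * phi) o a\<close>
    (\<forall>f\<in>arr1 A. \<forall>g\<in>arr1 A. \<forall>h\<in>arr1 A. trg1 A f = src1 A g \<and> trg1 A g = src1 A h \<longrightarrow>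
        vcomp B (ftwo F (asc A h g f))
          (vcomp B (phic F (hcomp1 A h g) f) (hcomp2 B (phic F h g) (id2 B (fone F f)))) =
        vcomp B (phic F h (hcomp1 A g f))
          (vcomp B (hcomp2 B (id2 B (fone F h)) (phic F g f)) (asc B (fone F h) (fone F g) (fone F f)))) \<and>
    \<comment> \<open>F r o phi o (id * phi_A) = r\<close>
    (\<forall>f\<in>arr1 A.
        vcomp B (ftwo F (runit A f))
          (vcomp B (phic F f (unit1 A (src1 A f))) (hcomp2 B (id2 B (fone F f)) (phiu F (src1 A f)))) =
        runit B (fone F f)) \<and>
    \<comment> \<open>F l o phi o (phi_B * id) = l\<close>
    (\<forall>f\<in>arr1 A.
        vcomp B (ftwo F (lunit A f))
          (vcomp B (phic F (unit1 A (trg1 A f)) f) (hcomp2 B (phiu F (trg1 A f)) (id2 B (fone F f)))) =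
        lunit B (fone F f)) \<and>
    \<comment> \<open>F e o phi o (phi_f * id) = phi_A o e\<close>
    (\<forall>f\<in>arr1 A.
        vcomp B (ftwo F (counit_e A f))
          (vcomp B (phic F (inv1 A f) f) (hcomp2 B (phii F f) (id2 B (fone F f)))) =
        vcomp B (phiu F (src1 A f)) (counit_e B (fone F f))) \<and>
    \<comment> \<open>F i o phi_B = phi o (id * phi_f) o i\<close>
    (\<forall>f\<in>arr1 A.
        vcomp B (ftwo F (unit_i A f)) (phiu F (trg1 A f)) =
        vcomp B (phic F f (inv1 A f))
          (vcomp B (hcomp2 B (id2 B (fone F f)) (phii F f)) (unit_i B (fone F f))))"

text \<open>Composite G o F of morphisms F : A -> B and G : B -> C (C is the codomain of G).\<close>
definition morph_comp ::
  "('o3,'a3,'c3) bigroupoid \<Rightarrow> ('o2,'a2,'c2,'o3,'a3,'c3) bgmorph \<Rightarrow>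
   ('o1,'a1,'c1,'o2,'a2,'c2) bgmorph \<Rightarrow> ('o1,'a1,'c1,'o3,'a3,'c3) bgmorph" where
  "morph_comp C G F =
    \<lparr> fobj = fobj G \<circ> fobj F, fone = fone G \<circ> fone F, ftwo = ftwo G \<circ> ftwo F,
      phic = (\<lambda>g f. vcomp C (ftwo G (phic F g f)) (phic G (fone F g) (fone F f))),
      phiu = (\<lambda>X. vcomp C (ftwo G (phiu F X)) (phiu G (fobj F X))),
      phii = (\<lambda>f. vcomp C (ftwo G (phii F f)) (phii G (fone F f))) \<rparr>"

definition morph_eq ::
  "('o1,'a1,'c1) bigroupoid \<Rightarrow> ('o1,'a1,'c1,'o2,'a2,'c2) bgmorph \<Rightarrow>
   ('o1,'a1,'c1,'o2,'a2,'c2) bgmorph \<Rightarrow> bool" where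
  "morph_eq A F G \<longleftrightarrow>
    (\<forall>X\<in>obj A. fobj F X = fobj G X) \<and>
    (\<forall>f\<in>arr1 A. fone F f = fone G f) \<and>
    (\<forall>\<alpha>\<in>arr2 A. ftwo F \<alpha> = ftwo G \<alpha>) \<and>
    (\<forall>f\<in>arr1 A. \<forall>g\<in>arr1 A. trg1 A f = src1 A g \<longrightarrow> phic F g f = phic G g f) \<and>
    (\<forall>X\<in>obj A. phiu F X = phiu G X) \<and>
    (\<forall>f\<in>arr1 A. phii F f = phii G f)"

definition prod_bg ::
  "('o1,'a1,'c1) bigroupoid \<Rightarrow> ('o2,'a2,'c2) bigroupoid \<Rightarrow> ('o1\<times>'o2,'a1\<times>'a2,'c1\<times>'c2) bigroupoid" where
  "prod_bg A B =
    \<lparr> obj = obj A \<times> obj B,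
      arr1 = arr1 A \<times> arr1 B,
      src1 = (\<lambda>f. (src1 A (fst f), src1 B (snd f))),
      trg1 = (\<lambda>f. (trg1 A (fst f), trg1 B (snd f))),
      arr2 = arr2 A \<times> arr2 B,
      dom2 = (\<lambda>\<alpha>. (dom2 A (fst \<alpha>), dom2 B (snd \<alpha>))),
      cod2 = (\<lambda>\<alpha>. (cod2 A (fst \<alpha>), cod2 B (snd \<alpha>))),
      vcomp = (\<lambda>\<beta> \<alpha>. (vcomp A (fst \<beta>) (fst \<alpha>), vcomp B (snd \<beta>) (snd \<alpha>))),
      id2 = (\<lambda>f. (id2 A (fst f), id2 B (snd f))),
      hcomp1 = (\<lambda>g f. (hcomp1 A (fst g) (fst f), hcomp1 B (snd g) (snd f))),
      hcomp2 = (\<lambda>\<beta> \<alpha>. (hcomp2 A (fst \<beta>) (fst \<alpha>), hcomp2 B (snd \<beta>) (snd \<alpha>))),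
      unit1 = (\<lambda>X. (unit1 A (fst X), unit1 B (snd X))),
      inv1 = (\<lambda>f. (inv1 A (fst f), inv1 B (snd f))),
      inv2 = (\<lambda>\<alpha>. (inv2 A (fst \<alpha>), inv2 B (snd \<alpha>))),
      asc = (\<lambda>h g f. (asc A (fst h) (fst g) (fst f), asc B (snd h) (snd g) (snd f))),
      lunit = (\<lambda>f. (lunit A (fst f), lunit B (snd f))),
      runit = (\<lambda>f. (runit A (fst f), runit B (snd f))),
      counit_e = (\<lambda>f. (counit_e A (fst f), counit_e B (snd f))),
      unit_i = (\<lambda>f. (unit_i A (fst f), unit_i B (snd f))) \<rparr>"

definition diag :: "('o,'a,'c) bigroupoid \<Rightarrow> ('o,'a,'c,'o\<times>'o,'a\<times>'a,'c\<times>'c) bgmorph" where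
  "diag B =
    \<lparr> fobj = (\<lambda>X. (X, X)), fone = (\<lambda>f. (f, f)), ftwo = (\<lambda>\<alpha>. (\<alpha>, \<alpha>)),
      phic = (\<lambda>g f. (id2 B (hcomp1 B g f), id2 B (hcomp1 B g f))),
      phiu = (\<lambda>X. (id2 B (unit1 B X), id2 B (unit1 B X))),
      phii = (\<lambda>f. (id2 B (inv1 B f), id2 B (inv1 B f))) \<rparr>"

definition fibration ::
  "('o1,'a1,'c1) bigroupoid \<Rightarrow> ('o2,'a2,'c2) bigroupoid \<Rightarrow> ('o1,'a1,'c1,'o2,'a2,'c2) bgmorph \<Rightarrow> bool" where
  "fibration A B F \<longleftrightarrow>
    (\<forall>X'\<in>obj A. \<forall>b\<in>arr1 B. trg1 B b = fobj F X' \<longrightarrow>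
        (\<exists>a\<in>arr1 A. trg1 A a = X' \<and> fobj F (src1 A a) = src1 B b \<and> fone F a = b)) \<and>
    (\<forall>a'\<in>arr1 A. \<forall>\<beta>\<in>arr2 B. cod2 B \<beta> = fone F a' \<longrightarrow>
        (\<exists>\<alpha>\<in>arr2 A. cod2 A \<alpha> = a' \<and> fone F (dom2 A \<alpha>) = dom2 B \<beta> \<and> ftwo F \<alpha> = \<beta>))"

text \<open>The functor F_{X,Y} : A(X,Y) -> B(FX,FY) is an equivalence of categories: there are a
  functor G : B(FX,FY) -> A(X,Y) and natural isomorphisms eta : Id => G F, eps : F G => Id
  (in a groupoid every natural transformation is a natural isomorphism).\<close>
definition hom_equivalence ::
  "('o1,'a1,'c1) bigroupoid \<Rightarrow> ('o2,'a2,'c2) bigroupoid \<Rightarrow> ('o1,'a1,'c1,'o2,'a2,'c2) bgmorph \<Rightarrow>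
   'o1 \<Rightarrow> 'o1 \<Rightarrow> bool" where
  "hom_equivalence A B F X Y \<longleftrightarrow>
    (\<exists>(G1 :: 'a2 \<Rightarrow> 'a1) (G2 :: 'c2 \<Rightarrow> 'c1) (\<eta> :: 'a1 \<Rightarrow> 'c1) (\<epsilon> :: 'a2 \<Rightarrow> 'c2).
      (\<forall>b. hom1 B (fobj F X) (fobj F Y) b \<longrightarrow> hom1 A X Y (G1 b)) \<and>
      (\<forall>\<beta>\<in>arr2 B. hom1 B (fobj F X) (fobj F Y) (dom2 B \<beta>) \<longrightarrow>
          cell2 A (G1 (dom2 B \<beta>)) (G1 (cod2 B \<beta>)) (G2 \<beta>)) \<and>
      (\<forall>b. hom1 B (fobj F X) (fobj F Y) b \<longrightarrow> G2 (id2 B b) = id2 A (G1 b)) \<and>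
      (\<forall>\<beta>\<in>arr2 B. \<forall>\<beta>'\<in>arr2 B. hom1 B (fobj F X) (fobj F Y) (dom2 B \<beta>) \<and> cod2 B \<beta> = dom2 B \<beta>' \<longrightarrow>
          G2 (vcomp B \<beta>' \<beta>) = vcomp A (G2 \<beta>') (G2 \<beta>)) \<and>
      (\<forall>a. hom1 A X Y a \<longrightarrow> cell2 A a (G1 (fone F a)) (\<eta> a)) \<and>
      (\<forall>\<alpha>\<in>arr2 A. hom1 A X Y (dom2 A \<alpha>) \<longrightarrow>
          vcomp A (G2 (ftwo F \<alpha>)) (\<eta> (dom2 A \<alpha>)) = vcomp A (\<eta> (cod2 A \<alpha>)) \<alpha>) \<and>
      (\<forall>b. hom1 B (fobj F X) (fobj F Y) b \<longrightarrow> cell2 B (fone F (G1 b)) b (\<epsilon> b)) \<and>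
      (\<forall>\<beta>\<in>arr2 B. hom1 B (fobj F X) (fobj F Y) (dom2 B \<beta>) \<longrightarrow>
          vcomp B \<beta> (\<epsilon> (dom2 B \<beta>)) = vcomp B (\<epsilon> (cod2 B \<beta>)) (ftwo F (G2 \<beta>))))"

definition weak_equivalence ::
  "('o1,'a1,'c1) bigroupoid \<Rightarrow> ('o2,'a2,'c2) bigroupoid \<Rightarrow> ('o1,'a1,'c1,'o2,'a2,'c2) bgmorph \<Rightarrow> bool" where
  "weak_equivalence A B F \<longleftrightarrow>
    (\<forall>Y\<in>obj B. \<exists>X'\<in>obj A. \<exists>f\<in>arr1 B. src1 B f = Y \<and> trg1 B f = fobj F X') \<and>
    (\<forall>X\<in>obj A. \<forall>Y\<in>obj A. hom_equivalence A B F X Y)"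

text \<open>Carrier type used for all cells of the path object: finite words of cells of B.\<close>
type_synonym ('o,'a,'c) pcell = "('o + 'a + 'c) list"

end

theory Submission
  imports Defs
begin

text \<open>
  The path object \<open>PB\<close> has as 0-cells the 1-cells \<open>f\<close> of \<open>B\<close>, as 1-cells \<open>f \<Rightarrow> f'\<close> the
  squares \<open>(a, b, \<sigma>)\<close> with \<open>\<sigma> : f' * a \<Rightarrow> b * f\<close>, and as 2-cells \<open>(a, b, \<sigma>) \<Rightarrow> (a', b', \<sigma>')\<close>
  the pairs \<open>(\<alpha> : a \<Rightarrow> a', \<beta> : b \<Rightarrow> b')\<close> with \<open>\<sigma>' \<circ> (f' * \<alpha>) = (\<beta> * f) \<circ> \<sigma>\<close>.
  Squares are composed by pasting, and every structure 2-cell of \<open>PB\<close> is the pair of the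
  corresponding structure cells of \<open>B\<close>; the coherence axioms of \<open>B\<close> are exactly what makes
  these pairs compatible with the pasted squares.  The inverse of a square \<open>(a, b, \<sigma>)\<close> is
  found by cancelling a whiskering by \<open>b\<close>, which is a bijection on 2-cells because \<open>b\<close> has
  the weak inverse \<open>b\<^sup>*\<close>.

  \<open>R\<close> sends \<open>f\<close> to the square \<open>(f, f, r\<inverse> \<circ> l)\<close> between identities and \<open>\<langle>S,T\<rangle>\<close> projects a
  square to \<open>(a, b)\<close>; both have identity comparison cells on the relevant components, so
  \<open>\<langle>S,T\<rangle> \<circ> R = \<Delta>\<close> holds on the nose.  \<open>\<langle>S,T\<rangle>\<close> is a fibration since a pair \<open>(b\<^sub>1, b\<^sub>2)\<close>
  ending at \<open>f'\<close> is the boundary of a square starting at \<open>b\<^sub>2\<^sup>* * (f' * b\<^sub>1)\<close>, and a pair of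
  2-cells into a square conjugates it into a square on their domains.  \<open>R\<close> is a weak
  equivalence: each \<open>f\<close> is joined to an identity by a square with sides \<open>1\<close> and \<open>f\<^sup>*\<close>, and
  on \<open>PB(1\<^sub>X, 1\<^sub>Y)\<close> the projection to \<open>a\<close> is inverse to \<open>R\<close> up to the 2-cell
  \<open>a \<Rightarrow> b\<close> read off from \<open>\<sigma>\<close>.
\<close>

lemma prod_bg_simps[simp]:
  "obj (prod_bg A C) = obj A \<times> obj C" "arr1 (prod_bg A C) = arr1 A \<times> arr1 C"
  "arr2 (prod_bg A C) = arr2 A \<times> arr2 C"
  "src1 (prod_bg A C) = (\<lambda>f. (src1 A (fst f), src1 C (snd f)))"
  "trg1 (prod_bg A C) = (\<lambda>f. (trg1 A (fst f), trg1 C (snd f)))"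
  "dom2 (prod_bg A C) = (\<lambda>x. (dom2 A (fst x), dom2 C (snd x)))"
  "cod2 (prod_bg A C) = (\<lambda>x. (cod2 A (fst x), cod2 C (snd x)))"
  "vcomp (prod_bg A C) = (\<lambda>y x. (vcomp A (fst y) (fst x), vcomp C (snd y) (snd x)))"
  "id2 (prod_bg A C) = (\<lambda>f. (id2 A (fst f), id2 C (snd f)))"
  "hcomp1 (prod_bg A C) = (\<lambda>g f. (hcomp1 A (fst g) (fst f), hcomp1 C (snd g) (snd f)))"
  "hcomp2 (prod_bg A C) = (\<lambda>y x. (hcomp2 A (fst y) (fst x), hcomp2 C (snd y) (snd x)))"
  "unit1 (prod_bg A C) = (\<lambda>X. (unit1 A (fst X), unit1 C (snd X)))"
  "inv1 (prod_bg A C) = (\<lambda>f. (inv1 A (fst f), inv1 C (snd f)))"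
  "inv2 (prod_bg A C) = (\<lambda>x. (inv2 A (fst x), inv2 C (snd x)))"
  "asc (prod_bg A C) = (\<lambda>h g f. (asc A (fst h) (fst g) (fst f), asc C (snd h) (snd g) (snd f)))"
  "lunit (prod_bg A C) = (\<lambda>f. (lunit A (fst f), lunit C (snd f)))"
  "runit (prod_bg A C) = (\<lambda>f. (runit A (fst f), runit C (snd f)))"
  "counit_e (prod_bg A C) = (\<lambda>f. (counit_e A (fst f), counit_e C (snd f)))"
  "unit_i (prod_bg A C) = (\<lambda>f. (unit_i A (fst f), unit_i C (snd f)))"
  unfolding prod_bg_def by simp_all

section \<open>Cells of the path object as words\<close>

text \<open>
  All cells of \<open>PB\<close> live in the type \<open>pcell\<close> of words over the cells of \<open>B\<close>: a square
  \<open>(a, b, \<sigma>) : f \<Rightarrow> f'\<close> is the word \<open>[f, f', a, b, \<sigma>]\<close>, a 2-cell \<open>(\<alpha>, \<beta>)\<close> between the squares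
  \<open>(a, b, \<sigma>)\<close> and \<open>(a', b', \<sigma>')\<close> is \<open>[f, f', a, b, \<sigma>, a', b', \<sigma>', \<alpha>, \<beta>]\<close>, and the 0-cell \<open>f\<close> is \<open>[f]\<close>.
\<close>

abbreviation In1 :: "'a \<Rightarrow> 'o + 'a + 'c" where "In1 x \<equiv> Inr (Inl x)"
abbreviation In2 :: "'c \<Rightarrow> 'o + 'a + 'c" where "In2 x \<equiv> Inr (Inr x)"

fun out1 :: "'o + 'a + 'c \<Rightarrow> 'a" where "out1 (Inr (Inl x)) = x" | "out1 _ = undefined"

fun out2 :: "'o + 'a + 'c \<Rightarrow> 'c" where "out2 (Inr (Inr x)) = x" | "out2 _ = undefined"

definition Sq :: "'a \<Rightarrow> 'a \<Rightarrow> 'a \<Rightarrow> 'a \<Rightarrow> 'c \<Rightarrow> ('o,'a,'c) pcell" where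
  "Sq f f' a b s = [In1 f, In1 f', In1 a, In1 b, In2 s]"

definition SqMap ::
  "'a \<Rightarrow> 'a \<Rightarrow> 'a \<Rightarrow> 'a \<Rightarrow> 'c \<Rightarrow> 'a \<Rightarrow> 'a \<Rightarrow> 'c \<Rightarrow> 'c \<Rightarrow> 'c \<Rightarrow> ('o,'a,'c) pcell" where
  "SqMap f f' a b s a' b' s' al be = [In1 f, In1 f', In1 a, In1 b, In2 s, In1 a', In1 b', In2 s', In2 al, In2 be]"

definition pF :: "('o,'a,'c) pcell \<Rightarrow> 'a" where "pF u = out1 (u ! 0)"
definition pF' :: "('o,'a,'c) pcell \<Rightarrow> 'a" where "pF' u = out1 (u ! 1)"
definition pA :: "('o,'a,'c) pcell \<Rightarrow> 'a" where "pA u = out1 (u ! 2)"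
definition pB :: "('o,'a,'c) pcell \<Rightarrow> 'a" where "pB u = out1 (u ! 3)"
definition pS :: "('o,'a,'c) pcell \<Rightarrow> 'c" where "pS u = out2 (u ! 4)"
definition pA2 :: "('o,'a,'c) pcell \<Rightarrow> 'a" where "pA2 u = out1 (u ! 5)"
definition pB2 :: "('o,'a,'c) pcell \<Rightarrow> 'a" where "pB2 u = out1 (u ! 6)"
definition pS2 :: "('o,'a,'c) pcell \<Rightarrow> 'c" where "pS2 u = out2 (u ! 7)"
definition pAl :: "('o,'a,'c) pcell \<Rightarrow> 'c" where "pAl u = out2 (u ! 8)"
definition pBe :: "('o,'a,'c) pcell \<Rightarrow> 'c" where "pBe u = out2 (u ! 9)"

lemmas pcell_selectors = pF_def pF'_def pA_def pB_def pS_def pA2_def pB2_def pS2_def pAl_def pBe_def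

lemma pF_obj[simp]: "pF [In1 f] = f"
  unfolding pF_def by simp

lemma Sq_inject[simp]: "Sq f f' a b s = Sq g g' c d t \<longleftrightarrow> f = g \<and> f' = g' \<and> a = c \<and> b = d \<and> s = t"
  unfolding Sq_def by simp

lemma SqMap_inject[simp]:
  "SqMap f f' a b s a' b' s' al be = SqMap g g' c d t c' d' t' al2 be2 \<longleftrightarrow>
   f = g \<and> f' = g' \<and> a = c \<and> b = d \<and> s = t \<and> a' = c' \<and> b' = d' \<and> s' = t' \<and> al = al2 \<and> be = be2"
  unfolding SqMap_def by simp

lemma Sq_sel[simp]:
  "pF (Sq f f' a b s) = f" "pF' (Sq f f' a b s) = f'" "pA (Sq f f' a b s) = a" "pB (Sq f f' a b s) = b"
  "pS (Sq f f' a b s) = s"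
  unfolding Sq_def pcell_selectors by simp_all

lemma SqMap_sel[simp]:
  "pF (SqMap f f' a b s a' b' s' al be) = f" "pF' (SqMap f f' a b s a' b' s' al be) = f'"
  "pA (SqMap f f' a b s a' b' s' al be) = a" "pB (SqMap f f' a b s a' b' s' al be) = b"
  "pS (SqMap f f' a b s a' b' s' al be) = s" "pA2 (SqMap f f' a b s a' b' s' al be) = a'"
  "pB2 (SqMap f f' a b s a' b' s' al be) = b'" "pS2 (SqMap f f' a b s a' b' s' al be) = s'"
  "pAl (SqMap f f' a b s a' b' s' al be) = al" "pBe (SqMap f f' a b s a' b' s' al be) = be"
  unfolding SqMap_def pcell_selectors by simp_all

definition sqmap_dom :: "('o,'a,'c) pcell \<Rightarrow> ('o,'a,'c) pcell" where
  "sqmap_dom w = Sq (pF w) (pF' w) (pA w) (pB w) (pS w)"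

definition sqmap_cod :: "('o,'a,'c) pcell \<Rightarrow> ('o,'a,'c) pcell" where
  "sqmap_cod w = Sq (pF w) (pF' w) (pA2 w) (pB2 w) (pS2 w)"

definition sqmap_between :: "('o,'a,'c) pcell \<Rightarrow> ('o,'a,'c) pcell \<Rightarrow> 'c \<Rightarrow> 'c \<Rightarrow> ('o,'a,'c) pcell" where
  "sqmap_between u v al be = SqMap (pF u) (pF' u) (pA u) (pB u) (pS u) (pA v) (pB v) (pS v) al be"

lemma sqmap_dom_SqMap[simp]: "sqmap_dom (SqMap f f' a b s a' b' s' al be) = Sq f f' a b s"
  unfolding sqmap_dom_def by simp

lemma sqmap_cod_SqMap[simp]: "sqmap_cod (SqMap f f' a b s a' b' s' al be) = Sq f f' a' b' s'"
  unfolding sqmap_cod_def by simp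

lemma sqmap_between_Sq[simp]:
  "sqmap_between (Sq f f' a b s) (Sq g g' a' b' s') al be = SqMap f f' a b s a' b' s' al be"
  unfolding sqmap_between_def by simp

section \<open>Calculus of 2-cells in a bigroupoid\<close>

locale bigroupoid_calculus =
  fixes B :: "('o,'a,'c) bigroupoid"
  assumes bigroupoid: "bigroupoid B"
begin

abbreviation A1 where "A1 \<equiv> arr1 B"
abbreviation A2 where "A2 \<equiv> arr2 B"
abbreviation dm where "dm \<equiv> dom2 B"
abbreviation cd where "cd \<equiv> cod2 B"
abbreviation sr where "sr \<equiv> src1 B"
abbreviation tg where "tg \<equiv> trg1 B"
abbreviation vc (infixr "\<cdot>" 55) where "x \<cdot> y \<equiv> vcomp B x y"
abbreviation hc (infixr "\<star>" 57) where "x \<star> y \<equiv> hcomp2 B x y"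
abbreviation h1 (infixr "\<diamond>" 58) where "x \<diamond> y \<equiv> hcomp1 B x y"
abbreviation I where "I \<equiv> id2 B"
abbreviation wl (infixr "\<lhd>" 57) where "g \<lhd> x \<equiv> hcomp2 B (id2 B g) x"
abbreviation wr (infixl "\<rhd>" 57) where "x \<rhd> g \<equiv> hcomp2 B x (id2 B g)"
abbreviation U where "U \<equiv> unit1 B"
abbreviation inv where "inv \<equiv> inv1 B"
abbreviation iv2 where "iv2 \<equiv> inv2 B"
abbreviation As where "As \<equiv> asc B"
abbreviation L where "L \<equiv> lunit B"
abbreviation Rr where "Rr \<equiv> runit B"
abbreviation Ee where "Ee \<equiv> counit_e B"
abbreviation Ii where "Ii \<equiv> unit_i B"

lemmas bigroupoid_clauses = bigroupoid[unfolded bigroupoid_def cell2_def hom1_def]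

lemma src_trg_obj[simp]: "f \<in> A1 \<Longrightarrow> sr f \<in> obj B" "f \<in> A1 \<Longrightarrow> tg f \<in> obj B"
  by (use bigroupoid_clauses in meson)+

lemma dom_cod_arr[simp]:
  assumes "x \<in> A2" shows "dm x \<in> A1" "cd x \<in> A1" "sr (cd x) = sr (dm x)" "tg (cd x) = tg (dm x)"
proof -
  have "dm x \<in> A1 \<and> cd x \<in> A1 \<and> sr (dm x) = sr (cd x) \<and> tg (dm x) = tg (cd x)"
    using bigroupoid_clauses assms by meson
  then show "dm x \<in> A1" "cd x \<in> A1" "sr (cd x) = sr (dm x)" "tg (cd x) = tg (dm x)" by simp_all
qed

lemma I_cell[simp]:
  assumes "f \<in> A1" shows "I f \<in> A2" "dm (I f) = f" "cd (I f) = f"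
  by (use bigroupoid_clauses assms in meson)+

lemma vc_cell[simp]:
  assumes "x \<in> A2" "y \<in> A2" "cd y = dm x" shows "x \<cdot> y \<in> A2" "dm (x \<cdot> y) = dm y" "cd (x \<cdot> y) = cd x"
  by (use bigroupoid_clauses assms in meson)+

lemma vc_idr[simp]: "x \<in> A2 \<Longrightarrow> dm x = f \<Longrightarrow> x \<cdot> I f = x"
  and vc_idl[simp]: "x \<in> A2 \<Longrightarrow> cd x = f \<Longrightarrow> I f \<cdot> x = x"
proof -
  assume "x \<in> A2"
  then have "x \<cdot> I (dm x) = x \<and> I (cd x) \<cdot> x = x" using bigroupoid_clauses by meson
  then show "dm x = f \<Longrightarrow> x \<cdot> I f = x" "cd x = f \<Longrightarrow> I f \<cdot> x = x" by auto
qed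

lemma vc_assoc[simp]:
  assumes "x \<in> A2" "y \<in> A2" "z \<in> A2" "cd z = dm y" "cd y = dm x"
  shows "(x \<cdot> y) \<cdot> z = x \<cdot> (y \<cdot> z)"
proof -
  have "x \<cdot> (y \<cdot> z) = (x \<cdot> y) \<cdot> z" using bigroupoid_clauses assms by meson
  then show ?thesis by (rule sym)
qed

lemma h1_hom[simp]:
  assumes "f \<in> A1" "g \<in> A1" "tg f = sr g" shows "g \<diamond> f \<in> A1" "sr (g \<diamond> f) = sr f" "tg (g \<diamond> f) = tg g"
  by (use bigroupoid_clauses assms in meson)+

lemma hc_cell[simp]:
  assumes "x \<in> A2" "y \<in> A2" "tg (dm y) = sr (dm x)"
  shows "x \<star> y \<in> A2" "dm (x \<star> y) = dm x \<diamond> dm y" "cd (x \<star> y) = cd x \<diamond> cd y"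
  by (use bigroupoid_clauses assms in meson)+

lemma hc_I[simp]: "f \<in> A1 \<Longrightarrow> g \<in> A1 \<Longrightarrow> tg f = sr g \<Longrightarrow> I g \<star> I f = I (g \<diamond> f)"
  using bigroupoid_clauses by meson

lemma interchange: "y \<in> A2 \<Longrightarrow> y' \<in> A2 \<Longrightarrow> x \<in> A2 \<Longrightarrow> x' \<in> A2 \<Longrightarrow>
   cd y = dm y' \<Longrightarrow> cd x = dm x' \<Longrightarrow> tg (dm y) = sr (dm x) \<Longrightarrow>
   (x' \<cdot> x) \<star> (y' \<cdot> y) = (x' \<star> y') \<cdot> (x \<star> y)"
  using bigroupoid_clauses by meson

lemma U_hom[simp]:
  assumes "X \<in> obj B" shows "U X \<in> A1" "sr (U X) = X" "tg (U X) = X"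
  by (use bigroupoid_clauses assms in meson)+

lemma inv_hom[simp]:
  assumes "f \<in> A1" shows "inv f \<in> A1" "sr (inv f) = tg f" "tg (inv f) = sr f"
  by (use bigroupoid_clauses assms in meson)+

lemma iv2_cell[simp]:
  assumes "x \<in> A2" shows "iv2 x \<in> A2" "dm (iv2 x) = inv (dm x)" "cd (iv2 x) = inv (cd x)"
  by (use bigroupoid_clauses assms in meson)+

lemma iv2_I[simp]: "f \<in> A1 \<Longrightarrow> iv2 (I f) = I (inv f)"
  using bigroupoid_clauses by meson

lemma iv2_vc[simp]: "x \<in> A2 \<Longrightarrow> y \<in> A2 \<Longrightarrow> cd x = dm y \<Longrightarrow> iv2 (y \<cdot> x) = iv2 y \<cdot> iv2 x"
  using bigroupoid_clauses by meson

lemma As_cell[simp]: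
  assumes "f \<in> A1" "g \<in> A1" "h \<in> A1" "tg f = sr g" "tg g = sr h"
  shows "As h g f \<in> A2" "dm (As h g f) = (h \<diamond> g) \<diamond> f" "cd (As h g f) = h \<diamond> (g \<diamond> f)"
  by (use bigroupoid_clauses assms in meson)+

lemma As_nat: "x \<in> A2 \<Longrightarrow> y \<in> A2 \<Longrightarrow> z \<in> A2 \<Longrightarrow> tg (dm x) = sr (dm y) \<Longrightarrow> tg (dm y) = sr (dm z) \<Longrightarrow>
   As (cd z) (cd y) (cd x) \<cdot> ((z \<star> y) \<star> x) = (z \<star> (y \<star> x)) \<cdot> As (dm z) (dm y) (dm x)"
  using bigroupoid_clauses by meson

lemma L_cell[simp]:
  assumes "f \<in> A1" shows "L f \<in> A2" "dm (L f) = U (tg f) \<diamond> f" "cd (L f) = f"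
  by (use bigroupoid_clauses assms in meson)+

lemma L_nat: "x \<in> A2 \<Longrightarrow> x \<cdot> L (dm x) = L (cd x) \<cdot> (U (tg (dm x)) \<lhd> x)"
  using bigroupoid_clauses by meson

lemma R_cell[simp]:
  assumes "f \<in> A1" shows "Rr f \<in> A2" "dm (Rr f) = f \<diamond> U (sr f)" "cd (Rr f) = f"
  by (use bigroupoid_clauses assms in meson)+

lemma R_nat: "x \<in> A2 \<Longrightarrow> x \<cdot> Rr (dm x) = Rr (cd x) \<cdot> (x \<rhd> U (sr (dm x)))"
  using bigroupoid_clauses by meson

lemma E_cell[simp]:
  assumes "f \<in> A1" shows "Ee f \<in> A2" "dm (Ee f) = inv f \<diamond> f" "cd (Ee f) = U (sr f)"
  by (use bigroupoid_clauses assms in meson)+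

lemma E_nat: "x \<in> A2 \<Longrightarrow> Ee (cd x) \<cdot> (iv2 x \<star> x) = Ee (dm x)"
  using bigroupoid_clauses by meson

lemma Ii_cell[simp]:
  assumes "f \<in> A1" shows "Ii f \<in> A2" "dm (Ii f) = U (tg f)" "cd (Ii f) = f \<diamond> inv f"
  by (use bigroupoid_clauses assms in meson)+

lemma Ii_nat: "x \<in> A2 \<Longrightarrow> (x \<star> iv2 x) \<cdot> Ii (dm x) = Ii (cd x)"
  using bigroupoid_clauses by meson

lemma pentagon: "f \<in> A1 \<Longrightarrow> g \<in> A1 \<Longrightarrow> h \<in> A1 \<Longrightarrow> k \<in> A1 \<Longrightarrow> tg f = sr g \<Longrightarrow> tg g = sr h \<Longrightarrow> tg h = sr k \<Longrightarrow>
  As k h (g \<diamond> f) \<cdot> As (k \<diamond> h) g f = (k \<lhd> As h g f) \<cdot> As k (h \<diamond> g) f \<cdot> (As k h g \<rhd> f)"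
  using bigroupoid_clauses by meson

lemma triangle:
  assumes "f \<in> A1" "g \<in> A1" "tg f = X" "sr g = X"
  shows "(g \<lhd> L f) \<cdot> As g (U X) f = Rr g \<rhd> f"
proof -
  have "tg f = sr g" using assms by simp
  then have "(g \<lhd> L f) \<cdot> As g (U (tg f)) f = Rr g \<rhd> f" using bigroupoid_clauses assms by meson
  then show ?thesis using assms by simp
qed

lemma zigzag: "f \<in> A1 \<Longrightarrow> Rr f \<cdot> (f \<lhd> Ee f) \<cdot> As f (inv f) f \<cdot> (Ii f \<rhd> f) = L f"
  using bigroupoid_clauses by meson

definition vinv where
  "vinv x = (SOME y. y \<in> A2 \<and> dm y = cd x \<and> cd y = dm x \<and> y \<cdot> x = I (dm x) \<and> x \<cdot> y = I (cd x))"

lemma vinv_cell[simp]: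
  assumes "x \<in> A2"
  shows "vinv x \<in> A2" "dm (vinv x) = cd x" "cd (vinv x) = dm x" "vinv x \<cdot> x = I (dm x)" "x \<cdot> vinv x = I (cd x)"
proof -
  have "\<exists>y\<in>A2. dm y = cd x \<and> cd y = dm x \<and> y \<cdot> x = I (dm x) \<and> x \<cdot> y = I (cd x)"
    using bigroupoid_clauses assms by meson
  then have "vinv x \<in> A2 \<and> dm (vinv x) = cd x \<and> cd (vinv x) = dm x \<and> vinv x \<cdot> x = I (dm x) \<and> x \<cdot> vinv x = I (cd x)"
    unfolding vinv_def by (rule someI2_bex) blast
  then show "vinv x \<in> A2" "dm (vinv x) = cd x" "cd (vinv x) = dm x" "vinv x \<cdot> x = I (dm x)" "x \<cdot> vinv x = I (cd x)"
    by blast+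
qed

lemma vinv_vc_cancel[simp]:
  "x \<in> A2 \<Longrightarrow> z \<in> A2 \<Longrightarrow> cd z = dm x \<Longrightarrow> vinv x \<cdot> x \<cdot> z = z"
  "x \<in> A2 \<Longrightarrow> z \<in> A2 \<Longrightarrow> cd z = cd x \<Longrightarrow> x \<cdot> vinv x \<cdot> z = z"
  by (metis vc_assoc vc_idl vinv_cell)+

lemma vinv_unique: "x \<in> A2 \<Longrightarrow> y \<in> A2 \<Longrightarrow> dm y = cd x \<Longrightarrow> y \<cdot> x = I (dm x) \<Longrightarrow> y = vinv x"
  by (metis vc_assoc vc_idl vc_idr vinv_cell)

lemma vc_rewrite2:
  "a \<cdot> b = c \<Longrightarrow> a \<in> A2 \<Longrightarrow> b \<in> A2 \<Longrightarrow> z \<in> A2 \<Longrightarrow> cd b = dm a \<Longrightarrow> cd z = dm b \<Longrightarrow>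
   a \<cdot> (b \<cdot> z) = c \<cdot> z"
  by (metis vc_assoc)

lemma vc_rewrite3:
  "a \<cdot> b \<cdot> c = d \<Longrightarrow> a \<in> A2 \<Longrightarrow> b \<in> A2 \<Longrightarrow> c \<in> A2 \<Longrightarrow> z \<in> A2 \<Longrightarrow>
   cd b = dm a \<Longrightarrow> cd c = dm b \<Longrightarrow> cd z = dm c \<Longrightarrow> a \<cdot> b \<cdot> c \<cdot> z = d \<cdot> z"
  by (metis vc_assoc vc_cell)

lemma vc_cancel_right:
  "x \<cdot> z = y \<cdot> z \<Longrightarrow> x \<in> A2 \<Longrightarrow> y \<in> A2 \<Longrightarrow> z \<in> A2 \<Longrightarrow> cd z = dm x \<Longrightarrow> cd z = dm y \<Longrightarrow> x = y"
  by (metis vc_assoc vc_idr vinv_cell)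

lemma vc_cancel_left:
  "z \<cdot> x = z \<cdot> y \<Longrightarrow> x \<in> A2 \<Longrightarrow> y \<in> A2 \<Longrightarrow> z \<in> A2 \<Longrightarrow> cd x = dm z \<Longrightarrow> cd y = dm z \<Longrightarrow> x = y"
  by (metis vinv_vc_cancel(1))

lemma vc_move_right: "x \<cdot> p = y \<Longrightarrow> x \<in> A2 \<Longrightarrow> p \<in> A2 \<Longrightarrow> cd p = dm x \<Longrightarrow> x = y \<cdot> vinv p"
  by (metis vc_assoc vc_idr vinv_cell)

lemma vc_move_left: "p \<cdot> x = y \<Longrightarrow> x \<in> A2 \<Longrightarrow> p \<in> A2 \<Longrightarrow> cd x = dm p \<Longrightarrow> x = vinv p \<cdot> y"
  by (metis vinv_vc_cancel(1))

lemma vc_swap: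
  assumes e: "p \<cdot> x = y \<cdot> q" and t: "p \<in> A2" "x \<in> A2" "y \<in> A2" "q \<in> A2" "cd x = dm p" "cd q = dm y"
  shows "vinv p \<cdot> y = x \<cdot> vinv q"
proof -
  have d: "dm x = dm q" and c: "cd y = cd p" using arg_cong[OF e, of dm] arg_cong[OF e, of cd] t by simp_all
  have "vinv p \<cdot> (y \<cdot> q) = x" using e[symmetric] t by simp
  then have "(vinv p \<cdot> y) \<cdot> q = (x \<cdot> vinv q) \<cdot> q" using t d c by simp
  then show ?thesis by (rule vc_cancel_right) (use t d c in simp_all)
qed

lemma vinv_vinv[simp]: "x \<in> A2 \<Longrightarrow> vinv (vinv x) = x"
  using vinv_unique[of "vinv x" x] by simp

lemma vinv_vc[simp]: "x \<in> A2 \<Longrightarrow> y \<in> A2 \<Longrightarrow> cd x = dm y \<Longrightarrow> vinv (y \<cdot> x) = vinv x \<cdot> vinv y"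
  by (rule vinv_unique[symmetric]) simp_all

lemma vinv_I[simp]: "f \<in> A1 \<Longrightarrow> vinv (I f) = I f"
  using vinv_unique[of "I f" "I f"] by simp

lemma vinv_hc[simp]:
  assumes "x \<in> A2" "y \<in> A2" "tg (dm y) = sr (dm x)"
  shows "vinv (x \<star> y) = vinv x \<star> vinv y"
proof -
  have "(vinv x \<star> vinv y) \<cdot> (x \<star> y) = (vinv x \<cdot> x) \<star> (vinv y \<cdot> y)"
    using assms by (subst interchange) simp_all
  also have "\<dots> = I (dm (x \<star> y))" using assms by simp
  finally show ?thesis using assms by (intro vinv_unique[symmetric]) simp_all
qed

lemma wl_vc: "x \<in> A2 \<Longrightarrow> y \<in> A2 \<Longrightarrow> g \<in> A1 \<Longrightarrow> cd y = dm x \<Longrightarrow> tg (dm y) = sr g \<Longrightarrow>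
   g \<lhd> (x \<cdot> y) = (g \<lhd> x) \<cdot> (g \<lhd> y)"
  using interchange[of y x "I g" "I g"] by simp

lemma wr_vc: "x \<in> A2 \<Longrightarrow> y \<in> A2 \<Longrightarrow> g \<in> A1 \<Longrightarrow> cd y = dm x \<Longrightarrow> tg g = sr (dm y) \<Longrightarrow>
   (x \<cdot> y) \<rhd> g = (x \<rhd> g) \<cdot> (y \<rhd> g)"
  using interchange[of "I g" "I g" y x] by simp

lemma hc_split1: "x \<in> A2 \<Longrightarrow> y \<in> A2 \<Longrightarrow> tg (dm y) = sr (dm x) \<Longrightarrow> x \<star> y = (x \<rhd> cd y) \<cdot> (dm x \<lhd> y)"
  using interchange[of y "I (cd y)" "I (dm x)" x] by simp

lemma hc_split2: "x \<in> A2 \<Longrightarrow> y \<in> A2 \<Longrightarrow> tg (dm y) = sr (dm x) \<Longrightarrow> x \<star> y = (cd x \<lhd> y) \<cdot> (x \<rhd> dm y)"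
  using interchange[of "I (dm y)" y x "I (cd x)"] by simp

lemma As_nat_l: "x \<in> A2 \<Longrightarrow> g \<in> A1 \<Longrightarrow> h \<in> A1 \<Longrightarrow> tg (dm x) = sr h \<Longrightarrow> tg h = sr g \<Longrightarrow>
  As g h (cd x) \<cdot> ((g \<diamond> h) \<lhd> x) = (g \<lhd> (h \<lhd> x)) \<cdot> As g h (dm x)"
  using As_nat[of x "I h" "I g"] by simp

lemma As_nat_m: "x \<in> A2 \<Longrightarrow> g \<in> A1 \<Longrightarrow> f \<in> A1 \<Longrightarrow> tg f = sr (dm x) \<Longrightarrow> tg (dm x) = sr g \<Longrightarrow>
  As g (cd x) f \<cdot> ((g \<lhd> x) \<rhd> f) = (g \<lhd> (x \<rhd> f)) \<cdot> As g (dm x) f"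
  using As_nat[of "I f" x "I g"] by simp

lemma As_nat_r: "x \<in> A2 \<Longrightarrow> g \<in> A1 \<Longrightarrow> f \<in> A1 \<Longrightarrow> tg f = sr g \<Longrightarrow> tg g = sr (dm x) \<Longrightarrow>
  As (cd x) g f \<cdot> ((x \<rhd> g) \<rhd> f) = (x \<rhd> (g \<diamond> f)) \<cdot> As (dm x) g f"
  using As_nat[of "I f" "I g" x] by simp

lemma unit_whisker_left_cancel:
  assumes eq: "U Z \<lhd> x = U Z \<lhd> y" and xy: "x \<in> A2" "y \<in> A2" "dm x = dm y" "cd x = cd y" "tg (dm x) = Z"
  shows "x = y"
proof -
  have "x \<cdot> L (dm x) = L (cd x) \<cdot> (U Z \<lhd> x)" using L_nat[of x] xy by simp
  also have "\<dots> = y \<cdot> L (dm x)" using L_nat[of y] xy eq by simp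
  finally show ?thesis by (rule vc_cancel_right) (use xy in simp_all)
qed

lemma unit_whisker_right_cancel:
  assumes eq: "x \<rhd> U Z = y \<rhd> U Z" and xy: "x \<in> A2" "y \<in> A2" "dm x = dm y" "cd x = cd y" "sr (dm x) = Z"
  shows "x = y"
proof -
  have "x \<cdot> Rr (dm x) = Rr (cd x) \<cdot> (x \<rhd> U Z)" using R_nat[of x] xy by simp
  also have "\<dots> = y \<cdot> Rr (dm x)" using R_nat[of y] xy eq by simp
  finally show ?thesis by (rule vc_cancel_right) (use xy in simp_all)
qed
text \<open>
  The remaining triangle identities follow from the pentagon and the given triangle after
  whiskering with an identity, which can be cancelled.
\<close>

lemma lunit_hcomp:
  assumes g: "g \<in> A1" and f: "f \<in> A1" and gf: "tg f = sr g"
  shows "L (g \<diamond> f) \<cdot> As (U (tg g)) g f = L g \<rhd> f"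
proof -
  obtain Y where Y: "tg g = Y" "Y \<in> obj B" using g by simp
  note ctx = g f gf Y
  have T1: "(U Y \<lhd> L (g \<diamond> f)) \<cdot> As (U Y) (U Y) (g \<diamond> f) = Rr (U Y) \<rhd> (g \<diamond> f)"
    using triangle[of "g \<diamond> f" "U Y" Y] ctx by simp
  have P: "As (U Y) (U Y) (g \<diamond> f) \<cdot> As (U Y \<diamond> U Y) g f = (U Y \<lhd> As (U Y) g f) \<cdot> As (U Y) (U Y \<diamond> g) f \<cdot> (As (U Y) (U Y) g \<rhd> f)"
    using pentagon[of f g "U Y" "U Y"] ctx by simp
  have N1: "As (U Y) g f \<cdot> ((Rr (U Y) \<rhd> g) \<rhd> f) = (Rr (U Y) \<rhd> (g \<diamond> f)) \<cdot> As (U Y \<diamond> U Y) g f"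
    using As_nat_r[of "Rr (U Y)" g f] ctx by simp
  have T2: "(U Y \<lhd> L g) \<cdot> As (U Y) (U Y) g = Rr (U Y) \<rhd> g"
    using triangle[of g "U Y" Y] ctx by simp
  have N2: "As (U Y) g f \<cdot> ((U Y \<lhd> L g) \<rhd> f) = (U Y \<lhd> (L g \<rhd> f)) \<cdot> As (U Y) (U Y \<diamond> g) f"
    using As_nat_m[of "L g" "U Y" f] ctx by simp
  have "(U Y \<lhd> (L (g \<diamond> f) \<cdot> As (U Y) g f)) \<cdot> As (U Y) (U Y \<diamond> g) f \<cdot> (As (U Y) (U Y) g \<rhd> f)
      = (U Y \<lhd> L (g \<diamond> f)) \<cdot> (U Y \<lhd> As (U Y) g f) \<cdot> As (U Y) (U Y \<diamond> g) f \<cdot> (As (U Y) (U Y) g \<rhd> f)"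
    using ctx by (simp add: wl_vc)
  also have "\<dots> = (U Y \<lhd> L (g \<diamond> f)) \<cdot> As (U Y) (U Y) (g \<diamond> f) \<cdot> As (U Y \<diamond> U Y) g f"
    using ctx by (simp add: P[symmetric])
  also have "\<dots> = (Rr (U Y) \<rhd> (g \<diamond> f)) \<cdot> As (U Y \<diamond> U Y) g f"
    using ctx by (simp add: vc_rewrite2[OF T1])
  also have "\<dots> = As (U Y) g f \<cdot> ((Rr (U Y) \<rhd> g) \<rhd> f)"
    using N1 by simp
  also have "\<dots> = As (U Y) g f \<cdot> (((U Y \<lhd> L g) \<cdot> As (U Y) (U Y) g) \<rhd> f)"
    using T2 by simp
  also have "\<dots> = As (U Y) g f \<cdot> ((U Y \<lhd> L g) \<rhd> f) \<cdot> (As (U Y) (U Y) g \<rhd> f)"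
    using ctx by (simp add: wr_vc)
  also have "\<dots> = (U Y \<lhd> (L g \<rhd> f)) \<cdot> As (U Y) (U Y \<diamond> g) f \<cdot> (As (U Y) (U Y) g \<rhd> f)"
    using ctx by (simp add: vc_rewrite2[OF N2])
  finally have "U Y \<lhd> (L (g \<diamond> f) \<cdot> As (U Y) g f) = U Y \<lhd> (L g \<rhd> f)"
    by (rule vc_cancel_right) (use ctx in simp_all)
  hence "L (g \<diamond> f) \<cdot> As (U Y) g f = L g \<rhd> f" by (rule unit_whisker_left_cancel) (use ctx in simp_all)
  thus ?thesis using ctx by simp
qed

lemma runit_hcomp:
  assumes g: "g \<in> A1" and f: "f \<in> A1" and gf: "tg f = sr g"
  shows "(g \<lhd> Rr f) \<cdot> As g f (U (sr f)) = Rr (g \<diamond> f)"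
proof -
  obtain X where X: "sr f = X" "X \<in> obj B" using f by simp
  note ctx = g f gf X
  have T1: "((g \<diamond> f) \<lhd> L (U X)) \<cdot> As (g \<diamond> f) (U X) (U X) = Rr (g \<diamond> f) \<rhd> U X"
    using triangle[of "U X" "g \<diamond> f" X] ctx by simp
  have T2: "(f \<lhd> L (U X)) \<cdot> As f (U X) (U X) = Rr f \<rhd> U X"
    using triangle[of "U X" f X] ctx by simp
  have P: "As g f (U X \<diamond> U X) \<cdot> As (g \<diamond> f) (U X) (U X) = (g \<lhd> As f (U X) (U X)) \<cdot> As g (f \<diamond> U X) (U X) \<cdot> (As g f (U X) \<rhd> U X)"
    using pentagon[of "U X" "U X" f g] ctx by simp
  have N1: "As g f (U X) \<cdot> ((g \<diamond> f) \<lhd> L (U X)) = (g \<lhd> (f \<lhd> L (U X))) \<cdot> As g f (U X \<diamond> U X)"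
    using As_nat_l[of "L (U X)" g f] ctx by simp
  have N2: "As g f (U X) \<cdot> ((g \<lhd> Rr f) \<rhd> U X) = (g \<lhd> (Rr f \<rhd> U X)) \<cdot> As g (f \<diamond> U X) (U X)"
    using As_nat_m[of "Rr f" g "U X"] ctx by simp
  have "As g f (U X) \<cdot> (((g \<lhd> Rr f) \<cdot> As g f (U X)) \<rhd> U X)
      = As g f (U X) \<cdot> ((g \<lhd> Rr f) \<rhd> U X) \<cdot> (As g f (U X) \<rhd> U X)"
    using ctx by (simp add: wr_vc)
  also have "\<dots> = (g \<lhd> (Rr f \<rhd> U X)) \<cdot> As g (f \<diamond> U X) (U X) \<cdot> (As g f (U X) \<rhd> U X)"
    using ctx by (simp add: vc_rewrite2[OF N2])
  also have "\<dots> = (g \<lhd> ((f \<lhd> L (U X)) \<cdot> As f (U X) (U X))) \<cdot> As g (f \<diamond> U X) (U X) \<cdot> (As g f (U X) \<rhd> U X)"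
    using T2 by simp
  also have "\<dots> = (g \<lhd> (f \<lhd> L (U X))) \<cdot> (g \<lhd> As f (U X) (U X)) \<cdot> As g (f \<diamond> U X) (U X) \<cdot> (As g f (U X) \<rhd> U X)"
    using ctx by (simp add: wl_vc)
  also have "\<dots> = (g \<lhd> (f \<lhd> L (U X))) \<cdot> As g f (U X \<diamond> U X) \<cdot> As (g \<diamond> f) (U X) (U X)"
    using ctx by (simp add: P[symmetric])
  also have "\<dots> = As g f (U X) \<cdot> ((g \<diamond> f) \<lhd> L (U X)) \<cdot> As (g \<diamond> f) (U X) (U X)"
    using ctx by (simp add: vc_rewrite2[OF N1])
  also have "\<dots> = As g f (U X) \<cdot> (Rr (g \<diamond> f) \<rhd> U X)"
    using ctx by (simp add: T1)
  finally have "((g \<lhd> Rr f) \<cdot> As g f (U X)) \<rhd> U X = Rr (g \<diamond> f) \<rhd> U X"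
    by (rule vc_cancel_left) (use ctx in simp_all)
  hence "(g \<lhd> Rr f) \<cdot> As g f (U X) = Rr (g \<diamond> f)" by (rule unit_whisker_right_cancel) (use ctx in simp_all)
  thus ?thesis using ctx by simp
qed

lemma lunit_unit_eq_runit_unit:
  assumes X: "X \<in> obj B" shows "L (U X) = Rr (U X)"
proof -
  have k1: "L (U X \<diamond> U X) \<cdot> As (U X) (U X) (U X) = L (U X) \<rhd> U X"
    using lunit_hcomp[of "U X" "U X"] X by simp
  have t: "(U X \<lhd> L (U X)) \<cdot> As (U X) (U X) (U X) = Rr (U X) \<rhd> U X"
    using triangle[of "U X" "U X" X] X by simp
  have n: "L (U X) \<cdot> L (U X \<diamond> U X) = L (U X) \<cdot> (U X \<lhd> L (U X))"
    using L_nat[of "L (U X)"] X by simp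
  have e: "L (U X \<diamond> U X) = U X \<lhd> L (U X)"
    using n by (rule vc_cancel_left) (use X in simp_all)
  have "L (U X) \<rhd> U X = Rr (U X) \<rhd> U X" using k1 t e by simp
  thus ?thesis by (rule unit_whisker_right_cancel) (use X in simp_all)
qed

lemma whisker_right_vinv[simp]:
  assumes "x \<in> A2" "g \<in> A1" "tg g = sr (dm x)"
  shows "(x \<rhd> g) \<cdot> (vinv x \<rhd> g) = I (cd x \<diamond> g)" "(vinv x \<rhd> g) \<cdot> (x \<rhd> g) = I (dm x \<diamond> g)"
    and "z \<in> A2 \<Longrightarrow> cd z = cd x \<diamond> g \<Longrightarrow> (x \<rhd> g) \<cdot> (vinv x \<rhd> g) \<cdot> z = z"
    and "z \<in> A2 \<Longrightarrow> cd z = dm x \<diamond> g \<Longrightarrow> (vinv x \<rhd> g) \<cdot> (x \<rhd> g) \<cdot> z = z"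
proof -
  show c1: "(x \<rhd> g) \<cdot> (vinv x \<rhd> g) = I (cd x \<diamond> g)" using assms wr_vc[of x "vinv x" g] by simp
  show c2: "(vinv x \<rhd> g) \<cdot> (x \<rhd> g) = I (dm x \<diamond> g)" using assms wr_vc[of "vinv x" x g] by simp
  show "z \<in> A2 \<Longrightarrow> cd z = cd x \<diamond> g \<Longrightarrow> (x \<rhd> g) \<cdot> (vinv x \<rhd> g) \<cdot> z = z"
    using assms c1 by (subst vc_assoc[symmetric]) simp_all
  show "z \<in> A2 \<Longrightarrow> cd z = dm x \<diamond> g \<Longrightarrow> (vinv x \<rhd> g) \<cdot> (x \<rhd> g) \<cdot> z = z"
    using assms c2 by (subst vc_assoc[symmetric]) simp_all
qed

lemma whisker_left_vinv[simp]:
  assumes "x \<in> A2" "g \<in> A1" "tg (dm x) = sr g"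
  shows "(g \<lhd> x) \<cdot> (g \<lhd> vinv x) = I (g \<diamond> cd x)" "(g \<lhd> vinv x) \<cdot> (g \<lhd> x) = I (g \<diamond> dm x)"
    and "z \<in> A2 \<Longrightarrow> cd z = g \<diamond> cd x \<Longrightarrow> (g \<lhd> x) \<cdot> (g \<lhd> vinv x) \<cdot> z = z"
    and "z \<in> A2 \<Longrightarrow> cd z = g \<diamond> dm x \<Longrightarrow> (g \<lhd> vinv x) \<cdot> (g \<lhd> x) \<cdot> z = z"
proof -
  show c1: "(g \<lhd> x) \<cdot> (g \<lhd> vinv x) = I (g \<diamond> cd x)" using assms wl_vc[of x "vinv x" g] by simp
  show c2: "(g \<lhd> vinv x) \<cdot> (g \<lhd> x) = I (g \<diamond> dm x)" using assms wl_vc[of "vinv x" x g] by simp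
  show "z \<in> A2 \<Longrightarrow> cd z = g \<diamond> cd x \<Longrightarrow> (g \<lhd> x) \<cdot> (g \<lhd> vinv x) \<cdot> z = z"
    using assms c1 by (subst vc_assoc[symmetric]) simp_all
  show "z \<in> A2 \<Longrightarrow> cd z = g \<diamond> dm x \<Longrightarrow> (g \<lhd> vinv x) \<cdot> (g \<lhd> x) \<cdot> z = z"
    using assms c2 by (subst vc_assoc[symmetric]) simp_all
qed

text \<open>Whiskering by \<open>b\<close> is injective on 2-cells since \<open>b\<^sup>* * b\<close> is isomorphic to an identity.\<close>

lemma whisker_left_cancel:
  assumes eq: "b \<lhd> x = b \<lhd> y"
    and b: "b \<in> A1"
    and xy: "x \<in> A2" "y \<in> A2" "dm x = dm y" "cd x = cd y" "tg (dm x) = sr b"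
  shows "x = y"
proof -
  note ctx = b xy
  have n1: "As (inv b) b (cd x) \<cdot> ((inv b \<diamond> b) \<lhd> x) = (inv b \<lhd> (b \<lhd> x)) \<cdot> As (inv b) b (dm x)"
    using As_nat_l[of x "inv b" b] ctx by simp
  have n2: "As (inv b) b (cd x) \<cdot> ((inv b \<diamond> b) \<lhd> y) = (inv b \<lhd> (b \<lhd> y)) \<cdot> As (inv b) b (dm x)"
    using As_nat_l[of y "inv b" b] ctx by simp
  have "As (inv b) b (cd x) \<cdot> ((inv b \<diamond> b) \<lhd> x) = As (inv b) b (cd x) \<cdot> ((inv b \<diamond> b) \<lhd> y)"
    using n1 n2 eq by simp
  hence e1: "(inv b \<diamond> b) \<lhd> x = (inv b \<diamond> b) \<lhd> y" by (rule vc_cancel_left) (use ctx in simp_all)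
  have s1: "Ee b \<star> x = (U (sr b) \<lhd> x) \<cdot> (Ee b \<rhd> dm x)" using hc_split2[of "Ee b" x] ctx by simp
  have s2: "Ee b \<star> x = (Ee b \<rhd> cd x) \<cdot> ((inv b \<diamond> b) \<lhd> x)" using hc_split1[of "Ee b" x] ctx by simp
  have s3: "Ee b \<star> y = (U (sr b) \<lhd> y) \<cdot> (Ee b \<rhd> dm x)" using hc_split2[of "Ee b" y] ctx by simp
  have s4: "Ee b \<star> y = (Ee b \<rhd> cd x) \<cdot> ((inv b \<diamond> b) \<lhd> y)" using hc_split1[of "Ee b" y] ctx by simp
  have "(U (sr b) \<lhd> x) \<cdot> (Ee b \<rhd> dm x) = (U (sr b) \<lhd> y) \<cdot> (Ee b \<rhd> dm x)"
    using s1 s2 s3 s4 e1 by simp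
  hence "U (sr b) \<lhd> x = U (sr b) \<lhd> y" by (rule vc_cancel_right) (use ctx in simp_all)
  thus ?thesis by (rule unit_whisker_left_cancel) (use ctx in simp_all)
qed

section \<open>Squares and their pasting\<close>

definition square where "square f f' a b \<sigma> \<longleftrightarrow> f \<in> A1 \<and> f' \<in> A1 \<and> a \<in> A1 \<and> b \<in> A1 \<and> sr a = sr f \<and> tg a = sr f' \<and>
   sr b = tg f \<and> tg b = tg f' \<and> \<sigma> \<in> A2 \<and> dm \<sigma> = f' \<diamond> a \<and> cd \<sigma> = b \<diamond> f"

definition square_map where "square_map f f' a b \<sigma> a' b' \<sigma>' \<alpha> \<beta> \<longleftrightarrow> square f f' a b \<sigma> \<and> square f f' a' b' \<sigma>' \<and>
   \<alpha> \<in> A2 \<and> dm \<alpha> = a \<and> cd \<alpha> = a' \<and> \<beta> \<in> A2 \<and> dm \<beta> = b \<and> cd \<beta> = b' \<and>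
   \<sigma>' \<cdot> (f' \<lhd> \<alpha>) = (\<beta> \<rhd> f) \<cdot> \<sigma>"

lemma square_mapI: "square f f' a b \<sigma> \<Longrightarrow> square f f' a' b' \<sigma>' \<Longrightarrow> \<alpha> \<in> A2 \<Longrightarrow> dm \<alpha> = a \<Longrightarrow> cd \<alpha> = a' \<Longrightarrow>
   \<beta> \<in> A2 \<Longrightarrow> dm \<beta> = b \<Longrightarrow> cd \<beta> = b' \<Longrightarrow> \<sigma>' \<cdot> (f' \<lhd> \<alpha>) = (\<beta> \<rhd> f) \<cdot> \<sigma> \<Longrightarrow> square_map f f' a b \<sigma> a' b' \<sigma>' \<alpha> \<beta>"
  unfolding square_map_def by blast

lemma square_map_id: "square f f' a b \<sigma> \<Longrightarrow> square_map f f' a b \<sigma> a b \<sigma> (I a) (I b)"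
  unfolding square_map_def square_def by simp

lemma square_map_vcomp:
  assumes 1: "square_map f f' a b \<sigma> a' b' \<sigma>' \<alpha> \<beta>" and 2: "square_map f f' a' b' \<sigma>' a'' b'' \<sigma>'' \<alpha>' \<beta>'"
  shows "square_map f f' a b \<sigma> a'' b'' \<sigma>'' (\<alpha>' \<cdot> \<alpha>) (\<beta>' \<cdot> \<beta>)"
proof -
  have t: "square f f' a b \<sigma>" "square f f' a' b' \<sigma>'" "square f f' a'' b'' \<sigma>''" "\<alpha> \<in> A2" "dm \<alpha> = a" "cd \<alpha> = a'"
     "\<beta> \<in> A2" "dm \<beta> = b" "cd \<beta> = b'" "\<alpha>' \<in> A2" "dm \<alpha>' = a'" "cd \<alpha>' = a''"
     "\<beta>' \<in> A2" "dm \<beta>' = b'" "cd \<beta>' = b''" using 1 2 unfolding square_map_def by auto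
  have e1: "\<sigma>' \<cdot> (f' \<lhd> \<alpha>) = (\<beta> \<rhd> f) \<cdot> \<sigma>" and e2: "\<sigma>'' \<cdot> (f' \<lhd> \<alpha>') = (\<beta>' \<rhd> f) \<cdot> \<sigma>'"
    using 1 2 unfolding square_map_def by auto
  note ctx = t[unfolded square_def]
  have "\<sigma>'' \<cdot> (f' \<lhd> (\<alpha>' \<cdot> \<alpha>)) = \<sigma>'' \<cdot> (f' \<lhd> \<alpha>') \<cdot> (f' \<lhd> \<alpha>)"
    using ctx by (simp add: wl_vc)
  also have "\<dots> = (\<beta>' \<rhd> f) \<cdot> \<sigma>' \<cdot> (f' \<lhd> \<alpha>)" using ctx by (simp add: vc_rewrite2[OF e2])
  also have "\<dots> = (\<beta>' \<rhd> f) \<cdot> (\<beta> \<rhd> f) \<cdot> \<sigma>" using e1 by simp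
  also have "\<dots> = ((\<beta>' \<cdot> \<beta>) \<rhd> f) \<cdot> \<sigma>" using ctx by (simp add: wr_vc)
  finally show ?thesis using t by (intro square_mapI) simp_all
qed

lemma square_map_vinv:
  assumes 1: "square_map f f' a b \<sigma> a' b' \<sigma>' \<alpha> \<beta>"
  shows "square_map f f' a' b' \<sigma>' a b \<sigma> (vinv \<alpha>) (vinv \<beta>)"
proof -
  have t: "square f f' a b \<sigma>" "square f f' a' b' \<sigma>'" "\<alpha> \<in> A2" "dm \<alpha> = a" "cd \<alpha> = a'"
     "\<beta> \<in> A2" "dm \<beta> = b" "cd \<beta> = b'" using 1 unfolding square_map_def by auto
  have e1: "\<sigma>' \<cdot> (f' \<lhd> \<alpha>) = (\<beta> \<rhd> f) \<cdot> \<sigma>" using 1 unfolding square_map_def by auto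
  note ctx = t[unfolded square_def]
  have "(\<beta> \<rhd> f) \<cdot> \<sigma> \<cdot> (f' \<lhd> vinv \<alpha>) = \<sigma>'"
    using ctx by (simp add: vc_rewrite2[OF e1[symmetric]])
  also have "\<dots> = (\<beta> \<rhd> f) \<cdot> (vinv \<beta> \<rhd> f) \<cdot> \<sigma>'" using ctx by simp
  finally have "\<sigma> \<cdot> (f' \<lhd> vinv \<alpha>) = (vinv \<beta> \<rhd> f) \<cdot> \<sigma>'"
    by (rule vc_cancel_left) (use ctx in simp_all)
  thus ?thesis using t by (intro square_mapI) simp_all
qed

definition paste where "paste f f' f'' a b a' b' \<tau> \<sigma> =
   vinv (As b' b f) \<cdot> (b' \<lhd> \<sigma>) \<cdot> As b' f' a \<cdot> (\<tau> \<rhd> a) \<cdot> vinv (As f'' a' a)"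

lemma square_paste:
  "square f f' a b \<sigma> \<Longrightarrow> square f' f'' a' b' \<tau> \<Longrightarrow>
   square f f'' (a' \<diamond> a) (b' \<diamond> b) (paste f f' f'' a b a' b' \<tau> \<sigma>)"
  unfolding square_def paste_def by simp

lemma paste_whisker_left_alpha:
  assumes u: "square f' f'' a b \<sigma>" and v: "square f f' c d \<tau>" and v': "square f f' c' d' \<tau>'"
    and al: "\<alpha> \<in> A2" "dm \<alpha> = c" "cd \<alpha> = c'"
  shows "paste f f' f'' c' d' a b \<sigma> \<tau>' \<cdot> (f'' \<lhd> (a \<lhd> \<alpha>)) =
         vinv (As b d' f) \<cdot> (b \<lhd> (\<tau>' \<cdot> (f' \<lhd> \<alpha>))) \<cdot> As b f' c \<cdot> (\<sigma> \<rhd> c) \<cdot> vinv (As f'' a c)"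
proof -
  note ctx = u[unfolded square_def] v[unfolded square_def] v'[unfolded square_def] al
  have n1: "vinv (As f'' a c') \<cdot> (f'' \<lhd> (a \<lhd> \<alpha>)) = ((f'' \<diamond> a) \<lhd> \<alpha>) \<cdot> vinv (As f'' a c)"
    using As_nat_l[of \<alpha> f'' a] ctx by (intro vc_swap) simp_all
  have n2: "(\<sigma> \<rhd> c') \<cdot> ((f'' \<diamond> a) \<lhd> \<alpha>) = ((b \<diamond> f') \<lhd> \<alpha>) \<cdot> (\<sigma> \<rhd> c)"
    using hc_split1[of \<sigma> \<alpha>] hc_split2[of \<sigma> \<alpha>] ctx by simp
  have n3: "As b f' c' \<cdot> ((b \<diamond> f') \<lhd> \<alpha>) = (b \<lhd> (f' \<lhd> \<alpha>)) \<cdot> As b f' c"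
    using As_nat_l[of \<alpha> b f'] ctx by simp
  have "paste f f' f'' c' d' a b \<sigma> \<tau>' \<cdot> (f'' \<lhd> (a \<lhd> \<alpha>)) =
     vinv (As b d' f) \<cdot> (b \<lhd> \<tau>') \<cdot> As b f' c' \<cdot> (\<sigma> \<rhd> c') \<cdot> vinv (As f'' a c') \<cdot> (f'' \<lhd> (a \<lhd> \<alpha>))"
    unfolding paste_def using ctx by simp
  also have "\<dots> = vinv (As b d' f) \<cdot> (b \<lhd> \<tau>') \<cdot> As b f' c' \<cdot> (\<sigma> \<rhd> c') \<cdot> ((f'' \<diamond> a) \<lhd> \<alpha>) \<cdot> vinv (As f'' a c)"
    using n1 by simp
  also have "\<dots> = vinv (As b d' f) \<cdot> (b \<lhd> \<tau>') \<cdot> As b f' c' \<cdot> ((b \<diamond> f') \<lhd> \<alpha>) \<cdot> (\<sigma> \<rhd> c) \<cdot> vinv (As f'' a c)"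
    using ctx by (simp add: vc_rewrite2[OF n2])
  also have "\<dots> = vinv (As b d' f) \<cdot> (b \<lhd> \<tau>') \<cdot> (b \<lhd> (f' \<lhd> \<alpha>)) \<cdot> As b f' c \<cdot> (\<sigma> \<rhd> c) \<cdot> vinv (As f'' a c)"
    using ctx by (simp add: vc_rewrite2[OF n3])
  also have "\<dots> = vinv (As b d' f) \<cdot> (b \<lhd> (\<tau>' \<cdot> (f' \<lhd> \<alpha>))) \<cdot> As b f' c \<cdot> (\<sigma> \<rhd> c) \<cdot> vinv (As f'' a c)"
    using ctx by (simp add: wl_vc)
  finally show ?thesis .
qed

lemma paste_whisker_left_beta:
  assumes u: "square f' f'' a b \<sigma>" and v: "square f f' c d \<tau>" and v': "square f f' c' d' \<tau>'"
    and be: "\<beta> \<in> A2" "dm \<beta> = d" "cd \<beta> = d'"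
  shows "((b \<lhd> \<beta>) \<rhd> f) \<cdot> paste f f' f'' c d a b \<sigma> \<tau> =
         vinv (As b d' f) \<cdot> (b \<lhd> ((\<beta> \<rhd> f) \<cdot> \<tau>)) \<cdot> As b f' c \<cdot> (\<sigma> \<rhd> c) \<cdot> vinv (As f'' a c)"
proof -
  note ctx = u[unfolded square_def] v[unfolded square_def] v'[unfolded square_def] be
  have m1: "((b \<lhd> \<beta>) \<rhd> f) \<cdot> vinv (As b d f) = vinv (As b d' f) \<cdot> (b \<lhd> (\<beta> \<rhd> f))"
    using As_nat_m[of \<beta> b f] ctx by (intro vc_swap[symmetric]) simp_all
  have "((b \<lhd> \<beta>) \<rhd> f) \<cdot> paste f f' f'' c d a b \<sigma> \<tau> =
      ((b \<lhd> \<beta>) \<rhd> f) \<cdot> vinv (As b d f) \<cdot> (b \<lhd> \<tau>) \<cdot> As b f' c \<cdot> (\<sigma> \<rhd> c) \<cdot> vinv (As f'' a c)"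
    unfolding paste_def using ctx by simp
  also have "\<dots> = vinv (As b d' f) \<cdot> (b \<lhd> (\<beta> \<rhd> f)) \<cdot> (b \<lhd> \<tau>) \<cdot> As b f' c \<cdot> (\<sigma> \<rhd> c) \<cdot> vinv (As f'' a c)"
    using ctx by (simp add: vc_rewrite2[OF m1])
  also have "\<dots> = vinv (As b d' f) \<cdot> (b \<lhd> ((\<beta> \<rhd> f) \<cdot> \<tau>)) \<cdot> As b f' c \<cdot> (\<sigma> \<rhd> c) \<cdot> vinv (As f'' a c)"
    using ctx by (simp add: wl_vc)
  finally show ?thesis .
qed

lemma square_map_whisker_left:
  assumes u: "square f' f'' a b \<sigma>" and p: "square_map f f' c d \<tau> c' d' \<tau>' \<alpha> \<beta>"
  shows "square_map f f'' (a \<diamond> c) (b \<diamond> d) (paste f f' f'' c d a b \<sigma> \<tau>)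
                    (a \<diamond> c') (b \<diamond> d') (paste f f' f'' c' d' a b \<sigma> \<tau>') (a \<lhd> \<alpha>) (b \<lhd> \<beta>)"
proof -
  have t: "square f f' c d \<tau>" "square f f' c' d' \<tau>'" "\<alpha> \<in> A2" "dm \<alpha> = c" "cd \<alpha> = c'"
     "\<beta> \<in> A2" "dm \<beta> = d" "cd \<beta> = d'" and e: "\<tau>' \<cdot> (f' \<lhd> \<alpha>) = (\<beta> \<rhd> f) \<cdot> \<tau>"
    using p unfolding square_map_def by auto
  note ctx = u[unfolded square_def] t[unfolded square_def]
  show ?thesis
    apply (rule square_mapI)
    using square_paste[OF t(1) u] square_paste[OF t(2) u] ctx apply simp_all
    using paste_whisker_left_alpha[OF u t(1-5)] paste_whisker_left_beta[OF u t(1,2,6-8)] e by simp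
qed

lemma square_map_whisker_left_reflect:
  assumes u: "square f' f'' a b \<sigma>"
    and t: "square f f' c d \<tau>" "square f f' c' d' \<tau>'" "\<alpha> \<in> A2" "dm \<alpha> = c" "cd \<alpha> = c'"
     "\<beta> \<in> A2" "dm \<beta> = d" "cd \<beta> = d'"
   and p: "square_map f f'' (a \<diamond> c) (b \<diamond> d) (paste f f' f'' c d a b \<sigma> \<tau>)
                      (a \<diamond> c') (b \<diamond> d') (paste f f' f'' c' d' a b \<sigma> \<tau>') (a \<lhd> \<alpha>) (b \<lhd> \<beta>)"
  shows "square_map f f' c d \<tau> c' d' \<tau>' \<alpha> \<beta>"
proof -
  note ctx = u[unfolded square_def] t[unfolded square_def]
  have e: "paste f f' f'' c' d' a b \<sigma> \<tau>' \<cdot> (f'' \<lhd> (a \<lhd> \<alpha>)) = ((b \<lhd> \<beta>) \<rhd> f) \<cdot> paste f f' f'' c d a b \<sigma> \<tau>"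
    using p unfolding square_map_def by auto
  have "vinv (As b d' f) \<cdot> (b \<lhd> (\<tau>' \<cdot> (f' \<lhd> \<alpha>))) \<cdot> (As b f' c \<cdot> (\<sigma> \<rhd> c) \<cdot> vinv (As f'' a c)) =
        vinv (As b d' f) \<cdot> (b \<lhd> ((\<beta> \<rhd> f) \<cdot> \<tau>)) \<cdot> (As b f' c \<cdot> (\<sigma> \<rhd> c) \<cdot> vinv (As f'' a c))"
    using paste_whisker_left_alpha[OF u t(1-5)] paste_whisker_left_beta[OF u t(1,2,6-8)] e by simp
  hence "(b \<lhd> (\<tau>' \<cdot> (f' \<lhd> \<alpha>))) \<cdot> (As b f' c \<cdot> (\<sigma> \<rhd> c) \<cdot> vinv (As f'' a c)) =
        (b \<lhd> ((\<beta> \<rhd> f) \<cdot> \<tau>)) \<cdot> (As b f' c \<cdot> (\<sigma> \<rhd> c) \<cdot> vinv (As f'' a c))"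
    by (rule vc_cancel_left) (use ctx in simp_all)
  hence "b \<lhd> (\<tau>' \<cdot> (f' \<lhd> \<alpha>)) = b \<lhd> ((\<beta> \<rhd> f) \<cdot> \<tau>)"
    by (rule vc_cancel_right) (use ctx in simp_all)
  hence "\<tau>' \<cdot> (f' \<lhd> \<alpha>) = (\<beta> \<rhd> f) \<cdot> \<tau>"
    by (rule whisker_left_cancel) (use ctx in simp_all)
  thus ?thesis using t by (intro square_mapI) simp_all
qed

lemma paste_whisker_right_natural:
  assumes p: "square_map f' f'' a b \<sigma> a' b' \<sigma>' \<alpha> \<beta>" and v: "square f f' c d \<tau>"
  shows "paste f f' f'' c d a' b' \<sigma>' \<tau> \<cdot> (f'' \<lhd> (\<alpha> \<rhd> c)) = ((\<beta> \<rhd> d) \<rhd> f) \<cdot> paste f f' f'' c d a b \<sigma> \<tau>"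
proof -
  have t: "square f' f'' a b \<sigma>" "square f' f'' a' b' \<sigma>'" "\<alpha> \<in> A2" "dm \<alpha> = a" "cd \<alpha> = a'"
     "\<beta> \<in> A2" "dm \<beta> = b" "cd \<beta> = b'" and e: "\<sigma>' \<cdot> (f'' \<lhd> \<alpha>) = (\<beta> \<rhd> f') \<cdot> \<sigma>"
    using p unfolding square_map_def by auto
  note ctx = v[unfolded square_def] t[unfolded square_def]
  have r1: "vinv (As f'' a' c) \<cdot> (f'' \<lhd> (\<alpha> \<rhd> c)) = ((f'' \<lhd> \<alpha>) \<rhd> c) \<cdot> vinv (As f'' a c)"
    using As_nat_m[of \<alpha> f'' c] ctx by (intro vc_swap) simp_all
  have r2: "(\<sigma>' \<rhd> c) \<cdot> ((f'' \<lhd> \<alpha>) \<rhd> c) = ((\<beta> \<rhd> f') \<rhd> c) \<cdot> (\<sigma> \<rhd> c)"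
  proof -
    have "(\<sigma>' \<rhd> c) \<cdot> ((f'' \<lhd> \<alpha>) \<rhd> c) = (\<sigma>' \<cdot> (f'' \<lhd> \<alpha>)) \<rhd> c" using ctx by (simp add: wr_vc)
    also have "\<dots> = ((\<beta> \<rhd> f') \<cdot> \<sigma>) \<rhd> c" using e by simp
    also have "\<dots> = ((\<beta> \<rhd> f') \<rhd> c) \<cdot> (\<sigma> \<rhd> c)" using ctx by (simp add: wr_vc)
    finally show ?thesis .
  qed
  have r3: "As b' f' c \<cdot> ((\<beta> \<rhd> f') \<rhd> c) = (\<beta> \<rhd> (f' \<diamond> c)) \<cdot> As b f' c"
    using As_nat_r[of \<beta> f' c] ctx by simp
  have r4: "(b' \<lhd> \<tau>) \<cdot> (\<beta> \<rhd> (f' \<diamond> c)) = (\<beta> \<rhd> (d \<diamond> f)) \<cdot> (b \<lhd> \<tau>)"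
    using hc_split1[of \<beta> \<tau>] hc_split2[of \<beta> \<tau>] ctx by simp
  have r5: "vinv (As b' d f) \<cdot> (\<beta> \<rhd> (d \<diamond> f)) = ((\<beta> \<rhd> d) \<rhd> f) \<cdot> vinv (As b d f)"
    using As_nat_r[of \<beta> d f] ctx by (intro vc_swap) simp_all
  have "paste f f' f'' c d a' b' \<sigma>' \<tau> \<cdot> (f'' \<lhd> (\<alpha> \<rhd> c)) =
     vinv (As b' d f) \<cdot> (b' \<lhd> \<tau>) \<cdot> As b' f' c \<cdot> (\<sigma>' \<rhd> c) \<cdot> vinv (As f'' a' c) \<cdot> (f'' \<lhd> (\<alpha> \<rhd> c))"
    unfolding paste_def using ctx by simp
  also have "\<dots> = vinv (As b' d f) \<cdot> (b' \<lhd> \<tau>) \<cdot> As b' f' c \<cdot> (\<sigma>' \<rhd> c) \<cdot> ((f'' \<lhd> \<alpha>) \<rhd> c) \<cdot> vinv (As f'' a c)"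
    using r1 by simp
  also have "\<dots> = vinv (As b' d f) \<cdot> (b' \<lhd> \<tau>) \<cdot> As b' f' c \<cdot> ((\<beta> \<rhd> f') \<rhd> c) \<cdot> (\<sigma> \<rhd> c) \<cdot> vinv (As f'' a c)"
    using ctx by (simp add: vc_rewrite2[OF r2])
  also have "\<dots> = vinv (As b' d f) \<cdot> (b' \<lhd> \<tau>) \<cdot> (\<beta> \<rhd> (f' \<diamond> c)) \<cdot> As b f' c \<cdot> (\<sigma> \<rhd> c) \<cdot> vinv (As f'' a c)"
    using ctx by (simp add: vc_rewrite2[OF r3])
  also have "\<dots> = vinv (As b' d f) \<cdot> (\<beta> \<rhd> (d \<diamond> f)) \<cdot> (b \<lhd> \<tau>) \<cdot> As b f' c \<cdot> (\<sigma> \<rhd> c) \<cdot> vinv (As f'' a c)"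
    using ctx by (simp add: vc_rewrite2[OF r4])
  also have "\<dots> = ((\<beta> \<rhd> d) \<rhd> f) \<cdot> vinv (As b d f) \<cdot> (b \<lhd> \<tau>) \<cdot> As b f' c \<cdot> (\<sigma> \<rhd> c) \<cdot> vinv (As f'' a c)"
    using ctx by (simp add: vc_rewrite2[OF r5])
  also have "\<dots> = ((\<beta> \<rhd> d) \<rhd> f) \<cdot> paste f f' f'' c d a b \<sigma> \<tau>"
    unfolding paste_def using ctx by simp
  finally show ?thesis .
qed

lemma square_map_whisker_right:
  assumes p: "square_map f' f'' a b \<sigma> a' b' \<sigma>' \<alpha> \<beta>" and v: "square f f' c d \<tau>"
  shows "square_map f f'' (a \<diamond> c) (b \<diamond> d) (paste f f' f'' c d a b \<sigma> \<tau>)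
                    (a' \<diamond> c) (b' \<diamond> d) (paste f f' f'' c d a' b' \<sigma>' \<tau>) (\<alpha> \<rhd> c) (\<beta> \<rhd> d)"
proof -
  have "square f' f'' a b \<sigma>" "square f' f'' a' b' \<sigma>'" "\<alpha> \<in> A2" "dm \<alpha> = a" "cd \<alpha> = a'"
    "\<beta> \<in> A2" "dm \<beta> = b" "cd \<beta> = b'"
    using p unfolding square_map_def by auto
  then show ?thesis
    using square_paste[OF v] v paste_whisker_right_natural[OF p v]
    by (intro square_mapI) (simp_all add: square_def)
qed

lemma square_map_hcomp:
  assumes p2: "square_map f' f'' a b \<sigma> a' b' \<sigma>' \<alpha>2 \<beta>2" and p1: "square_map f f' c d \<tau> c' d' \<tau>' \<alpha> \<beta>"
  shows "square_map f f'' (a \<diamond> c) (b \<diamond> d) (paste f f' f'' c d a b \<sigma> \<tau>)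
                    (a' \<diamond> c') (b' \<diamond> d') (paste f f' f'' c' d' a' b' \<sigma>' \<tau>') (\<alpha>2 \<star> \<alpha>) (\<beta>2 \<star> \<beta>)"
proof -
  have t2: "square f' f'' a b \<sigma>" "square f' f'' a' b' \<sigma>'" "\<alpha>2 \<in> A2" "dm \<alpha>2 = a" "cd \<alpha>2 = a'"
     "\<beta>2 \<in> A2" "dm \<beta>2 = b" "cd \<beta>2 = b'" using p2 unfolding square_map_def by auto
  have t1: "square f f' c d \<tau>" "square f f' c' d' \<tau>'" "\<alpha> \<in> A2" "dm \<alpha> = c" "cd \<alpha> = c'"
     "\<beta> \<in> A2" "dm \<beta> = d" "cd \<beta> = d'" using p1 unfolding square_map_def by auto
  note ctx = t1[unfolded square_def] t2[unfolded square_def]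
  have "square_map f f'' (a \<diamond> c) (b \<diamond> d) (paste f f' f'' c d a b \<sigma> \<tau>) (a' \<diamond> c') (b' \<diamond> d') (paste f f' f'' c' d' a' b' \<sigma>' \<tau>')
         ((\<alpha>2 \<rhd> c') \<cdot> (a \<lhd> \<alpha>)) ((\<beta>2 \<rhd> d') \<cdot> (b \<lhd> \<beta>))"
    by (rule square_map_vcomp[OF square_map_whisker_left[OF t2(1) p1] square_map_whisker_right[OF p2 t1(2)]])
  moreover have "\<alpha>2 \<star> \<alpha> = (\<alpha>2 \<rhd> c') \<cdot> (a \<lhd> \<alpha>)" using hc_split1[of \<alpha>2 \<alpha>] ctx by simp
  moreover have "\<beta>2 \<star> \<beta> = (\<beta>2 \<rhd> d') \<cdot> (b \<lhd> \<beta>)" using hc_split1[of \<beta>2 \<beta>] ctx by simp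
  ultimately show ?thesis by simp
qed

text \<open>
  \<open>runit_lunit f : f * 1 \<Rightarrow> 1 * f\<close> makes \<open>(1, 1)\<close> an identity square on \<open>f\<close>; its inverse
  \<open>lunit_runit f\<close> below is the 2-cell of the square \<open>R f\<close> between identities.
\<close>

definition runit_lunit where "runit_lunit f = vinv (L f) \<cdot> Rr f"

lemma runit_lunit_cell[simp]:
  assumes "f \<in> A1"
  shows "runit_lunit f \<in> A2" "dm (runit_lunit f) = f \<diamond> U (sr f)" "cd (runit_lunit f) = U (tg f) \<diamond> f"
    "L f \<cdot> runit_lunit f = Rr f"
  using assms unfolding runit_lunit_def by simp_all

lemma square_id: "f \<in> A1 \<Longrightarrow> square f f (U (sr f)) (U (tg f)) (runit_lunit f)"
  unfolding square_def by simp

lemma square_map_lunit: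
  assumes u: "square f f' a b \<sigma>"
  shows "square_map f f' (U (sr f') \<diamond> a) (U (tg f') \<diamond> b) (paste f f' f' a b (U (sr f')) (U (tg f')) (runit_lunit f') \<sigma>)
                    a b \<sigma> (L a) (L b)"
proof -
  note ctx = u[unfolded square_def]
  have k1': "L (b \<diamond> f) = (L b \<rhd> f) \<cdot> vinv (As (U (tg b)) b f)"
    by (rule vc_move_right[OF lunit_hcomp]) (use ctx in simp_all)
  have k1: "L (b \<diamond> f) = (L b \<rhd> f) \<cdot> vinv (As (U (tg f')) b f)"
    using k1' ctx by simp
  have n: "L (b \<diamond> f) \<cdot> (U (tg f') \<lhd> \<sigma>) = \<sigma> \<cdot> L (f' \<diamond> a)"
    using L_nat[of \<sigma>] ctx by simp
  have k2: "L (f' \<diamond> a) \<cdot> As (U (tg f')) f' a = L f' \<rhd> a"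
    using lunit_hcomp[of f' a] ctx by simp
  have w: "(L f' \<rhd> a) \<cdot> (runit_lunit f' \<rhd> a) = Rr f' \<rhd> a"
    using wr_vc[of "L f'" "runit_lunit f'" a] ctx by simp
  have t: "f' \<lhd> L a = (Rr f' \<rhd> a) \<cdot> vinv (As f' (U (tg a)) a)"
    by (rule vc_move_right[OF triangle]) (use ctx in simp_all)
  have "(L b \<rhd> f) \<cdot> paste f f' f' a b (U (sr f')) (U (tg f')) (runit_lunit f') \<sigma> =
     (L b \<rhd> f) \<cdot> vinv (As (U (tg f')) b f) \<cdot> (U (tg f') \<lhd> \<sigma>) \<cdot> As (U (tg f')) f' a \<cdot> (runit_lunit f' \<rhd> a) \<cdot> vinv (As f' (U (sr f')) a)"
    unfolding paste_def using ctx by simp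
  also have "\<dots> = L (b \<diamond> f) \<cdot> (U (tg f') \<lhd> \<sigma>) \<cdot> As (U (tg f')) f' a \<cdot> (runit_lunit f' \<rhd> a) \<cdot> vinv (As f' (U (sr f')) a)"
    using ctx by (simp add: vc_rewrite2[OF k1[symmetric]])
  also have "\<dots> = \<sigma> \<cdot> L (f' \<diamond> a) \<cdot> As (U (tg f')) f' a \<cdot> (runit_lunit f' \<rhd> a) \<cdot> vinv (As f' (U (sr f')) a)"
    using ctx by (simp add: vc_rewrite2[OF n])
  also have "\<dots> = \<sigma> \<cdot> (L f' \<rhd> a) \<cdot> (runit_lunit f' \<rhd> a) \<cdot> vinv (As f' (U (sr f')) a)"
    using ctx by (simp add: vc_rewrite2[OF k2])
  also have "\<dots> = \<sigma> \<cdot> (Rr f' \<rhd> a) \<cdot> vinv (As f' (U (sr f')) a)"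
    using ctx by (simp add: vc_rewrite2[OF w])
  also have "\<dots> = \<sigma> \<cdot> (f' \<lhd> L a)"
    using t ctx by simp
  finally have eq: "\<sigma> \<cdot> (f' \<lhd> L a) = (L b \<rhd> f) \<cdot> paste f f' f' a b (U (sr f')) (U (tg f')) (runit_lunit f') \<sigma>" by simp
  show ?thesis
    apply (rule square_mapI)
    using square_paste[OF u square_id[of f']] ctx eq u by simp_all
qed

lemma square_map_runit:
  assumes u: "square f f' a b \<sigma>"
  shows "square_map f f' (a \<diamond> U (sr f)) (b \<diamond> U (tg f)) (paste f f f' (U (sr f)) (U (tg f)) a b \<sigma> (runit_lunit f))
                    a b \<sigma> (Rr a) (Rr b)"
proof -
  note ctx = u[unfolded square_def]
  have t: "b \<lhd> L f = (Rr b \<rhd> f) \<cdot> vinv (As b (U (tg f)) f)"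
    by (rule vc_move_right[OF triangle]) (use ctx in simp_all)
  have w: "(b \<lhd> L f) \<cdot> (b \<lhd> runit_lunit f) = b \<lhd> Rr f"
    using wl_vc[of "L f" "runit_lunit f" b] ctx by simp
  have k2: "(b \<lhd> Rr f) \<cdot> As b f (U (sr f)) = Rr (b \<diamond> f)"
    using runit_hcomp[of b f] ctx by simp
  have n: "Rr (b \<diamond> f) \<cdot> (\<sigma> \<rhd> U (sr f)) = \<sigma> \<cdot> Rr (f' \<diamond> a)"
    using R_nat[of \<sigma>] ctx by simp
  have k3: "f' \<lhd> Rr a = Rr (f' \<diamond> a) \<cdot> vinv (As f' a (U (sr a)))"
    by (rule vc_move_right[OF runit_hcomp]) (use ctx in simp_all)
  have "(Rr b \<rhd> f) \<cdot> paste f f f' (U (sr f)) (U (tg f)) a b \<sigma> (runit_lunit f) =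
     (Rr b \<rhd> f) \<cdot> vinv (As b (U (tg f)) f) \<cdot> (b \<lhd> runit_lunit f) \<cdot> As b f (U (sr f)) \<cdot> (\<sigma> \<rhd> U (sr f)) \<cdot> vinv (As f' a (U (sr f)))"
    unfolding paste_def using ctx by simp
  also have "\<dots> = (b \<lhd> L f) \<cdot> (b \<lhd> runit_lunit f) \<cdot> As b f (U (sr f)) \<cdot> (\<sigma> \<rhd> U (sr f)) \<cdot> vinv (As f' a (U (sr f)))"
    using ctx by (simp add: vc_rewrite2[OF t[symmetric]])
  also have "\<dots> = (b \<lhd> Rr f) \<cdot> As b f (U (sr f)) \<cdot> (\<sigma> \<rhd> U (sr f)) \<cdot> vinv (As f' a (U (sr f)))"
    using ctx by (simp add: vc_rewrite2[OF w])
  also have "\<dots> = Rr (b \<diamond> f) \<cdot> (\<sigma> \<rhd> U (sr f)) \<cdot> vinv (As f' a (U (sr f)))"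
    using ctx by (simp add: vc_rewrite2[OF k2])
  also have "\<dots> = \<sigma> \<cdot> Rr (f' \<diamond> a) \<cdot> vinv (As f' a (U (sr f)))"
    using ctx by (simp add: vc_rewrite2[OF n])
  also have "\<dots> = \<sigma> \<cdot> (f' \<lhd> Rr a)"
    using k3 ctx by simp
  finally have eq: "\<sigma> \<cdot> (f' \<lhd> Rr a) = (Rr b \<rhd> f) \<cdot> paste f f f' (U (sr f)) (U (tg f)) a b \<sigma> (runit_lunit f)" by simp
  show ?thesis
    apply (rule square_mapI)
    using square_paste[OF square_id[of f] u] ctx eq u by simp_all
qed

text \<open>The pentagon, solved for each of the four associators that occur in pasting three squares.\<close>

context
  fixes k h g f
  assumes pf: "f \<in> A1" "g \<in> A1" "h \<in> A1" "k \<in> A1" "tg f = sr g" "tg g = sr h" "tg h = sr k"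
begin
lemma whisker_left_asc_eq:
  "k \<lhd> As h g f =
   As k h (g \<diamond> f) \<cdot> As (k \<diamond> h) g f \<cdot> (vinv (As k h g) \<rhd> f) \<cdot> vinv (As k (h \<diamond> g) f)"
proof -
  have "(k \<lhd> As h g f) \<cdot> (As k (h \<diamond> g) f \<cdot> (As k h g \<rhd> f)) = As k h (g \<diamond> f) \<cdot> As (k \<diamond> h) g f"
    using pentagon[OF pf] by simp
  hence "k \<lhd> As h g f = (As k h (g \<diamond> f) \<cdot> As (k \<diamond> h) g f) \<cdot> vinv (As k (h \<diamond> g) f \<cdot> (As k h g \<rhd> f))"
    by (rule vc_move_right) (use pf in simp_all)
  thus ?thesis using pf by simp
qed

lemma vinv_asc_whisker_left_asc_eq:
  "vinv (As k h (g \<diamond> f)) \<cdot> (k \<lhd> As h g f) =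
   As (k \<diamond> h) g f \<cdot> (vinv (As k h g) \<rhd> f) \<cdot> vinv (As k (h \<diamond> g) f)"
  using whisker_left_asc_eq pf by simp

lemma whisker_left_vinv_asc_eq:
  "(k \<lhd> vinv (As h g f)) \<cdot> As k h (g \<diamond> f) =
   As k (h \<diamond> g) f \<cdot> (As k h g \<rhd> f) \<cdot> vinv (As (k \<diamond> h) g f)"
proof -
  have "((k \<lhd> vinv (As h g f)) \<cdot> As k h (g \<diamond> f)) \<cdot> As (k \<diamond> h) g f = (k \<lhd> vinv (As h g f)) \<cdot> (As k h (g \<diamond> f) \<cdot> As (k \<diamond> h) g f)"
    using pf by simp
  also have "\<dots> = (k \<lhd> vinv (As h g f)) \<cdot> (k \<lhd> As h g f) \<cdot> As k (h \<diamond> g) f \<cdot> (As k h g \<rhd> f)"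
    using pentagon[OF pf] by simp
  also have "\<dots> = As k (h \<diamond> g) f \<cdot> (As k h g \<rhd> f)" using pf by simp
  finally have "(k \<lhd> vinv (As h g f)) \<cdot> As k h (g \<diamond> f) = (As k (h \<diamond> g) f \<cdot> (As k h g \<rhd> f)) \<cdot> vinv (As (k \<diamond> h) g f)"
    by (rule vc_move_right) (use pf in simp_all)
  thus ?thesis using pf by simp
qed

lemma vinv_asc_whisker_left_vinv_asc_eq:
  "vinv (As k (h \<diamond> g) f) \<cdot> (k \<lhd> vinv (As h g f)) =
   (As k h g \<rhd> f) \<cdot> vinv (As (k \<diamond> h) g f) \<cdot> vinv (As k h (g \<diamond> f))"
proof -
  have "vinv (k \<lhd> As h g f) = vinv (As k h (g \<diamond> f) \<cdot> As (k \<diamond> h) g f \<cdot> (vinv (As k h g) \<rhd> f) \<cdot> vinv (As k (h \<diamond> g) f))"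
    using whisker_left_asc_eq by simp
  hence "k \<lhd> vinv (As h g f) = As k (h \<diamond> g) f \<cdot> (As k h g \<rhd> f) \<cdot> vinv (As (k \<diamond> h) g f) \<cdot> vinv (As k h (g \<diamond> f))"
    using pf by simp
  thus ?thesis using pf by simp
qed
end

text \<open>
  Long composites are handled as lists of composable 2-cells: rewriting a segment of a list only
  needs the typing of its entries, whereas rewriting inside a nested composite re-derives the
  typing of every sub-composite.
\<close>

fun vcomp_list :: "'c list \<Rightarrow> 'c" where
  "vcomp_list [] = undefined"
| "vcomp_list [x] = x"
| "vcomp_list (x # y # xs) = x \<cdot> vcomp_list (y # xs)"

fun composable :: "'c list \<Rightarrow> bool" where
  "composable [] = True"
| "composable [x] = (x \<in> A2)"
| "composable (x # y # xs) = (x \<in> A2 \<and> dm x = cd y \<and> composable (y # xs))"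

lemma vcomp_list_cell:
  "composable xs \<Longrightarrow> xs \<noteq> [] \<Longrightarrow>
   vcomp_list xs \<in> A2 \<and> dm (vcomp_list xs) = dm (last xs) \<and> cd (vcomp_list xs) = cd (hd xs)"
proof (induction xs rule: vcomp_list.induct)
  case (3 x y xs)
  have "vcomp_list (y # xs) \<in> A2 \<and> dm (vcomp_list (y # xs)) = dm (last (y # xs)) \<and> cd (vcomp_list (y # xs)) = cd y"
    using 3 by simp
  then show ?case using 3 by simp
qed auto

lemma composable_appendD:
  "composable (xs @ ys) \<Longrightarrow>
   composable xs \<and> composable ys \<and> (xs \<noteq> [] \<longrightarrow> ys \<noteq> [] \<longrightarrow> dm (last xs) = cd (hd ys))"
proof (induction xs rule: vcomp_list.induct)
  case (2 x)
  then show ?case by (cases ys) auto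
next
  case (3 x y xs)
  then show ?case by auto
qed auto

lemma composable_hd: "composable (x # xs) \<Longrightarrow> x \<in> A2" by (cases xs) auto

lemma composable_appendI:
  "composable xs \<Longrightarrow> composable ys \<Longrightarrow> (xs \<noteq> [] \<and> ys \<noteq> [] \<longrightarrow> dm (last xs) = cd (hd ys)) \<Longrightarrow>
   composable (xs @ ys)"
proof (cases "ys = []")
  case False
  assume a: "composable xs" "composable ys" "(xs \<noteq> [] \<and> ys \<noteq> [] \<longrightarrow> dm (last xs) = cd (hd ys))"
  show ?thesis using a False
  proof (induction xs rule: vcomp_list.induct)
    case (2 x)
    then show ?case by (cases ys) auto
  next
    case (3 x y xs)
    have "composable ((y # xs) @ ys)" using 3 by (intro 3(1)) auto
    then show ?case using 3 by simp
  qed auto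
qed auto

lemma vcomp_list_append:
  "composable (xs @ ys) \<Longrightarrow> xs \<noteq> [] \<Longrightarrow> ys \<noteq> [] \<Longrightarrow> vcomp_list (xs @ ys) = vcomp_list xs \<cdot> vcomp_list ys"
proof (induction xs rule: vcomp_list.induct)
  case (2 x)
  then show ?case by (cases ys) auto
next
  case (3 x y xs)
  have o: "composable (y # xs)" "composable ys" "x \<in> A2" "dm x = cd y" "dm (last (y # xs)) = cd (hd ys)"
    using composable_appendD[OF 3(2)] 3(4) by auto
  have h: "vcomp_list ((y # xs) @ ys) = vcomp_list (y # xs) \<cdot> vcomp_list ys" using 3 by auto
  have t1: "vcomp_list (y # xs) \<in> A2" "dm (vcomp_list (y # xs)) = dm (last (y # xs))" "cd (vcomp_list (y # xs)) = cd y"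
    using vcomp_list_cell[OF o(1)] by auto
  have t2: "vcomp_list ys \<in> A2" "cd (vcomp_list ys) = cd (hd ys)" using vcomp_list_cell[OF o(2)] 3 by auto
  have "vcomp_list ((x # y # xs) @ ys) = x \<cdot> (vcomp_list (y # xs) \<cdot> vcomp_list ys)" using h by simp
  also have "\<dots> = (x \<cdot> vcomp_list (y # xs)) \<cdot> vcomp_list ys" using t1 t2 o by simp
  finally show ?case by simp
qed auto

lemma vcomp_list_replace:
  "composable (pre @ xs @ post) \<Longrightarrow> composable xs' \<Longrightarrow> xs \<noteq> [] \<Longrightarrow> xs' \<noteq> [] \<Longrightarrow>
   vcomp_list xs = vcomp_list xs' \<Longrightarrow> vcomp_list (pre @ xs @ post) = vcomp_list (pre @ xs' @ post)"
proof -
  assume a: "composable (pre @ xs @ post)" "composable xs'" "xs \<noteq> []" "xs' \<noteq> []" "vcomp_list xs = vcomp_list xs'"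
  have o1: "composable pre" "composable (xs @ post)" "pre \<noteq> [] \<Longrightarrow> dm (last pre) = cd (hd xs)"
    using composable_appendD[OF a(1)] a(3) by auto
  have o2: "composable xs" "composable post" "post \<noteq> [] \<Longrightarrow> dm (last xs) = cd (hd post)"
    using composable_appendD[OF o1(2)] a(3) by auto
  have t: "dm (vcomp_list xs) = dm (last xs)" "cd (vcomp_list xs) = cd (hd xs)"
    "dm (vcomp_list xs') = dm (last xs')" "cd (vcomp_list xs') = cd (hd xs')"
    using vcomp_list_cell[OF o2(1) a(3)] vcomp_list_cell[OF a(2) a(4)] by auto
  have j1: "dm (last xs') = dm (last xs)" "cd (hd xs') = cd (hd xs)" using t a(5) by metis+
  have o3: "composable (xs' @ post)" using composable_appendI[OF a(2) o2(2)] o2(3) j1 by simp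
  have o4: "composable (pre @ xs' @ post)" using composable_appendI[OF o1(1) o3] o1(3) j1 a(4) by simp
  have 1: "vcomp_list (xs @ post) = vcomp_list (xs' @ post)"
  proof (cases "post = []")
    case False
    thus ?thesis using vcomp_list_append[OF o1(2) a(3)] vcomp_list_append[OF o3 a(4)] a(5) by simp
  qed (use a in simp)
  show ?thesis
  proof (cases "pre = []")
    case False
    thus ?thesis using vcomp_list_append[OF a(1) False] vcomp_list_append[OF o4 False] 1 a(3,4) by simp
  qed (use 1 in simp)
qed

lemma whisker_left_vcomp_list: "composable xs \<Longrightarrow> xs \<noteq> [] \<Longrightarrow> b \<in> A1 \<Longrightarrow> tg (dm (last xs)) = sr b \<Longrightarrow>
   b \<lhd> vcomp_list xs = vcomp_list (map (\<lambda>x. b \<lhd> x) xs) \<and> composable (map (\<lambda>x. b \<lhd> x) xs)"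
proof (induction xs rule: vcomp_list.induct)
  case (3 x y xs)
  have o: "composable (y # xs)" "x \<in> A2" "dm x = cd y" using 3 by auto
  have yA: "y \<in> A2" using composable_hd o(1) by blast
  have t1: "vcomp_list (y # xs) \<in> A2" "dm (vcomp_list (y # xs)) = dm (last (y # xs))" "cd (vcomp_list (y # xs)) = cd y"
    using vcomp_list_cell[OF o(1)] by auto
  have s: "tg (dm x) = sr b"
  proof -
    have "tg (dm x) = tg (cd (vcomp_list (y # xs)))" by (simp only: t1(3) o(3))
    also have "\<dots> = tg (dm (last (y # xs)))" by (simp only: dom_cod_arr(4)[OF t1(1)] t1(2))
    finally show ?thesis using 3(5) by simp
  qed
  have IH: "b \<lhd> vcomp_list (y # xs) = vcomp_list (map (\<lambda>x. b \<lhd> x) (y # xs)) \<and> composable (map (\<lambda>x. b \<lhd> x) (y # xs))"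
    using 3 o by simp
  have e1: "b \<lhd> vcomp_list (x # y # xs) = (b \<lhd> x) \<cdot> (b \<lhd> vcomp_list (y # xs))"
    using wl_vc[of x "vcomp_list (y # xs)" b] t1 s 3(4,5) o by simp
  have s2: "tg (dm y) = sr b"
  proof -
    have "tg (dm y) = tg (cd y)" using yA by simp
    thus ?thesis using s o by simp
  qed
  show ?case using IH e1 o s s2 3(4) yA by simp
qed auto

lemma whisker_right_vcomp_list: "composable xs \<Longrightarrow> xs \<noteq> [] \<Longrightarrow> b \<in> A1 \<Longrightarrow> tg b = sr (dm (last xs)) \<Longrightarrow>
   vcomp_list xs \<rhd> b = vcomp_list (map (\<lambda>x. x \<rhd> b) xs) \<and> composable (map (\<lambda>x. x \<rhd> b) xs)"
proof (induction xs rule: vcomp_list.induct)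
  case (3 x y xs)
  have o: "composable (y # xs)" "x \<in> A2" "dm x = cd y" using 3 by auto
  have yA: "y \<in> A2" using composable_hd o(1) by blast
  have t1: "vcomp_list (y # xs) \<in> A2" "dm (vcomp_list (y # xs)) = dm (last (y # xs))" "cd (vcomp_list (y # xs)) = cd y"
    using vcomp_list_cell[OF o(1)] by auto
  have s: "sr (dm x) = tg b"
  proof -
    have "sr (dm x) = sr (cd (vcomp_list (y # xs)))" by (simp only: t1(3) o(3))
    also have "\<dots> = sr (dm (last (y # xs)))" by (simp only: dom_cod_arr(3)[OF t1(1)] t1(2))
    finally show ?thesis using 3(5) by simp
  qed
  have IH: "vcomp_list (y # xs) \<rhd> b = vcomp_list (map (\<lambda>x. x \<rhd> b) (y # xs)) \<and> composable (map (\<lambda>x. x \<rhd> b) (y # xs))"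
    using 3 o by simp
  have e1: "vcomp_list (x # y # xs) \<rhd> b = (x \<rhd> b) \<cdot> (vcomp_list (y # xs) \<rhd> b)"
    using wr_vc[of x "vcomp_list (y # xs)" b] t1 s 3(4,5) o by simp
  have s2: "sr (dm y) = tg b"
  proof -
    have "sr (dm y) = sr (cd y)" using yA by simp
    thus ?thesis using s o by simp
  qed
  show ?case using IH e1 o s s2 3(4) yA by simp
qed auto

declare vcomp_list.simps[simp del]

lemma vcomp_list_singleton[simp]: "vcomp_list [x] = x" by (simp add: vcomp_list.simps)

lemma vcomp_list_snoc: "composable (xs @ [y]) \<Longrightarrow> xs \<noteq> [] \<Longrightarrow> vcomp_list xs \<cdot> y = vcomp_list (xs @ [y])"
  using vcomp_list_append[of xs "[y]"] by simp

lemma vcomp_list_replace_at: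
  assumes "vcomp_list xs = vcomp_list xs'" and "take (length xs) (drop k ys) = xs"
    and "ys' = take k ys @ xs' @ drop (k + length xs) ys"
    and "composable ys" "composable xs'" "xs \<noteq> []" "xs' \<noteq> []"
  shows "vcomp_list ys = vcomp_list ys'"
proof -
  have "ys = take k ys @ xs @ drop (k + length xs) ys"
    using assms(2) by (metis add.commute append_take_drop_id drop_drop)
  then show ?thesis
    using vcomp_list_replace[of "take k ys" xs "drop (k + length xs) ys" xs'] assms by metis
qed

lemma paste_as_list:
  "paste f f' f'' a b a' b' \<tau> \<sigma> = vcomp_list [vinv (As b' b f), b' \<lhd> \<sigma>, As b' f' a, \<tau> \<rhd> a, vinv (As f'' a' a)]"
  by (simp add: paste_def vcomp_list.simps)

lemma paste_cell:
  assumes "square f f' a b \<sigma>" "square f' f'' a' b' \<tau>"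
  shows "paste f f' f'' a b a' b' \<tau> \<sigma> \<in> A2" "dm (paste f f' f'' a b a' b' \<tau> \<sigma>) = f'' \<diamond> (a' \<diamond> a)"
    "cd (paste f f' f'' a b a' b' \<tau> \<sigma>) = (b' \<diamond> b) \<diamond> f"
  using square_paste[OF assms] unfolding square_def by auto

text \<open>
  Both pastings of three squares, composed with the associator of the appropriate side, are
  rewritten into the same chain of sixteen 2-cells, using the pentagon four times on each side.
\<close>

context
  fixes f0 f1 f2 f3 a1 a2 a3 b1 b2 b3 \<sigma>1 \<sigma>2 \<sigma>3
  assumes u1: "square f0 f1 a1 b1 \<sigma>1" and u2: "square f1 f2 a2 b2 \<sigma>2" and u3: "square f2 f3 a3 b3 \<sigma>3"
begin

lemma paste_assoc_left_chain:
  "paste f0 f2 f3 (a2 \<diamond> a1) (b2 \<diamond> b1) a3 b3 \<sigma>3 (paste f0 f1 f2 a1 b1 a2 b2 \<sigma>2 \<sigma>1) \<cdot> (f3 \<lhd> As a3 a2 a1) =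
   vcomp_list [As b3 b2 b1 \<rhd> f0, vinv (As (b3 \<diamond> b2) b1 f0), vinv (As b3 b2 (b1 \<diamond> f0)),
               b3 \<lhd> (b2 \<lhd> \<sigma>1), As b3 b2 (f1 \<diamond> a1), As (b3 \<diamond> b2) f1 a1,
               vinv (As b3 b2 f1) \<rhd> a1, vinv (As b3 (b2 \<diamond> f1) a1), b3 \<lhd> (\<sigma>2 \<rhd> a1),
               As b3 (f2 \<diamond> a2) a1, As b3 f2 a2 \<rhd> a1, vinv (As (b3 \<diamond> f2) a2 a1),
               \<sigma>3 \<rhd> (a2 \<diamond> a1), As (f3 \<diamond> a3) a2 a1, vinv (As f3 a3 a2) \<rhd> a1,
               vinv (As f3 (a3 \<diamond> a2) a1)]"
proof -
  note ctx = u1[unfolded square_def] u2[unfolded square_def] u3[unfolded square_def]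
  note cells = paste_cell[OF u1 u2] paste_cell[OF u2 u3]
  have w: "vcomp_list [b3 \<lhd> paste f0 f1 f2 a1 b1 a2 b2 \<sigma>2 \<sigma>1] = vcomp_list [b3 \<lhd> vinv (As b2 b1 f0), b3 \<lhd> (b2 \<lhd> \<sigma>1), b3 \<lhd> As b2 f1 a1,
    b3 \<lhd> (\<sigma>2 \<rhd> a1), b3 \<lhd> vinv (As f2 a2 a1)]"
    using whisker_left_vcomp_list[of "[vinv (As b2 b1 f0), b2 \<lhd> \<sigma>1, As b2 f1 a1, \<sigma>2 \<rhd> a1, vinv (As f2 a2 a1)]" b3] ctx
    by (simp add: paste_as_list)
  have e1: "vcomp_list [vinv (As b3 (b2 \<diamond> b1) f0), b3 \<lhd> vinv (As b2 b1 f0)] = vcomp_list [As b3 b2 b1 \<rhd> f0, vinv (As (b3 \<diamond> b2) b1 f0), vinv (As b3 b2 (b1 \<diamond> f0))]"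
    unfolding vcomp_list.simps by (rule vinv_asc_whisker_left_vinv_asc_eq) (use ctx in simp_all)
  have e2: "vcomp_list [b3 \<lhd> As b2 f1 a1] = vcomp_list [As b3 b2 (f1 \<diamond> a1), As (b3 \<diamond> b2) f1 a1, vinv (As b3 b2 f1) \<rhd> a1,
    vinv (As b3 (b2 \<diamond> f1) a1)]"
    unfolding vcomp_list.simps by (rule whisker_left_asc_eq) (use ctx in simp_all)
  have e3: "vcomp_list [b3 \<lhd> vinv (As f2 a2 a1), As b3 f2 (a2 \<diamond> a1)] = vcomp_list [As b3 (f2 \<diamond> a2) a1, As b3 f2 a2 \<rhd> a1, vinv (As (b3 \<diamond> f2) a2 a1)]"
    unfolding vcomp_list.simps by (rule whisker_left_vinv_asc_eq) (use ctx in simp_all)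
  have e4: "vcomp_list [vinv (As f3 a3 (a2 \<diamond> a1)), f3 \<lhd> As a3 a2 a1] = vcomp_list [As (f3 \<diamond> a3) a2 a1, vinv (As f3 a3 a2) \<rhd> a1, vinv (As f3 (a3 \<diamond> a2) a1)]"
    unfolding vcomp_list.simps by (rule vinv_asc_whisker_left_asc_eq) (use ctx in simp_all)
  have "paste f0 f2 f3 (a2 \<diamond> a1) (b2 \<diamond> b1) a3 b3 \<sigma>3 (paste f0 f1 f2 a1 b1 a2 b2 \<sigma>2 \<sigma>1) \<cdot> (f3 \<lhd> As a3 a2 a1) =
      vcomp_list ([vinv (As b3 (b2 \<diamond> b1) f0), b3 \<lhd> paste f0 f1 f2 a1 b1 a2 b2 \<sigma>2 \<sigma>1, As b3 f2 (a2 \<diamond> a1),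
                  \<sigma>3 \<rhd> (a2 \<diamond> a1), vinv (As f3 a3 (a2 \<diamond> a1))] @ [f3 \<lhd> As a3 a2 a1])"
    unfolding paste_as_list[of f0 f2 f3] by (rule vcomp_list_snoc) (use ctx cells in simp_all)
  also have "\<dots> = vcomp_list [vinv (As b3 (b2 \<diamond> b1) f0), b3 \<lhd> vinv (As b2 b1 f0), b3 \<lhd> (b2 \<lhd> \<sigma>1),
                  b3 \<lhd> As b2 f1 a1, b3 \<lhd> (\<sigma>2 \<rhd> a1), b3 \<lhd> vinv (As f2 a2 a1),
                  As b3 f2 (a2 \<diamond> a1), \<sigma>3 \<rhd> (a2 \<diamond> a1), vinv (As f3 a3 (a2 \<diamond> a1)),
                  f3 \<lhd> As a3 a2 a1]"
    by (rule vcomp_list_replace_at[OF w, of 1]) (use ctx cells in simp_all)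
  also have "\<dots> = vcomp_list [vinv (As b3 (b2 \<diamond> b1) f0), b3 \<lhd> vinv (As b2 b1 f0), b3 \<lhd> (b2 \<lhd> \<sigma>1),
                  b3 \<lhd> As b2 f1 a1, b3 \<lhd> (\<sigma>2 \<rhd> a1), b3 \<lhd> vinv (As f2 a2 a1),
                  As b3 f2 (a2 \<diamond> a1), \<sigma>3 \<rhd> (a2 \<diamond> a1), As (f3 \<diamond> a3) a2 a1,
                  vinv (As f3 a3 a2) \<rhd> a1, vinv (As f3 (a3 \<diamond> a2) a1)]"
    by (rule vcomp_list_replace_at[OF e4, of 8]) (use ctx cells in simp_all)
  also have "\<dots> = vcomp_list [vinv (As b3 (b2 \<diamond> b1) f0), b3 \<lhd> vinv (As b2 b1 f0), b3 \<lhd> (b2 \<lhd> \<sigma>1),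
                  b3 \<lhd> As b2 f1 a1, b3 \<lhd> (\<sigma>2 \<rhd> a1), As b3 (f2 \<diamond> a2) a1,
                  As b3 f2 a2 \<rhd> a1, vinv (As (b3 \<diamond> f2) a2 a1), \<sigma>3 \<rhd> (a2 \<diamond> a1),
                  As (f3 \<diamond> a3) a2 a1, vinv (As f3 a3 a2) \<rhd> a1, vinv (As f3 (a3 \<diamond> a2) a1)]"
    by (rule vcomp_list_replace_at[OF e3, of 5]) (use ctx cells in simp_all)
  also have "\<dots> = vcomp_list [vinv (As b3 (b2 \<diamond> b1) f0), b3 \<lhd> vinv (As b2 b1 f0), b3 \<lhd> (b2 \<lhd> \<sigma>1),
                  As b3 b2 (f1 \<diamond> a1), As (b3 \<diamond> b2) f1 a1, vinv (As b3 b2 f1) \<rhd> a1,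
                  vinv (As b3 (b2 \<diamond> f1) a1), b3 \<lhd> (\<sigma>2 \<rhd> a1), As b3 (f2 \<diamond> a2) a1,
                  As b3 f2 a2 \<rhd> a1, vinv (As (b3 \<diamond> f2) a2 a1), \<sigma>3 \<rhd> (a2 \<diamond> a1),
                  As (f3 \<diamond> a3) a2 a1, vinv (As f3 a3 a2) \<rhd> a1, vinv (As f3 (a3 \<diamond> a2) a1)]"
    by (rule vcomp_list_replace_at[OF e2, of 3]) (use ctx cells in simp_all)
  also have "\<dots> = vcomp_list [As b3 b2 b1 \<rhd> f0, vinv (As (b3 \<diamond> b2) b1 f0), vinv (As b3 b2 (b1 \<diamond> f0)),
                  b3 \<lhd> (b2 \<lhd> \<sigma>1), As b3 b2 (f1 \<diamond> a1), As (b3 \<diamond> b2) f1 a1,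
                  vinv (As b3 b2 f1) \<rhd> a1, vinv (As b3 (b2 \<diamond> f1) a1), b3 \<lhd> (\<sigma>2 \<rhd> a1),
                  As b3 (f2 \<diamond> a2) a1, As b3 f2 a2 \<rhd> a1, vinv (As (b3 \<diamond> f2) a2 a1),
                  \<sigma>3 \<rhd> (a2 \<diamond> a1), As (f3 \<diamond> a3) a2 a1, vinv (As f3 a3 a2) \<rhd> a1,
                  vinv (As f3 (a3 \<diamond> a2) a1)]"
    by (rule vcomp_list_replace_at[OF e1, of 0]) (use ctx cells in simp_all)
  finally show ?thesis .
qed

lemma paste_assoc_right_chain:
  "(As b3 b2 b1 \<rhd> f0) \<cdot> paste f0 f1 f3 a1 b1 (a3 \<diamond> a2) (b3 \<diamond> b2) (paste f1 f2 f3 a2 b2 a3 b3 \<sigma>3 \<sigma>2) \<sigma>1 =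
   vcomp_list [As b3 b2 b1 \<rhd> f0, vinv (As (b3 \<diamond> b2) b1 f0), vinv (As b3 b2 (b1 \<diamond> f0)),
               b3 \<lhd> (b2 \<lhd> \<sigma>1), As b3 b2 (f1 \<diamond> a1), As (b3 \<diamond> b2) f1 a1,
               vinv (As b3 b2 f1) \<rhd> a1, vinv (As b3 (b2 \<diamond> f1) a1), b3 \<lhd> (\<sigma>2 \<rhd> a1),
               As b3 (f2 \<diamond> a2) a1, As b3 f2 a2 \<rhd> a1, vinv (As (b3 \<diamond> f2) a2 a1),
               \<sigma>3 \<rhd> (a2 \<diamond> a1), As (f3 \<diamond> a3) a2 a1, vinv (As f3 a3 a2) \<rhd> a1,
               vinv (As f3 (a3 \<diamond> a2) a1)]"
proof -
  note ctx = u1[unfolded square_def] u2[unfolded square_def] u3[unfolded square_def]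
  note cells = paste_cell[OF u1 u2] paste_cell[OF u2 u3]
  have p: "vcomp_list [paste f1 f2 f3 a2 b2 a3 b3 \<sigma>3 \<sigma>2 \<rhd> a1] = vcomp_list [vinv (As b3 b2 f1) \<rhd> a1, (b3 \<lhd> \<sigma>2) \<rhd> a1, As b3 f2 a2 \<rhd> a1,
    (\<sigma>3 \<rhd> a2) \<rhd> a1, vinv (As f3 a3 a2) \<rhd> a1]"
    using whisker_right_vcomp_list[of "[vinv (As b3 b2 f1), b3 \<lhd> \<sigma>2, As b3 f2 a2, \<sigma>3 \<rhd> a2, vinv (As f3 a3 a2)]" a1] ctx
    by (simp add: paste_as_list)
  have n1: "vcomp_list [(b3 \<diamond> b2) \<lhd> \<sigma>1] = vcomp_list [vinv (As b3 b2 (b1 \<diamond> f0)), b3 \<lhd> (b2 \<lhd> \<sigma>1), As b3 b2 (f1 \<diamond> a1)]"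
    unfolding vcomp_list.simps using vc_move_left[OF As_nat_l[of \<sigma>1 b3 b2]] ctx by simp
  have n2: "vcomp_list [(b3 \<lhd> \<sigma>2) \<rhd> a1] = vcomp_list [vinv (As b3 (b2 \<diamond> f1) a1), b3 \<lhd> (\<sigma>2 \<rhd> a1), As b3 (f2 \<diamond> a2) a1]"
    unfolding vcomp_list.simps using vc_move_left[OF As_nat_m[of \<sigma>2 b3 a1]] ctx by simp
  have n3: "vcomp_list [(\<sigma>3 \<rhd> a2) \<rhd> a1] = vcomp_list [vinv (As (b3 \<diamond> f2) a2 a1), \<sigma>3 \<rhd> (a2 \<diamond> a1), As (f3 \<diamond> a3) a2 a1]"
    unfolding vcomp_list.simps using vc_move_left[OF As_nat_r[of \<sigma>3 a2 a1]] ctx by simp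
  have "(As b3 b2 b1 \<rhd> f0) \<cdot> paste f0 f1 f3 a1 b1 (a3 \<diamond> a2) (b3 \<diamond> b2) (paste f1 f2 f3 a2 b2 a3 b3 \<sigma>3 \<sigma>2) \<sigma>1 =
      vcomp_list [As b3 b2 b1 \<rhd> f0, vinv (As (b3 \<diamond> b2) b1 f0), (b3 \<diamond> b2) \<lhd> \<sigma>1,
                  As (b3 \<diamond> b2) f1 a1, paste f1 f2 f3 a2 b2 a3 b3 \<sigma>3 \<sigma>2 \<rhd> a1, vinv (As f3 (a3 \<diamond> a2) a1)]"
    unfolding paste_as_list[of f0 f1 f3] by (simp only: vcomp_list.simps(3))
  also have "\<dots> = vcomp_list [As b3 b2 b1 \<rhd> f0, vinv (As (b3 \<diamond> b2) b1 f0), (b3 \<diamond> b2) \<lhd> \<sigma>1,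
                  As (b3 \<diamond> b2) f1 a1, vinv (As b3 b2 f1) \<rhd> a1, (b3 \<lhd> \<sigma>2) \<rhd> a1,
                  As b3 f2 a2 \<rhd> a1, (\<sigma>3 \<rhd> a2) \<rhd> a1, vinv (As f3 a3 a2) \<rhd> a1,
                  vinv (As f3 (a3 \<diamond> a2) a1)]"
    by (rule vcomp_list_replace_at[OF p, of 4]) (use ctx cells in simp_all)
  also have "\<dots> = vcomp_list [As b3 b2 b1 \<rhd> f0, vinv (As (b3 \<diamond> b2) b1 f0), (b3 \<diamond> b2) \<lhd> \<sigma>1,
                  As (b3 \<diamond> b2) f1 a1, vinv (As b3 b2 f1) \<rhd> a1, (b3 \<lhd> \<sigma>2) \<rhd> a1,
                  As b3 f2 a2 \<rhd> a1, vinv (As (b3 \<diamond> f2) a2 a1), \<sigma>3 \<rhd> (a2 \<diamond> a1),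
                  As (f3 \<diamond> a3) a2 a1, vinv (As f3 a3 a2) \<rhd> a1, vinv (As f3 (a3 \<diamond> a2) a1)]"
    by (rule vcomp_list_replace_at[OF n3, of 7]) (use ctx cells in simp_all)
  also have "\<dots> = vcomp_list [As b3 b2 b1 \<rhd> f0, vinv (As (b3 \<diamond> b2) b1 f0), (b3 \<diamond> b2) \<lhd> \<sigma>1,
                  As (b3 \<diamond> b2) f1 a1, vinv (As b3 b2 f1) \<rhd> a1, vinv (As b3 (b2 \<diamond> f1) a1),
                  b3 \<lhd> (\<sigma>2 \<rhd> a1), As b3 (f2 \<diamond> a2) a1, As b3 f2 a2 \<rhd> a1,
                  vinv (As (b3 \<diamond> f2) a2 a1), \<sigma>3 \<rhd> (a2 \<diamond> a1), As (f3 \<diamond> a3) a2 a1,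
                  vinv (As f3 a3 a2) \<rhd> a1, vinv (As f3 (a3 \<diamond> a2) a1)]"
    by (rule vcomp_list_replace_at[OF n2, of 5]) (use ctx cells in simp_all)
  also have "\<dots> = vcomp_list [As b3 b2 b1 \<rhd> f0, vinv (As (b3 \<diamond> b2) b1 f0), vinv (As b3 b2 (b1 \<diamond> f0)),
                  b3 \<lhd> (b2 \<lhd> \<sigma>1), As b3 b2 (f1 \<diamond> a1), As (b3 \<diamond> b2) f1 a1,
                  vinv (As b3 b2 f1) \<rhd> a1, vinv (As b3 (b2 \<diamond> f1) a1), b3 \<lhd> (\<sigma>2 \<rhd> a1),
                  As b3 (f2 \<diamond> a2) a1, As b3 f2 a2 \<rhd> a1, vinv (As (b3 \<diamond> f2) a2 a1),
                  \<sigma>3 \<rhd> (a2 \<diamond> a1), As (f3 \<diamond> a3) a2 a1, vinv (As f3 a3 a2) \<rhd> a1,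
                  vinv (As f3 (a3 \<diamond> a2) a1)]"
    by (rule vcomp_list_replace_at[OF n1, of 2]) (use ctx cells in simp_all)
  finally show ?thesis .
qed

lemma square_map_assoc:
  "square_map f0 f3 ((a3 \<diamond> a2) \<diamond> a1) ((b3 \<diamond> b2) \<diamond> b1) (paste f0 f1 f3 a1 b1 (a3 \<diamond> a2) (b3 \<diamond> b2) (paste f1 f2 f3 a2 b2 a3 b3 \<sigma>3 \<sigma>2) \<sigma>1)
     (a3 \<diamond> (a2 \<diamond> a1)) (b3 \<diamond> (b2 \<diamond> b1)) (paste f0 f2 f3 (a2 \<diamond> a1) (b2 \<diamond> b1) a3 b3 \<sigma>3 (paste f0 f1 f2 a1 b1 a2 b2 \<sigma>2 \<sigma>1))
     (As a3 a2 a1) (As b3 b2 b1)"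
  using square_paste[OF u1 square_paste[OF u2 u3]] square_paste[OF square_paste[OF u1 u2] u3]
    u1 u2 u3 paste_assoc_left_chain paste_assoc_right_chain
  by (intro square_mapI) (simp_all add: square_def)

end

section \<open>Inverse squares\<close>

text \<open>
  \<open>unwhisker b x y\<close> inverts whiskering by \<open>b\<close> on 2-cells \<open>x \<Rightarrow> y\<close>: it whiskers by \<open>b\<^sup>*\<close> and
  conjugates with the counit \<open>e\<^sub>b\<close> and the left unitor.
\<close>

definition unwhisker where
  "unwhisker b x y \<psi> = L y \<cdot> (Ee b \<rhd> y) \<cdot> vinv (As (inv b) b y) \<cdot> (inv b \<lhd> \<psi>) \<cdot> As (inv b) b x \<cdot>
     (vinv (Ee b) \<rhd> x) \<cdot> vinv (L x)"

context
  fixes b x y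
  assumes bxy: "b \<in> A1" "x \<in> A1" "y \<in> A1" "sr y = sr x" "tg y = tg x" "tg x = sr b"
begin

lemma unwhisker_cell:
  "\<psi> \<in> A2 \<Longrightarrow> dm \<psi> = b \<diamond> x \<Longrightarrow> cd \<psi> = b \<diamond> y \<Longrightarrow>
   unwhisker b x y \<psi> \<in> A2 \<and> dm (unwhisker b x y \<psi>) = x \<and> cd (unwhisker b x y \<psi>) = y"
  unfolding unwhisker_def using bxy by simp

lemma unwhisker_whisker:
  assumes p: "\<phi> \<in> A2" "dm \<phi> = x" "cd \<phi> = y" shows "unwhisker b x y (b \<lhd> \<phi>) = \<phi>"
proof -
  note ctx = bxy p
  have n: "vinv (As (inv b) b y) \<cdot> (inv b \<lhd> (b \<lhd> \<phi>)) \<cdot> As (inv b) b x = (inv b \<diamond> b) \<lhd> \<phi>"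
    using vc_move_left[OF As_nat_l[of \<phi> "inv b" b]] ctx by simp
  have h: "(Ee b \<rhd> y) \<cdot> ((inv b \<diamond> b) \<lhd> \<phi>) = (U (sr b) \<lhd> \<phi>) \<cdot> (Ee b \<rhd> x)"
    using hc_split1[of "Ee b" \<phi>] hc_split2[of "Ee b" \<phi>] ctx by simp
  have l: "L y \<cdot> (U (sr b) \<lhd> \<phi>) = \<phi> \<cdot> L x"
    using L_nat[of \<phi>] ctx by simp
  have "unwhisker b x y (b \<lhd> \<phi>) = L y \<cdot> (Ee b \<rhd> y) \<cdot> ((inv b \<diamond> b) \<lhd> \<phi>) \<cdot> (vinv (Ee b) \<rhd> x) \<cdot> vinv (L x)"
    unfolding unwhisker_def using ctx by (simp add: vc_rewrite3[OF n])
  also have "\<dots> = L y \<cdot> (U (sr b) \<lhd> \<phi>) \<cdot> (Ee b \<rhd> x) \<cdot> (vinv (Ee b) \<rhd> x) \<cdot> vinv (L x)"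
    using ctx by (simp add: vc_rewrite2[OF h])
  also have "\<dots> = \<phi>" using ctx by (simp add: vc_rewrite2[OF l])
  finally show ?thesis .
qed

lemma unwhisker_inj:
  assumes p: "\<psi>1 \<in> A2" "dm \<psi>1 = b \<diamond> x" "cd \<psi>1 = b \<diamond> y" "\<psi>2 \<in> A2" "dm \<psi>2 = b \<diamond> x" "cd \<psi>2 = b \<diamond> y"
   and e: "unwhisker b x y \<psi>1 = unwhisker b x y \<psi>2" shows "\<psi>1 = \<psi>2"
proof -
  note ctx = bxy p
  define K where "K = As (inv b) b x \<cdot> (vinv (Ee b) \<rhd> x) \<cdot> vinv (L x)"
  have K: "K \<in> A2" "cd K = inv b \<diamond> (b \<diamond> x)" unfolding K_def using ctx by simp_all
  have "L y \<cdot> (Ee b \<rhd> y) \<cdot> vinv (As (inv b) b y) \<cdot> (inv b \<lhd> \<psi>1) \<cdot> K = L y \<cdot> (Ee b \<rhd> y) \<cdot> vinv (As (inv b) b y) \<cdot> (inv b \<lhd> \<psi>2) \<cdot> K"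
    using e unfolding unwhisker_def K_def .
  hence "(Ee b \<rhd> y) \<cdot> vinv (As (inv b) b y) \<cdot> (inv b \<lhd> \<psi>1) \<cdot> K = (Ee b \<rhd> y) \<cdot> vinv (As (inv b) b y) \<cdot> (inv b \<lhd> \<psi>2) \<cdot> K"
    by (rule vc_cancel_left) (use ctx K in simp_all)
  hence "vinv (As (inv b) b y) \<cdot> (inv b \<lhd> \<psi>1) \<cdot> K = vinv (As (inv b) b y) \<cdot> (inv b \<lhd> \<psi>2) \<cdot> K"
    by (rule vc_cancel_left) (use ctx K in simp_all)
  hence "(inv b \<lhd> \<psi>1) \<cdot> K = (inv b \<lhd> \<psi>2) \<cdot> K"
    by (rule vc_cancel_left) (use ctx K in simp_all)
  hence "inv b \<lhd> \<psi>1 = inv b \<lhd> \<psi>2"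
    by (rule vc_cancel_right) (use ctx K in simp_all)
  thus ?thesis by (rule whisker_left_cancel) (use ctx in simp_all)
qed

lemma whisker_unwhisker:
  assumes p: "\<psi> \<in> A2" "dm \<psi> = b \<diamond> x" "cd \<psi> = b \<diamond> y" shows "b \<lhd> unwhisker b x y \<psi> = \<psi>"
proof -
  have t: "unwhisker b x y \<psi> \<in> A2" "dm (unwhisker b x y \<psi>) = x" "cd (unwhisker b x y \<psi>) = y" using unwhisker_cell p by auto
  have "unwhisker b x y (b \<lhd> unwhisker b x y \<psi>) = unwhisker b x y \<psi>" using unwhisker_whisker[OF t] .
  thus ?thesis by (rule unwhisker_inj[rotated 6]) (use t bxy p in simp_all)
qed
end

text \<open>
  The square \<open>(a\<^sup>*, b\<^sup>*, s)\<close> inverse to \<open>(a, b, \<sigma>)\<close> is pinned down by the condition that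
  \<open>(i\<^sub>a, i\<^sub>b)\<close> is a 2-cell into the composite square, which prescribes the whiskering
  \<open>b * s\<close>; \<open>s\<close> is then obtained by unwhiskering.
\<close>

definition square_inv_whiskered where
  "square_inv_whiskered f f' a b \<sigma> = As b (inv b) f' \<cdot> (Ii b \<rhd> f') \<cdot> runit_lunit f' \<cdot> (f' \<lhd> vinv (Ii a)) \<cdot>
     As f' a (inv a) \<cdot> (vinv \<sigma> \<rhd> inv a) \<cdot> vinv (As b f (inv a))"

definition square_inv where
  "square_inv f f' a b \<sigma> = unwhisker b (f \<diamond> inv a) (inv b \<diamond> f') (square_inv_whiskered f f' a b \<sigma>)"

lemma square_inv_whiskered_cell:
  assumes "square f f' a b \<sigma>"
  shows "square_inv_whiskered f f' a b \<sigma> \<in> A2" "dm (square_inv_whiskered f f' a b \<sigma>) = b \<diamond> (f \<diamond> inv a)"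
    "cd (square_inv_whiskered f f' a b \<sigma>) = b \<diamond> (inv b \<diamond> f')"
  using assms unfolding square_inv_whiskered_def square_def by simp_all

lemma square_inv_props:
  assumes u: "square f f' a b \<sigma>"
  shows "square f' f (inv a) (inv b) (square_inv f f' a b \<sigma>)" "b \<lhd> square_inv f f' a b \<sigma> = square_inv_whiskered f f' a b \<sigma>"
proof -
  note ctx = u[unfolded square_def]
  note p = square_inv_whiskered_cell[OF u]
  have bxy: "b \<in> A1" "f \<diamond> inv a \<in> A1" "inv b \<diamond> f' \<in> A1" "sr (inv b \<diamond> f') = sr (f \<diamond> inv a)"
      "tg (inv b \<diamond> f') = tg (f \<diamond> inv a)" "tg (f \<diamond> inv a) = sr b" using ctx by simp_all
  show "square f' f (inv a) (inv b) (square_inv f f' a b \<sigma>)"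
    using unwhisker_cell[OF bxy p] ctx unfolding square_def square_inv_def by simp
  show "b \<lhd> square_inv f f' a b \<sigma> = square_inv_whiskered f f' a b \<sigma>"
    unfolding square_inv_def by (rule whisker_unwhisker[OF bxy p])
qed

lemma unit_i_square_map_iff:
  assumes u: "square f f' a b \<sigma>" and s: "square f' f (inv a) (inv b) s"
  shows "paste f' f f' (inv a) (inv b) a b \<sigma> s \<cdot> (f' \<lhd> Ii a) = (Ii b \<rhd> f') \<cdot> runit_lunit f' \<longleftrightarrow>
         b \<lhd> s = square_inv_whiskered f f' a b \<sigma>"
proof -
  note ctx = u[unfolded square_def] s[unfolded square_def]
  define K where "K = As b f (inv a) \<cdot> (\<sigma> \<rhd> inv a) \<cdot> vinv (As f' a (inv a)) \<cdot> (f' \<lhd> Ii a)"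
  have K: "K \<in> A2" "dm K = f' \<diamond> U (sr f')" "cd K = b \<diamond> (f \<diamond> inv a)" unfolding K_def using ctx by simp_all
  have vK: "vinv K = (f' \<lhd> vinv (Ii a)) \<cdot> As f' a (inv a) \<cdot> (vinv \<sigma> \<rhd> inv a) \<cdot> vinv (As b f (inv a))"
    unfolding K_def using ctx by simp
  have T: "paste f' f f' (inv a) (inv b) a b \<sigma> s \<cdot> (f' \<lhd> Ii a) = vinv (As b (inv b) f') \<cdot> ((b \<lhd> s) \<cdot> K)"
    unfolding paste_def K_def using ctx by simp
  have P: "square_inv_whiskered f f' a b \<sigma> = (As b (inv b) f' \<cdot> (Ii b \<rhd> f') \<cdot> runit_lunit f') \<cdot> vinv K"
    unfolding square_inv_whiskered_def vK using ctx by simp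
  have G: "As b (inv b) f' \<cdot> (Ii b \<rhd> f') \<cdot> runit_lunit f' \<in> A2" "dm (As b (inv b) f' \<cdot> (Ii b \<rhd> f') \<cdot> runit_lunit f') = f' \<diamond> U (sr f')"
    using ctx by simp_all
  show ?thesis
  proof
    assume e: "paste f' f f' (inv a) (inv b) a b \<sigma> s \<cdot> (f' \<lhd> Ii a) = (Ii b \<rhd> f') \<cdot> runit_lunit f'"
    have "(b \<lhd> s) \<cdot> K = vinv (vinv (As b (inv b) f')) \<cdot> ((Ii b \<rhd> f') \<cdot> runit_lunit f')"
      by (rule vc_move_left) (use e T ctx K in simp_all)
    hence "(b \<lhd> s) \<cdot> K = As b (inv b) f' \<cdot> (Ii b \<rhd> f') \<cdot> runit_lunit f'" using ctx by simp
    hence "b \<lhd> s = (As b (inv b) f' \<cdot> (Ii b \<rhd> f') \<cdot> runit_lunit f') \<cdot> vinv K"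
      by (rule vc_move_right) (use ctx K in simp_all)
    thus "b \<lhd> s = square_inv_whiskered f f' a b \<sigma>" using P by simp
  next
    assume e: "b \<lhd> s = square_inv_whiskered f f' a b \<sigma>"
    have "paste f' f f' (inv a) (inv b) a b \<sigma> s \<cdot> (f' \<lhd> Ii a) = vinv (As b (inv b) f') \<cdot> (((As b (inv b) f' \<cdot> (Ii b \<rhd> f') \<cdot> runit_lunit f') \<cdot> vinv K) \<cdot> K)"
      using T e P by simp
    also have "\<dots> = (Ii b \<rhd> f') \<cdot> runit_lunit f'" using ctx K G by simp
    finally show "paste f' f f' (inv a) (inv b) a b \<sigma> s \<cdot> (f' \<lhd> Ii a) = (Ii b \<rhd> f') \<cdot> runit_lunit f'" .
  qed
qed

lemma square_map_unit_i:
  assumes u: "square f f' a b \<sigma>"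
  shows "square_map f' f' (U (sr f')) (U (tg f')) (runit_lunit f')
                    (a \<diamond> inv a) (b \<diamond> inv b) (paste f' f f' (inv a) (inv b) a b \<sigma> (square_inv f f' a b \<sigma>)) (Ii a) (Ii b)"
proof -
  note ctx = u[unfolded square_def]
  have e: "paste f' f f' (inv a) (inv b) a b \<sigma> (square_inv f f' a b \<sigma>) \<cdot> (f' \<lhd> Ii a) = (Ii b \<rhd> f') \<cdot> runit_lunit f'"
    using unit_i_square_map_iff[OF u square_inv_props(1)[OF u]] square_inv_props(2)[OF u] by simp
  show ?thesis
    apply (rule square_mapI)
    using square_id[of f'] square_paste[OF square_inv_props(1)[OF u] u] ctx e by simp_all
qed

lemma whisker_left_counit_e:
  assumes "a \<in> A1"
  shows "a \<lhd> Ee a = vinv (Rr a) \<cdot> L a \<cdot> (vinv (Ii a) \<rhd> a) \<cdot> vinv (As a (inv a) a)"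
proof -
  have "(a \<lhd> Ee a) \<cdot> As a (inv a) a \<cdot> (Ii a \<rhd> a) = vinv (Rr a) \<cdot> L a"
    by (rule vc_move_left[OF zigzag]) (use assms in simp_all)
  then have "a \<lhd> Ee a = (vinv (Rr a) \<cdot> L a) \<cdot> vinv (As a (inv a) a \<cdot> (Ii a \<rhd> a))"
    by (rule vc_move_right) (use assms in simp_all)
  then show ?thesis using assms by simp
qed

lemma whisker_left_iv2:
  assumes "\<alpha> \<in> A2"
  shows "dm \<alpha> \<lhd> iv2 \<alpha> = vinv (\<alpha> \<rhd> inv (cd \<alpha>)) \<cdot> Ii (cd \<alpha>) \<cdot> vinv (Ii (dm \<alpha>))"
proof -
  have "(\<alpha> \<rhd> inv (cd \<alpha>)) \<cdot> (dm \<alpha> \<lhd> iv2 \<alpha>) \<cdot> Ii (dm \<alpha>) = Ii (cd \<alpha>)"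
    using Ii_nat[of \<alpha>] hc_split1[of \<alpha> "iv2 \<alpha>"] assms by simp
  then have "(dm \<alpha> \<lhd> iv2 \<alpha>) \<cdot> Ii (dm \<alpha>) = vinv (\<alpha> \<rhd> inv (cd \<alpha>)) \<cdot> Ii (cd \<alpha>)"
    by (rule vc_move_left) (use assms in simp_all)
  then have "dm \<alpha> \<lhd> iv2 \<alpha> = (vinv (\<alpha> \<rhd> inv (cd \<alpha>)) \<cdot> Ii (cd \<alpha>)) \<cdot> vinv (Ii (dm \<alpha>))"
    by (rule vc_move_right) (use assms in simp_all)
  then show ?thesis using assms by simp
qed

lemma square_map_counit_e:
  assumes u: "square f f' a b \<sigma>"
  shows "square_map f f (inv a \<diamond> a) (inv b \<diamond> b) (paste f f' f a b (inv a) (inv b) (square_inv f f' a b \<sigma>) \<sigma>)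
           (U (sr f)) (U (tg f)) (runit_lunit f) (Ee a) (Ee b)"
proof -
  note ctx = u[unfolded square_def]
  define s where "s = square_inv f f' a b \<sigma>"
  have si: "square f' f (inv a) (inv b) s" unfolding s_def by (rule square_inv_props(1)[OF u])
  have PI: "square_map f' f' (U (sr f')) (U (tg f')) (runit_lunit f') (a \<diamond> inv a) (b \<diamond> inv b)
              (paste f' f f' (inv a) (inv b) a b \<sigma> s) (Ii a) (Ii b)"
    unfolding s_def by (rule square_map_unit_i[OF u])
  \<comment> \<open>by the zigzag identity, the components of this composite are \<open>a * e\<^sub>a\<close> and \<open>b * e\<^sub>b\<close>\<close>
  have P: "square_map f f' (a \<diamond> (inv a \<diamond> a)) (b \<diamond> (inv b \<diamond> b)) (paste f f f' (inv a \<diamond> a) (inv b \<diamond> b) a b \<sigma> (paste f f' f a b (inv a) (inv b) s \<sigma>))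
        (a \<diamond> U (sr f)) (b \<diamond> U (tg f)) (paste f f f' (U (sr f)) (U (tg f)) a b \<sigma> (runit_lunit f))
        (vinv (Rr a) \<cdot> (L a \<cdot> ((vinv (Ii a) \<rhd> a) \<cdot> vinv (As a (inv a) a))))
        (vinv (Rr b) \<cdot> (L b \<cdot> ((vinv (Ii b) \<rhd> b) \<cdot> vinv (As b (inv b) b))))"
    by (rule square_map_vcomp[OF square_map_vcomp[OF square_map_vcomp[OF
          square_map_vinv[OF square_map_assoc[OF u si u]] square_map_whisker_right[OF square_map_vinv[OF PI] u]]
          square_map_lunit[OF u]] square_map_vinv[OF square_map_runit[OF u]]])
  have "square_map f f (inv a \<diamond> a) (inv b \<diamond> b) (paste f f' f a b (inv a) (inv b) s \<sigma>)
          (U (sr f)) (U (tg f)) (runit_lunit f) (Ee a) (Ee b)"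
    apply (rule square_map_whisker_left_reflect[OF u square_paste[OF u si] square_id[of f]])
    using P whisker_left_counit_e[of a] whisker_left_counit_e[of b] ctx by simp_all
  thus ?thesis unfolding s_def .
qed

lemma square_map_inv:
  assumes p: "square_map f f' a b \<sigma> a' b' \<sigma>' \<alpha> \<beta>"
  shows "square_map f' f (inv a) (inv b) (square_inv f f' a b \<sigma>) (inv a') (inv b') (square_inv f f' a' b' \<sigma>')
           (iv2 \<alpha>) (iv2 \<beta>)"
proof -
  have t: "square f f' a b \<sigma>" "square f f' a' b' \<sigma>'" "\<alpha> \<in> A2" "dm \<alpha> = a" "cd \<alpha> = a'"
     "\<beta> \<in> A2" "dm \<beta> = b" "cd \<beta> = b'" using p unfolding square_map_def by auto
  note ctx = t(1)[unfolded square_def] t(2)[unfolded square_def] t(3-8)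
  have si: "square f' f (inv a) (inv b) (square_inv f f' a b \<sigma>)" "square f' f (inv a') (inv b') (square_inv f f' a' b' \<sigma>')"
    using square_inv_props(1) t by auto
  have P: "square_map f' f' (a \<diamond> inv a) (b \<diamond> inv b) (paste f' f f' (inv a) (inv b) a b \<sigma> (square_inv f f' a b \<sigma>))
     (a \<diamond> inv a') (b \<diamond> inv b') (paste f' f f' (inv a') (inv b') a b \<sigma> (square_inv f f' a' b' \<sigma>'))
     (vinv (\<alpha> \<rhd> inv a') \<cdot> (Ii a' \<cdot> vinv (Ii a))) (vinv (\<beta> \<rhd> inv b') \<cdot> (Ii b' \<cdot> vinv (Ii b)))"
    by (rule square_map_vcomp[OF square_map_vcomp[OF square_map_vinv[OF square_map_unit_i[OF t(1)]]
          square_map_unit_i[OF t(2)]] square_map_vinv[OF square_map_whisker_right[OF p si(2)]]])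
  show ?thesis
    apply (rule square_map_whisker_left_reflect[OF t(1) si])
    using P whisker_left_iv2[of \<alpha>] whisker_left_iv2[of \<beta>] ctx by simp_all
qed

section \<open>Squares between identities\<close>

definition lunit_runit where "lunit_runit f = vinv (Rr f) \<cdot> L f"

lemma lunit_runit_cell[simp]:
  assumes "f \<in> A1"
  shows "lunit_runit f \<in> A2" "dm (lunit_runit f) = U (tg f) \<diamond> f" "cd (lunit_runit f) = f \<diamond> U (sr f)"
  using assms unfolding lunit_runit_def by simp_all

lemma square_const: "f \<in> A1 \<Longrightarrow> sr f = X \<Longrightarrow> tg f = Y \<Longrightarrow> square (U X) (U Y) f f (lunit_runit f)"
  unfolding square_def by auto

lemma square_map_const:
  assumes al: "\<alpha> \<in> A2"
  shows "square_map (U (sr (dm \<alpha>))) (U (tg (dm \<alpha>))) (dm \<alpha>) (dm \<alpha>) (lunit_runit (dm \<alpha>))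
           (cd \<alpha>) (cd \<alpha>) (lunit_runit (cd \<alpha>)) \<alpha> \<alpha>"
proof -
  have l: "L (cd \<alpha>) \<cdot> (U (tg (dm \<alpha>)) \<lhd> \<alpha>) = \<alpha> \<cdot> L (dm \<alpha>)" using L_nat[OF al] by simp
  have r: "(\<alpha> \<rhd> U (sr (dm \<alpha>))) \<cdot> vinv (Rr (dm \<alpha>)) = vinv (Rr (cd \<alpha>)) \<cdot> \<alpha>"
    by (rule vc_swap[OF R_nat[OF al, symmetric], symmetric]) (use al in simp_all)
  have "lunit_runit (cd \<alpha>) \<cdot> (U (tg (dm \<alpha>)) \<lhd> \<alpha>) = (\<alpha> \<rhd> U (sr (dm \<alpha>))) \<cdot> lunit_runit (dm \<alpha>)"
    unfolding lunit_runit_def using al by (simp add: l vc_rewrite2[OF r])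
  thus ?thesis
    using al square_const[of "dm \<alpha>", OF _ refl refl] square_const[of "cd \<alpha>", OF _ refl refl]
    by (intro square_mapI) simp_all
qed

lemma paste_lunit_runit:
  assumes g: "g \<in> A1" and f: "f \<in> A1" and gf: "tg f = sr g"
  shows "paste (U (sr f)) (U (sr g)) (U (tg g)) f f g g (lunit_runit g) (lunit_runit f) = lunit_runit (g \<diamond> f)"
proof -
  note ctx = g f gf
  have k1: "vinv (As (U (tg g)) g f) = (vinv (L g) \<rhd> f) \<cdot> L (g \<diamond> f)"
  proof -
    have "As (U (tg g)) g f = vinv (L (g \<diamond> f)) \<cdot> (L g \<rhd> f)" by (rule vc_move_left[OF lunit_hcomp]) (use ctx in simp_all)
    thus ?thesis using ctx by simp
  qed
  have w1: "(lunit_runit g \<rhd> f) \<cdot> (vinv (L g) \<rhd> f) = vinv (Rr g) \<rhd> f"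
    unfolding lunit_runit_def using wr_vc[of "vinv (Rr g) \<cdot> L g" "vinv (L g)" f] ctx by simp
  have t: "As g (U (sr g)) f \<cdot> (vinv (Rr g) \<rhd> f) = g \<lhd> vinv (L f)"
  proof -
    have "As g (U (tg f)) f = vinv (g \<lhd> L f) \<cdot> (Rr g \<rhd> f)" by (rule vc_move_left[OF triangle]) (use ctx in simp_all)
    thus ?thesis using ctx by simp
  qed
  have w2: "(g \<lhd> lunit_runit f) \<cdot> (g \<lhd> vinv (L f)) = g \<lhd> vinv (Rr f)"
    unfolding lunit_runit_def using wl_vc[of "vinv (Rr f) \<cdot> L f" "vinv (L f)" g] ctx by simp
  have k2: "vinv (As g f (U (sr f))) \<cdot> (g \<lhd> vinv (Rr f)) = vinv (Rr (g \<diamond> f))"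
  proof -
    have "vinv ((g \<lhd> Rr f) \<cdot> As g f (U (sr f))) = vinv (Rr (g \<diamond> f))" using runit_hcomp[OF ctx] by simp
    thus ?thesis using ctx by simp
  qed
  have "paste (U (sr f)) (U (sr g)) (U (tg g)) f f g g (lunit_runit g) (lunit_runit f) =
     vinv (As g f (U (sr f))) \<cdot> (g \<lhd> lunit_runit f) \<cdot> As g (U (sr g)) f \<cdot> (lunit_runit g \<rhd> f) \<cdot> (vinv (L g) \<rhd> f) \<cdot> L (g \<diamond> f)"
    unfolding paste_def k1 using ctx by simp
  also have "\<dots> = vinv (As g f (U (sr f))) \<cdot> (g \<lhd> lunit_runit f) \<cdot> As g (U (sr g)) f \<cdot> (vinv (Rr g) \<rhd> f) \<cdot> L (g \<diamond> f)"
    using ctx by (simp add: vc_rewrite2[OF w1])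
  also have "\<dots> = vinv (As g f (U (sr f))) \<cdot> (g \<lhd> lunit_runit f) \<cdot> (g \<lhd> vinv (L f)) \<cdot> L (g \<diamond> f)"
    using ctx by (simp add: vc_rewrite2[OF t])
  also have "\<dots> = vinv (As g f (U (sr f))) \<cdot> (g \<lhd> vinv (Rr f)) \<cdot> L (g \<diamond> f)"
    using ctx by (simp add: vc_rewrite2[OF w2])
  also have "\<dots> = lunit_runit (g \<diamond> f)"
    unfolding lunit_runit_def using ctx by (simp add: vc_rewrite2[OF k2])
  finally show ?thesis .
qed

lemma runit_lunit_unit: "X \<in> obj B \<Longrightarrow> runit_lunit (U X) = lunit_runit (U X)"
  unfolding runit_lunit_def lunit_runit_def using lunit_unit_eq_runit_unit by simp

lemma square_inv_const:
  assumes f: "f \<in> A1"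
  shows "square_inv (U (sr f)) (U (tg f)) f f (lunit_runit f) = lunit_runit (inv f)"
proof -
  have u: "square (U (sr f)) (U (tg f)) f f (lunit_runit f)" by (rule square_const[OF f refl refl])
  have s: "square (U (tg f)) (U (sr f)) (inv f) (inv f) (lunit_runit (inv f))" using square_const[of "inv f", OF _ refl refl] f by simp
  have c: "paste (U (tg f)) (U (sr f)) (U (tg f)) (inv f) (inv f) f f (lunit_runit f) (lunit_runit (inv f)) = lunit_runit (f \<diamond> inv f)"
    using paste_lunit_runit[of f "inv f"] f by simp
  have n: "lunit_runit (f \<diamond> inv f) \<cdot> (U (tg f) \<lhd> Ii f) = (Ii f \<rhd> U (tg f)) \<cdot> lunit_runit (U (tg f))"
    using square_map_const[of "Ii f"] f unfolding square_map_def by simp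
  have e: "paste (U (tg f)) (U (sr f)) (U (tg f)) (inv f) (inv f) f f (lunit_runit f) (lunit_runit (inv f)) \<cdot> (U (tg f) \<lhd> Ii f) = (Ii f \<rhd> U (tg f)) \<cdot> runit_lunit (U (tg f))"
    using c n runit_lunit_unit[of "tg f"] f by simp
  have 1: "f \<lhd> lunit_runit (inv f) = square_inv_whiskered (U (sr f)) (U (tg f)) f f (lunit_runit f)"
    using unit_i_square_map_iff[OF u] s e f by simp
  have 2: "f \<lhd> square_inv (U (sr f)) (U (tg f)) f f (lunit_runit f) = square_inv_whiskered (U (sr f)) (U (tg f)) f f (lunit_runit f)"
    by (rule square_inv_props(2)[OF u])
  have t1: "square (U (tg f)) (U (sr f)) (inv f) (inv f) (square_inv (U (sr f)) (U (tg f)) f f (lunit_runit f))"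
    using square_inv_props(1)[OF u] .
  show ?thesis
    apply (rule whisker_left_cancel[of f])
    using 1 2 t1 s f unfolding square_def by simp_all
qed

text \<open>
  A square between identities determines a 2-cell \<open>a \<Rightarrow> b\<close>; this is the counit of the
  equivalence between \<open>PB(1\<^sub>X, 1\<^sub>Y)\<close> and \<open>B(X, Y)\<close> given by \<open>R\<close> and the projection to \<open>a\<close>.
\<close>

definition counit_cell where "counit_cell a b \<sigma> = Rr b \<cdot> \<sigma> \<cdot> vinv (lunit_runit a) \<cdot> vinv (Rr a)"

lemma square_map_counit:
  assumes u: "square (U X) (U Y) a b \<sigma>" and X: "X \<in> obj B" and Y: "Y \<in> obj B"
  shows "square_map (U X) (U Y) a a (lunit_runit a) a b \<sigma> (I a) (counit_cell a b \<sigma>)"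
proof -
  note ctx = u[unfolded square_def] X Y
  have sa: "sr a = X" "tg a = Y" "sr b = X" "tg b = Y" using ctx by simp_all
  have th: "counit_cell a b \<sigma> \<in> A2" "dm (counit_cell a b \<sigma>) = a" "cd (counit_cell a b \<sigma>) = b"
    unfolding counit_cell_def using ctx sa by simp_all
  have r: "counit_cell a b \<sigma> \<rhd> U X = vinv (Rr b) \<cdot> counit_cell a b \<sigma> \<cdot> Rr a"
  proof -
    have "counit_cell a b \<sigma> \<cdot> Rr a = Rr b \<cdot> (counit_cell a b \<sigma> \<rhd> U X)" using R_nat[OF th(1)] th sa by simp
    hence "counit_cell a b \<sigma> \<rhd> U X = vinv (Rr b) \<cdot> (counit_cell a b \<sigma> \<cdot> Rr a)"
      by (rule vc_move_left[OF sym]) (use th sa ctx in simp_all)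
    thus ?thesis .
  qed
  have e: "\<sigma> \<cdot> (U Y \<lhd> I a) = (counit_cell a b \<sigma> \<rhd> U X) \<cdot> lunit_runit a"
    unfolding r unfolding counit_cell_def using ctx sa by simp
  show ?thesis
    apply (rule square_mapI)
    using square_const[of a, OF _ refl refl] u ctx sa th e by simp_all
qed

lemma counit_cell_natural:
  assumes p: "square_map (U X) (U Y) a b \<sigma> a' b' \<sigma>' \<alpha> \<beta>" and X: "X \<in> obj B" and Y: "Y \<in> obj B"
  shows "\<beta> \<cdot> counit_cell a b \<sigma> = counit_cell a' b' \<sigma>' \<cdot> \<alpha>"
proof -
  have t: "square (U X) (U Y) a b \<sigma>" "square (U X) (U Y) a' b' \<sigma>'" "\<alpha> \<in> A2" "dm \<alpha> = a" "cd \<alpha> = a'"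
     "\<beta> \<in> A2" "dm \<beta> = b" "cd \<beta> = b'" and e: "\<sigma>' \<cdot> (U Y \<lhd> \<alpha>) = (\<beta> \<rhd> U X) \<cdot> \<sigma>"
    using p unfolding square_map_def by auto
  note ctx = t(1)[unfolded square_def] t(2)[unfolded square_def] t(3-8) X Y
  have sa: "sr a = X" "tg a = Y" "sr b = X" "tg b = Y" "sr a' = X" "tg a' = Y" "sr b' = X" "tg b' = Y" using ctx by simp_all
  have r1: "vinv (Rr a') \<cdot> \<alpha> = (\<alpha> \<rhd> U X) \<cdot> vinv (Rr a)"
    using vc_swap[OF R_nat[OF t(3), symmetric]] ctx sa by simp
  have const_nat: "lunit_runit a' \<cdot> (U Y \<lhd> \<alpha>) = (\<alpha> \<rhd> U X) \<cdot> lunit_runit a" using square_map_const[OF t(3)] ctx sa unfolding square_map_def by simp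
  have r2: "vinv (lunit_runit a') \<cdot> (\<alpha> \<rhd> U X) = (U Y \<lhd> \<alpha>) \<cdot> vinv (lunit_runit a)"
    using vc_swap[OF const_nat] ctx sa by simp
  have r4: "Rr b' \<cdot> (\<beta> \<rhd> U X) = \<beta> \<cdot> Rr b" using R_nat[OF t(6)] ctx sa by simp
  have "counit_cell a' b' \<sigma>' \<cdot> \<alpha> = Rr b' \<cdot> \<sigma>' \<cdot> vinv (lunit_runit a') \<cdot> vinv (Rr a') \<cdot> \<alpha>"
    unfolding counit_cell_def using ctx sa by simp
  also have "\<dots> = Rr b' \<cdot> \<sigma>' \<cdot> vinv (lunit_runit a') \<cdot> (\<alpha> \<rhd> U X) \<cdot> vinv (Rr a)" using r1 by simp
  also have "\<dots> = Rr b' \<cdot> \<sigma>' \<cdot> (U Y \<lhd> \<alpha>) \<cdot> vinv (lunit_runit a) \<cdot> vinv (Rr a)" using ctx sa by (simp add: vc_rewrite2[OF r2])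
  also have "\<dots> = Rr b' \<cdot> (\<beta> \<rhd> U X) \<cdot> \<sigma> \<cdot> vinv (lunit_runit a) \<cdot> vinv (Rr a)" using ctx sa by (simp add: vc_rewrite2[OF e])
  also have "\<dots> = \<beta> \<cdot> Rr b \<cdot> \<sigma> \<cdot> vinv (lunit_runit a) \<cdot> vinv (Rr a)" using ctx sa by (simp add: vc_rewrite2[OF r4])
  also have "\<dots> = \<beta> \<cdot> counit_cell a b \<sigma>" unfolding counit_cell_def using ctx sa by simp
  finally show ?thesis by simp
qed

text \<open>The square with sides \<open>b\<^sub>1, b\<^sub>2\<close> and source \<open>b\<^sub>2\<^sup>* * (f' * b\<^sub>1)\<close>, lifting 1-cells along \<open>\<langle>S,T\<rangle>\<close>.\<close>

definition lift_cell where "lift_cell f' b1 b2 = As b2 (inv b2) (f' \<diamond> b1) \<cdot> (Ii b2 \<rhd> (f' \<diamond> b1)) \<cdot> vinv (L (f' \<diamond> b1))"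

lemma square_lift: "f' \<in> A1 \<Longrightarrow> b1 \<in> A1 \<Longrightarrow> b2 \<in> A1 \<Longrightarrow> tg b1 = sr f' \<Longrightarrow> tg b2 = tg f' \<Longrightarrow>
   square (inv b2 \<diamond> (f' \<diamond> b1)) f' b1 b2 (lift_cell f' b1 b2)"
  unfolding square_def lift_cell_def by simp

lemma square_map_lift:
  assumes u: "square f f' a' b' \<sigma>'" and b: "\<beta>1 \<in> A2" "cd \<beta>1 = a'" "\<beta>2 \<in> A2" "cd \<beta>2 = b'"
  shows "square_map f f' (dm \<beta>1) (dm \<beta>2) (vinv (\<beta>2 \<rhd> f) \<cdot> \<sigma>' \<cdot> (f' \<lhd> \<beta>1)) a' b' \<sigma>' \<beta>1 \<beta>2"
proof -
  note ctx = u[unfolded square_def] b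
  have s: "sr (dm \<beta>1) = sr f" "tg (dm \<beta>1) = sr f'" "sr (dm \<beta>2) = tg f" "tg (dm \<beta>2) = tg f'"
    using ctx by (metis dom_cod_arr)+
  show ?thesis
    apply (rule square_mapI)
    using ctx s unfolding square_def by simp_all
qed

text \<open>Essential surjectivity of \<open>R\<close> on 0-cells: \<open>f\<close> is joined to the identity on its source.\<close>

lemma square_to_unit: "f \<in> A1 \<Longrightarrow> square f (U (sr f)) (U (sr f)) (inv f) (vinv (Ee f) \<cdot> L (U (sr f)))"
  unfolding square_def by simp
section \<open>The path object\<close>

definition hcomp1_PB :: "('o,'a,'c) pcell \<Rightarrow> ('o,'a,'c) pcell \<Rightarrow> ('o,'a,'c) pcell" where
  "hcomp1_PB v u = Sq (pF u) (pF' v) (pA v \<diamond> pA u) (pB v \<diamond> pB u)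
     (paste (pF u) (pF' u) (pF' v) (pA u) (pB u) (pA v) (pB v) (pS v) (pS u))"

definition unit1_PB :: "('o,'a,'c) pcell \<Rightarrow> ('o,'a,'c) pcell" where
  "unit1_PB x = Sq (pF x) (pF x) (U (sr (pF x))) (U (tg (pF x))) (runit_lunit (pF x))"

definition inv1_PB :: "('o,'a,'c) pcell \<Rightarrow> ('o,'a,'c) pcell" where
  "inv1_PB u = Sq (pF' u) (pF u) (inv (pA u)) (inv (pB u)) (square_inv (pF u) (pF' u) (pA u) (pB u) (pS u))"

lemma hcomp1_PB_Sq[simp]:
  "hcomp1_PB (Sq f' f'' a' b' t) (Sq f f0 a b s) = Sq f f'' (a' \<diamond> a) (b' \<diamond> b) (paste f f0 f'' a b a' b' t s)"
  unfolding hcomp1_PB_def by simp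

lemma unit1_PB_Sq[simp]: "unit1_PB [In1 f] = Sq f f (U (sr f)) (U (tg f)) (runit_lunit f)"
  unfolding unit1_PB_def by simp

lemma inv1_PB_Sq[simp]: "inv1_PB (Sq f f' a b s) = Sq f' f (inv a) (inv b) (square_inv f f' a b s)"
  unfolding inv1_PB_def by simp

definition PB :: "(('o,'a,'c) pcell, ('o,'a,'c) pcell, ('o,'a,'c) pcell) bigroupoid" where
  "PB = \<lparr> obj = (\<lambda>f. [In1 f]) ` A1,
    arr1 = {Sq f f' a b s | f f' a b s. square f f' a b s},
    src1 = (\<lambda>u. [In1 (pF u)]), trg1 = (\<lambda>u. [In1 (pF' u)]),
    arr2 = {SqMap f f' a b s a' b' s' al be | f f' a b s a' b' s' al be. square_map f f' a b s a' b' s' al be},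
    dom2 = sqmap_dom, cod2 = sqmap_cod,
    vcomp = (\<lambda>w' w. sqmap_between (sqmap_dom w) (sqmap_cod w') (pAl w' \<cdot> pAl w) (pBe w' \<cdot> pBe w)),
    id2 = (\<lambda>u. sqmap_between u u (I (pA u)) (I (pB u))),
    hcomp1 = hcomp1_PB,
    hcomp2 = (\<lambda>w' w. sqmap_between (hcomp1_PB (sqmap_dom w') (sqmap_dom w)) (hcomp1_PB (sqmap_cod w') (sqmap_cod w))
                       (pAl w' \<star> pAl w) (pBe w' \<star> pBe w)),
    unit1 = unit1_PB,
    inv1 = inv1_PB,
    inv2 = (\<lambda>w. sqmap_between (inv1_PB (sqmap_dom w)) (inv1_PB (sqmap_cod w)) (iv2 (pAl w)) (iv2 (pBe w))),
    asc = (\<lambda>w v u. sqmap_between (hcomp1_PB (hcomp1_PB w v) u) (hcomp1_PB w (hcomp1_PB v u))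
                     (As (pA w) (pA v) (pA u)) (As (pB w) (pB v) (pB u))),
    lunit = (\<lambda>u. sqmap_between (hcomp1_PB (unit1_PB [In1 (pF' u)]) u) u (L (pA u)) (L (pB u))),
    runit = (\<lambda>u. sqmap_between (hcomp1_PB u (unit1_PB [In1 (pF u)])) u (Rr (pA u)) (Rr (pB u))),
    counit_e = (\<lambda>u. sqmap_between (hcomp1_PB (inv1_PB u) u) (unit1_PB [In1 (pF u)]) (Ee (pA u)) (Ee (pB u))),
    unit_i = (\<lambda>u. sqmap_between (unit1_PB [In1 (pF' u)]) (hcomp1_PB u (inv1_PB u)) (Ii (pA u)) (Ii (pB u))) \<rparr>"

lemma PB_simps[simp]:
  "obj PB = (\<lambda>f. [In1 f]) ` A1"
  "arr1 PB = {Sq f f' a b s | f f' a b s. square f f' a b s}"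
  "arr2 PB = {SqMap f f' a b s a' b' s' al be | f f' a b s a' b' s' al be. square_map f f' a b s a' b' s' al be}"
  "src1 PB = (\<lambda>u. [In1 (pF u)])" "trg1 PB = (\<lambda>u. [In1 (pF' u)])"
  "dom2 PB = sqmap_dom" "cod2 PB = sqmap_cod" "hcomp1 PB = hcomp1_PB" "unit1 PB = unit1_PB" "inv1 PB = inv1_PB"
  "vcomp PB w' w = sqmap_between (sqmap_dom w) (sqmap_cod w') (pAl w' \<cdot> pAl w) (pBe w' \<cdot> pBe w)"
  "id2 PB u = sqmap_between u u (I (pA u)) (I (pB u))"
  "hcomp2 PB w' w = sqmap_between (hcomp1_PB (sqmap_dom w') (sqmap_dom w)) (hcomp1_PB (sqmap_cod w') (sqmap_cod w))
                      (pAl w' \<star> pAl w) (pBe w' \<star> pBe w)"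
  "inv2 PB w = sqmap_between (inv1_PB (sqmap_dom w)) (inv1_PB (sqmap_cod w)) (iv2 (pAl w)) (iv2 (pBe w))"
  "asc PB w v u = sqmap_between (hcomp1_PB (hcomp1_PB w v) u) (hcomp1_PB w (hcomp1_PB v u))
                    (As (pA w) (pA v) (pA u)) (As (pB w) (pB v) (pB u))"
  "lunit PB u = sqmap_between (hcomp1_PB (unit1_PB [In1 (pF' u)]) u) u (L (pA u)) (L (pB u))"
  "runit PB u = sqmap_between (hcomp1_PB u (unit1_PB [In1 (pF u)])) u (Rr (pA u)) (Rr (pB u))"
  "counit_e PB u = sqmap_between (hcomp1_PB (inv1_PB u) u) (unit1_PB [In1 (pF u)]) (Ee (pA u)) (Ee (pB u))"
  "unit_i PB u = sqmap_between (unit1_PB [In1 (pF' u)]) (hcomp1_PB u (inv1_PB u)) (Ii (pA u)) (Ii (pB u))"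
  unfolding PB_def by simp_all

lemma Sq_in_arr1_PB[simp]: "Sq f f' a b s \<in> arr1 PB \<longleftrightarrow> square f f' a b s" by auto

lemma SqMap_in_arr2_PB[simp]: "SqMap f f' a b s a' b' s' al be \<in> arr2 PB \<longleftrightarrow> square_map f f' a b s a' b' s' al be" by auto

lemma In1_in_obj_PB[simp]: "[In1 f] \<in> obj PB \<longleftrightarrow> f \<in> A1" by auto

lemma arr1_PBE[elim!]: "u \<in> arr1 PB \<Longrightarrow> (\<And>f f' a b s. u = Sq f f' a b s \<Longrightarrow> square f f' a b s \<Longrightarrow> P) \<Longrightarrow> P" by auto

lemma arr2_PBE[elim!]: "w \<in> arr2 PB \<Longrightarrow> (\<And>f f' a b s a' b' s' al be. w = SqMap f f' a b s a' b' s' al be \<Longrightarrow> square_map f f' a b s a' b' s' al be \<Longrightarrow> P) \<Longrightarrow> P" by auto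

lemma obj_PBE[elim!]: "x \<in> obj PB \<Longrightarrow> (\<And>f. x = [In1 f] \<Longrightarrow> f \<in> A1 \<Longrightarrow> P) \<Longrightarrow> P" by auto

lemma arr2_PB_inverse:
  assumes "w \<in> arr2 PB"
  shows "\<exists>w'\<in>arr2 PB. dom2 PB w' = cod2 PB w \<and> cod2 PB w' = dom2 PB w \<and>
           vcomp PB w' w = id2 PB (dom2 PB w) \<and> vcomp PB w w' = id2 PB (cod2 PB w)"
proof -
  obtain f f' a b s a' b' s' \<alpha> \<beta> where w: "w = SqMap f f' a b s a' b' s' \<alpha> \<beta>"
    and m: "square_map f f' a b s a' b' s' \<alpha> \<beta>" using assms by blast
  show ?thesis
    using square_map_vinv[OF m] m unfolding w
    by (intro bexI[of _ "SqMap f f' a' b' s' a b s (vinv \<alpha>) (vinv \<beta>)"]) (auto simp: square_map_def)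
qed

lemma bigroupoid_PB: "bigroupoid PB"
  unfolding bigroupoid_def
  apply (intro conjI)
  subgoal by (auto simp: square_def)
  subgoal by (auto simp: square_map_def)
  subgoal by (auto simp: cell2_def intro: square_map_id)
  subgoal by (auto simp: cell2_def intro: square_map_vcomp)
  subgoal by (auto simp: square_map_def)
  subgoal by (auto simp: square_map_def)
  subgoal by (intro ballI arr2_PB_inverse)
  subgoal by (auto simp: hom1_def intro: square_paste)
  subgoal by (auto simp: cell2_def intro: square_map_hcomp)
  subgoal by (auto simp: square_def)
  subgoal by (auto simp: square_map_def square_def interchange)
  subgoal by (auto intro: square_id simp: hom1_def)
  subgoal by (auto simp: hom1_def intro: square_inv_props(1))
  subgoal by (auto simp: cell2_def intro: square_map_inv)
  subgoal by (auto simp: square_def)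
  subgoal by (auto simp: square_map_def)
  subgoal by (auto simp: cell2_def intro: square_map_assoc)
  subgoal by (auto simp: square_map_def square_def As_nat)
  subgoal by (auto simp: cell2_def intro: square_map_lunit)
  subgoal by (auto simp: square_map_def square_def L_nat)
  subgoal by (auto simp: cell2_def intro: square_map_runit)
  subgoal by (auto simp: square_map_def square_def R_nat)
  subgoal by (auto simp: cell2_def intro: square_map_counit_e)
  subgoal by (auto simp: square_map_def square_def E_nat)
  subgoal by (auto simp: cell2_def intro: square_map_unit_i)
  subgoal by (auto simp: square_map_def square_def Ii_nat)
  subgoal by (auto simp: square_def pentagon)
  subgoal by (auto simp: square_def triangle)
  subgoal by (auto simp: square_def zigzag)
  done

section \<open>The factorisation of the diagonal\<close>

definition refl_morph :: "('o,'a,'c,('o,'a,'c) pcell,('o,'a,'c) pcell,('o,'a,'c) pcell) bgmorph" where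
  "refl_morph = \<lparr> fobj = (\<lambda>X. [In1 (U X)]),
    fone = (\<lambda>f. Sq (U (sr f)) (U (tg f)) f f (lunit_runit f)),
    ftwo = (\<lambda>\<alpha>. SqMap (U (sr (dm \<alpha>))) (U (tg (dm \<alpha>))) (dm \<alpha>) (dm \<alpha>) (lunit_runit (dm \<alpha>))
                  (cd \<alpha>) (cd \<alpha>) (lunit_runit (cd \<alpha>)) \<alpha> \<alpha>),
    phic = (\<lambda>g f. SqMap (U (sr f)) (U (tg g)) (g \<diamond> f) (g \<diamond> f)
                    (paste (U (sr f)) (U (tg f)) (U (tg g)) f f g g (lunit_runit g) (lunit_runit f))
                    (g \<diamond> f) (g \<diamond> f) (lunit_runit (g \<diamond> f)) (I (g \<diamond> f)) (I (g \<diamond> f))),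
    phiu = (\<lambda>X. SqMap (U X) (U X) (U (sr (U X))) (U (tg (U X))) (runit_lunit (U X))
                  (U X) (U X) (lunit_runit (U X)) (I (U X)) (I (U X))),
    phii = (\<lambda>f. SqMap (U (tg f)) (U (sr f)) (inv f) (inv f) (square_inv (U (sr f)) (U (tg f)) f f (lunit_runit f))
                  (inv f) (inv f) (lunit_runit (inv f)) (I (inv f)) (I (inv f))) \<rparr>"

lemma refl_morph_simps[simp]:
  "fobj refl_morph X = [In1 (U X)]"
  "fone refl_morph f = Sq (U (sr f)) (U (tg f)) f f (lunit_runit f)"
  "ftwo refl_morph \<alpha> = SqMap (U (sr (dm \<alpha>))) (U (tg (dm \<alpha>))) (dm \<alpha>) (dm \<alpha>) (lunit_runit (dm \<alpha>))
                          (cd \<alpha>) (cd \<alpha>) (lunit_runit (cd \<alpha>)) \<alpha> \<alpha>"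
  "phic refl_morph g f = SqMap (U (sr f)) (U (tg g)) (g \<diamond> f) (g \<diamond> f)
                           (paste (U (sr f)) (U (tg f)) (U (tg g)) f f g g (lunit_runit g) (lunit_runit f))
                           (g \<diamond> f) (g \<diamond> f) (lunit_runit (g \<diamond> f)) (I (g \<diamond> f)) (I (g \<diamond> f))"
  "phiu refl_morph X = SqMap (U X) (U X) (U (sr (U X))) (U (tg (U X))) (runit_lunit (U X))
                         (U X) (U X) (lunit_runit (U X)) (I (U X)) (I (U X))"
  "phii refl_morph f = SqMap (U (tg f)) (U (sr f)) (inv f) (inv f) (square_inv (U (sr f)) (U (tg f)) f f (lunit_runit f))
                         (inv f) (inv f) (lunit_runit (inv f)) (I (inv f)) (I (inv f))"
  unfolding refl_morph_def by simp_all

definition ends_morph :: "(('o,'a,'c) pcell,('o,'a,'c) pcell,('o,'a,'c) pcell,'o\<times>'o,'a\<times>'a,'c\<times>'c) bgmorph" where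
  "ends_morph = \<lparr> fobj = (\<lambda>x. (sr (pF x), tg (pF x))), fone = (\<lambda>u. (pA u, pB u)), ftwo = (\<lambda>w. (pAl w, pBe w)),
    phic = (\<lambda>v u. (I (pA v \<diamond> pA u), I (pB v \<diamond> pB u))),
    phiu = (\<lambda>x. (I (U (sr (pF x))), I (U (tg (pF x))))),
    phii = (\<lambda>u. (I (inv (pA u)), I (inv (pB u)))) \<rparr>"

lemma ends_morph_simps[simp]:
  "fobj ends_morph x = (sr (pF x), tg (pF x))" "fone ends_morph u = (pA u, pB u)" "ftwo ends_morph w = (pAl w, pBe w)"
  "phic ends_morph v u = (I (pA v \<diamond> pA u), I (pB v \<diamond> pB u))"
  "phiu ends_morph x = (I (U (sr (pF x))), I (U (tg (pF x))))"
  "phii ends_morph u = (I (inv (pA u)), I (inv (pB u)))"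
  unfolding ends_morph_def by simp_all

lemma refl_morph_bgmorphism: "bgmorphism B PB refl_morph"
  unfolding bgmorphism_def
  apply (intro conjI)
  subgoal by simp
  subgoal by (simp add: hom1_def square_const)
  subgoal using square_map_const by (simp add: cell2_def)
  subgoal by simp
  subgoal by simp
  subgoal by (auto simp: cell2_def hom1_def paste_lunit_runit intro!: square_map_id square_const)
  subgoal by (auto simp: hom1_def cell2_def)
  subgoal by (auto simp: cell2_def runit_lunit_unit intro!: square_map_id square_const)
  subgoal by (auto simp: cell2_def square_inv_const intro!: square_map_id square_const)
  by simp_all

lemma ends_morph_bgmorphism: "bgmorphism PB (prod_bg B B) ends_morph"
  unfolding bgmorphism_def by (auto simp: square_map_def square_def cell2_def hom1_def)

lemma refl_morph_hom_equivalence: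
  assumes X: "X \<in> obj B" and Y: "Y \<in> obj B"
  shows "hom_equivalence B PB refl_morph X Y"
  unfolding hom_equivalence_def
  \<comment> \<open>quasi-inverse: the projection to \<open>a\<close>; unit: identities; counit at \<open>(a, b, \<sigma>)\<close>: \<open>(1\<^sub>a, counit_cell a b \<sigma>)\<close>\<close>
  apply (rule exI[where x=pA], rule exI[where x=pAl], rule exI[where x=I])
  apply (rule exI[where x="\<lambda>u. SqMap (U X) (U Y) (pA u) (pA u) (lunit_runit (pA u)) (pA u) (pB u) (pS u)
                                 (I (pA u)) (counit_cell (pA u) (pB u) (pS u))"])
  apply (intro conjI allI ballI impI)
  subgoal by (auto simp: hom1_def square_def X Y)
  subgoal by (auto simp: hom1_def cell2_def square_map_def square_def X Y)
  subgoal by (auto simp: hom1_def square_def X Y)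
  subgoal by (auto simp: hom1_def square_map_def square_def X Y)
  subgoal by (auto simp: hom1_def cell2_def)
  subgoal by (auto simp: hom1_def)
  subgoal using square_map_counit[OF _ X Y] by (auto simp: hom1_def cell2_def square_def X Y)
  subgoal using counit_cell_natural[OF _ X Y] by (auto simp: hom1_def square_map_def square_def X Y)
  done

lemma refl_morph_weak_equivalence: "weak_equivalence B PB refl_morph"
  unfolding weak_equivalence_def
proof (intro conjI ballI)
  fix Y assume "Y \<in> obj PB"
  then obtain f where f: "Y = [In1 f]" "f \<in> A1" by auto
  show "\<exists>X'\<in>obj B. \<exists>u\<in>arr1 PB. src1 PB u = Y \<and> trg1 PB u = fobj refl_morph X'"
    using f square_to_unit[of f]
    by (intro bexI[of _ "sr f"] bexI[of _ "Sq f (U (sr f)) (U (sr f)) (inv f) (vinv (Ee f) \<cdot> L (U (sr f)))"]) auto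
qed (rule refl_morph_hom_equivalence)

lemma ends_morph_fibration: "fibration PB (prod_bg B B) ends_morph"
  unfolding fibration_def
proof (intro conjI ballI impI)
  fix X' b assume X': "X' \<in> obj PB" and b: "b \<in> arr1 (prod_bg B B)" and t: "trg1 (prod_bg B B) b = fobj ends_morph X'"
  obtain f' where f': "X' = [In1 f']" "f' \<in> A1" using X' by auto
  obtain b1 b2 where bb: "b = (b1, b2)" "b1 \<in> A1" "b2 \<in> A1" using b by auto
  have tt: "tg b1 = sr f'" "tg b2 = tg f'" using t f' bb by auto
  show "\<exists>a\<in>arr1 PB. trg1 PB a = X' \<and> fobj ends_morph (src1 PB a) = src1 (prod_bg B B) b \<and> fone ends_morph a = b"
    using square_lift[OF f'(2) bb(2,3) tt] f' bb tt
    by (intro bexI[of _ "Sq (inv b2 \<diamond> (f' \<diamond> b1)) f' b1 b2 (lift_cell f' b1 b2)"]) auto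
next
  fix a' \<beta> assume a': "a' \<in> arr1 PB" and be: "\<beta> \<in> arr2 (prod_bg B B)" and c: "cod2 (prod_bg B B) \<beta> = fone ends_morph a'"
  obtain f f' a b s where u: "a' = Sq f f' a b s" "square f f' a b s" using a' by auto
  obtain \<beta>1 \<beta>2 where bb: "\<beta> = (\<beta>1, \<beta>2)" "\<beta>1 \<in> A2" "\<beta>2 \<in> A2" using be by auto
  have cc: "cd \<beta>1 = a" "cd \<beta>2 = b" using c u bb by auto
  show "\<exists>\<alpha>\<in>arr2 PB. cod2 PB \<alpha> = a' \<and> fone ends_morph (dom2 PB \<alpha>) = dom2 (prod_bg B B) \<beta> \<and> ftwo ends_morph \<alpha> = \<beta>"
    using square_map_lift[OF u(2) bb(2) cc(1) bb(3) cc(2)] u bb cc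
    by (intro bexI[of _ "SqMap f f' (dm \<beta>1) (dm \<beta>2) (vinv (\<beta>2 \<rhd> f) \<cdot> s \<cdot> (f' \<lhd> \<beta>1)) a b s \<beta>1 \<beta>2"]) auto
qed

lemma ends_refl_diag: "morph_eq B (morph_comp (prod_bg B B) ends_morph refl_morph) (diag B)"
  unfolding morph_eq_def morph_comp_def diag_def by simp

end

theorem lemma5p11:
  fixes B :: "('o,'a,'c) bigroupoid"
  assumes "bigroupoid B"
  shows "\<exists>(PB :: (('o,'a,'c) pcell, ('o,'a,'c) pcell, ('o,'a,'c) pcell) bigroupoid) R P.
           bigroupoid PB \<and>
           bgmorphism B PB R \<and> bgmorphism PB (prod_bg B B) P \<and>
           weak_equivalence B PB R \<and> fibration PB (prod_bg B B) P \<and>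
           morph_eq B (morph_comp (prod_bg B B) P R) (diag B)"
proof -
  interpret bigroupoid_calculus B by (rule bigroupoid_calculus.intro[OF assms])
  show ?thesis
    by (intro exI[of _ PB] exI[of _ refl_morph] exI[of _ ends_morph] conjI bigroupoid_PB
        refl_morph_bgmorphism ends_morph_bgmorphism refl_morph_weak_equivalence
        ends_morph_fibration ends_refl_diag)
qed

end
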